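(* Let $1\le p\le2$, let $a_1\ge a_2\ge\dots>0$ with $a_t\to0$, and $\Gamma=\{\boldsymbol\theta\in\mathbb{R}^\infty:\sum_{t\ge1}|\theta_t|^p/a_t^p\le1\}$. For $\epsilon>0$ and a positive integer $n$ let $d_l(\Gamma,n,\epsilon)=\max\{d: a_d^p\,n^{\frac{p-2}{2}}\ge192\,\epsilon^2\}$. If there is a test $\psi$ satisfying $\max_{i\in\{0,1\}}\sup_{H_i}\mathbb P(\psi\ne i)\le1/4$ in the LFHT problem for $\Gamma$ at scale $\epsilon$ with sample sizes $(m,n)$, then $$m\ge\frac1{\epsilon^2},\qquad n\ge\frac{\sqrt{d_l(\Gamma,n,\epsilon)}}{2\epsilon^2},\qquad mn\ge\frac{d_l(\Gamma,n,\epsilon)}{96\,\epsilon^4}.$$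
   Context: LFHT: unknown $\boldsymbol\theta^1,\boldsymbol\theta^2,\boldsymbol\theta\in\Gamma$ with $\|\boldsymbol\theta^1-\boldsymbol\theta^2\|_2\ge\epsilon$; independent data $\mathbf X$: $n$ i.i.d. samples of $\mathcal N(\boldsymbol\theta^1,I_\infty)$, $\mathbf Y$: $n$ i.i.d. samples of $\mathcal N(\boldsymbol\theta^2,I_\infty)$, $\mathbf Z$: $m$ i.i.d. samples of $\mathcal N(\boldsymbol\theta,I_\infty)$; $H_0:\boldsymbol\theta=\boldsymbol\theta^1$ vs $H_1:\boldsymbol\theta=\boldsymbol\theta^2$; $\psi=1$ rejects $H_0$; $\sup_{H_i}$ over admissible parameters with $\boldsymbol\theta=\boldsymbol\theta^{i+1}$. *)

theory Defs
  imports "HOL-Probability.Probability"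
begin

text \<open>Indexing convention: sequences are 0-based, i.e. the paper's a_t and theta_t
  (t >= 1) are represented by a (t - 1) and theta (t - 1).\<close>

definition Gamma_set :: "real \<Rightarrow> (nat \<Rightarrow> real) \<Rightarrow> (nat \<Rightarrow> real) set" where
  "Gamma_set p a = {\<theta>. summable (\<lambda>t. \<bar>\<theta> t\<bar> powr p / a t powr p)
                       \<and> (\<Sum>t. \<bar>\<theta> t\<bar> powr p / a t powr p) \<le> 1}"

definition l2_dist :: "(nat \<Rightarrow> real) \<Rightarrow> (nat \<Rightarrow> real) \<Rightarrow> real" where
  "l2_dist x y = sqrt (\<Sum>t. (x t - y t)\<^sup>2)"

definition gauss_seq :: "(nat \<Rightarrow> real) \<Rightarrow> (nat \<Rightarrow> real) measure" where
  "gauss_seq \<theta> = (\<Pi>\<^sub>M t\<in>UNIV. density lborel (normal_density (\<theta> t) 1))"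

definition lfht_law :: "nat \<Rightarrow> nat \<Rightarrow> (nat \<Rightarrow> real) \<Rightarrow> (nat \<Rightarrow> real) \<Rightarrow> (nat \<Rightarrow> real)
    \<Rightarrow> (((nat \<Rightarrow> nat \<Rightarrow> real) \<times> (nat \<Rightarrow> nat \<Rightarrow> real)) \<times> (nat \<Rightarrow> nat \<Rightarrow> real)) measure" where
  "lfht_law n m \<theta>1 \<theta>2 \<theta> =
     ((\<Pi>\<^sub>M i\<in>{..<n}. gauss_seq \<theta>1) \<Otimes>\<^sub>M (\<Pi>\<^sub>M i\<in>{..<n}. gauss_seq \<theta>2))
       \<Otimes>\<^sub>M (\<Pi>\<^sub>M i\<in>{..<m}. gauss_seq \<theta>)"

definition lfht_space :: "nat \<Rightarrow> nat
    \<Rightarrow> (((nat \<Rightarrow> nat \<Rightarrow> real) \<times> (nat \<Rightarrow> nat \<Rightarrow> real)) \<times> (nat \<Rightarrow> nat \<Rightarrow> real)) measure" where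
  "lfht_space n m =
     ((\<Pi>\<^sub>M i\<in>{..<n}. \<Pi>\<^sub>M t\<in>UNIV. borel) \<Otimes>\<^sub>M (\<Pi>\<^sub>M i\<in>{..<n}. \<Pi>\<^sub>M t\<in>UNIV. borel))
       \<Otimes>\<^sub>M (\<Pi>\<^sub>M i\<in>{..<m}. \<Pi>\<^sub>M t\<in>UNIV. borel)"

text \<open>psi is a test for the LFHT problem for Gamma at scale eps with sample sizes (m,n)
  achieving max_i sup_{H_i} P(psi ~= i) <= 1/4.  psi = 1 means rejecting H_0.\<close>
definition good_lfht_test ::
  "real \<Rightarrow> (nat \<Rightarrow> real) \<Rightarrow> real \<Rightarrow> nat \<Rightarrow> nat
     \<Rightarrow> ((((nat \<Rightarrow> nat \<Rightarrow> real) \<times> (nat \<Rightarrow> nat \<Rightarrow> real)) \<times> (nat \<Rightarrow> nat \<Rightarrow> real)) \<Rightarrow> nat) \<Rightarrow> bool" where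
  "good_lfht_test p a \<epsilon> m n \<psi> \<longleftrightarrow>
     \<psi> \<in> lfht_space n m \<rightarrow>\<^sub>M count_space {0, 1} \<and>
     (\<forall>\<theta>1\<in>Gamma_set p a. \<forall>\<theta>2\<in>Gamma_set p a. l2_dist \<theta>1 \<theta>2 \<ge> \<epsilon> \<longrightarrow>
        measure (lfht_law n m \<theta>1 \<theta>2 \<theta>1) {\<omega> \<in> space (lfht_law n m \<theta>1 \<theta>2 \<theta>1). \<psi> \<omega> \<noteq> 0} \<le> 1/4 \<and>
        measure (lfht_law n m \<theta>1 \<theta>2 \<theta>2) {\<omega> \<in> space (lfht_law n m \<theta>1 \<theta>2 \<theta>2). \<psi> \<omega> \<noteq> 1} \<le> 1/4)"

text \<open>d_l(Gamma, n, eps) = max {d >= 1 : a_d^p n^((p-2)/2) >= 192 eps^2}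
  (with a_d = a (d - 1)); taken to be 0 if the set is empty.\<close>
definition d_l :: "real \<Rightarrow> (nat \<Rightarrow> real) \<Rightarrow> nat \<Rightarrow> real \<Rightarrow> nat" where
  "d_l p a n \<epsilon> =
     (let D = {d::nat. 1 \<le> d \<and> a (d - 1) powr p * real n powr ((p - 2) / 2) \<ge> 192 * \<epsilon>\<^sup>2}
      in if D = {} then 0 else Max D)"

end

theory Submission
  imports Defs
begin

text \<open>
  Le Cam's method. All data are one Gaussian vector, and for parameters supported on finitely
  many coordinates their laws have explicit likelihood ratios against pure noise. A test erring
  with probability at most \<open>1/4\<close> under every admissible pair forces the \<open>L\<^sup>1\<close> distance between
  the likelihood ratios of any mixture of null laws and any mixture of alternatives to be at
  least \<open>1\<close>. Three priors then give the three bounds.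
  Two points \<open>\<plusminus>\<epsilon>/2\<close> on one coordinate, compared through the Hellinger affinity, give
  \<open>m \<epsilon>\<^sup>2 \<ge> 1\<close> and \<open>2 n \<epsilon>\<^sup>2 \<ge> 1\<close>.
  For the other two, cut \<open>d = d\<^sub>l\<close> coordinates into \<open>s\<close> blocks of length \<open>k\<close> and put one spike
  \<open>\<plusminus>\<rho>\<close> of random position and sign into each block; the definition of \<open>d\<^sub>l\<close> is what keeps these
  spike sequences \<open>\<eta>\<close> inside \<open>\<Gamma>\<close>. Moving \<open>\<eta>\<close> from the \<open>Y\<close>-sample to the \<open>X\<close>-sample changes the
  law by a \<open>\<chi>\<^sup>2\<close>-amount of order \<open>s (n \<rho>\<^sup>2)\<^sup>2 / k\<close>, which forces \<open>d \<le> 4 (n \<epsilon>\<^sup>2)\<^sup>2\<close>. Drawing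
  \<open>(\<eta>, -\<eta>, \<plusminus>\<eta>)\<close> instead, the \<open>\<chi>\<^sup>2\<close> divergence factorises over the independent blocks into
  terms \<open>1 + O(n m \<rho>\<^sup>4 / k)\<close>, which forces \<open>d \<le> 96 (m \<epsilon>\<^sup>2) (n \<epsilon>\<^sup>2)\<close>.
\<close>

section \<open>Gaussian measures\<close>

definition gauss :: "real \<Rightarrow> real measure" where
  "gauss a = density lborel (normal_density a 1)"

lemma prob_space_gauss: "prob_space (gauss a)"
  unfolding gauss_def by (rule prob_space_normal_density) simp

lemma sets_gauss[simp, measurable_cong]: "sets (gauss a) = sets borel"
  by (simp add: gauss_def)

lemma space_gauss[simp]: "space (gauss a) = UNIV"
  by (simp add: gauss_def)

text \<open>The three samples are laid out in one array of coordinates \<open>(c, i, t)\<close>: group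
  \<open>c \<in> {0, 1, 2}\<close> (for \<open>X\<close>, \<open>Y\<close>, \<open>Z\<close>), sample \<open>i\<close>, and sequence index \<open>t\<close>.\<close>

type_synonym coord = "nat \<times> nat \<times> nat"

definition gauss_field :: "(coord \<Rightarrow> real) \<Rightarrow> (coord \<Rightarrow> real) measure" where
  "gauss_field \<mu> = PiM UNIV (\<lambda>k. gauss (\<mu> k))"

abbreviation std_field :: "(coord \<Rightarrow> real) measure" where
  "std_field \<equiv> gauss_field (\<lambda>_. 0)"

lemma distr_PiM_gauss_component:
  "distr (PiM UNIV (\<lambda>k. gauss (\<mu> k))) (gauss (\<mu> k)) (\<lambda>\<omega>. \<omega> k) = gauss (\<mu> k)"
proof -
  interpret product_prob_space "\<lambda>k. gauss (\<mu> k)" UNIV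
    by (simp add: product_prob_space_def product_sigma_finite_def prob_space_gauss
        prob_space_imp_sigma_finite product_prob_space_axioms_def)
  show ?thesis by (rule PiM_component) simp
qed

lemma prob_space_gauss_field: "prob_space (gauss_field \<mu>)"
  unfolding gauss_field_def by (rule prob_space_PiM) (rule prob_space_gauss)

lemma sets_gauss_field[measurable_cong]:
  "sets (gauss_field \<mu>) = sets (PiM UNIV (\<lambda>_. borel) :: (coord \<Rightarrow> real) measure)"
  unfolding gauss_field_def by (rule sets_PiM_cong) auto

lemma space_gauss_field[simp]: "space (gauss_field \<mu>) = UNIV"
  unfolding gauss_field_def by (simp add: space_PiM)

lemma nn_integral_gauss:
  fixes g :: "real \<Rightarrow> ennreal"
  assumes "g \<in> borel_measurable borel"
  shows "(\<integral>\<^sup>+x. g x \<partial>gauss a) = (\<integral>\<^sup>+x. ennreal (normal_density a 1 x) * g x \<partial>lborel)"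
  unfolding gauss_def using assms by (subst nn_integral_density) auto

lemma normal_density_mult_exp:
  "normal_density a 1 x * exp (c * x) = exp (c * a + c\<^sup>2 / 2) * normal_density (a + c) 1 x"
proof -
  have "exp (-(x - a)\<^sup>2 / 2) * exp (c * x) = exp (c * a + c\<^sup>2 / 2) * exp (-(x - (a + c))\<^sup>2 / 2)"
    unfolding exp_add[symmetric] by (simp add: power2_eq_square field_simps)
  then show ?thesis unfolding normal_density_def by (simp add: field_simps)
qed

lemma nn_integral_normal_density: "(\<integral>\<^sup>+x. ennreal (normal_density a 1 x) \<partial>lborel) = 1"
proof -
  have "emeasure (density lborel (normal_density a 1)) UNIV = 1"
    using prob_space.emeasure_space_1[OF prob_space_normal_density[of 1 a]] by simp
  then show ?thesis by (simp add: emeasure_density)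
qed

lemma nn_integral_exp_gauss:
  "(\<integral>\<^sup>+x. ennreal (exp (c * x)) \<partial>gauss a) = ennreal (exp (c * a + c\<^sup>2 / 2))"
proof -
  have "(\<integral>\<^sup>+x. ennreal (exp (c * x)) \<partial>gauss a)
      = (\<integral>\<^sup>+x. ennreal (normal_density a 1 x) * ennreal (exp (c * x)) \<partial>lborel)"
    by (rule nn_integral_gauss) auto
  also have "\<dots> = (\<integral>\<^sup>+x. ennreal (exp (c * a + c\<^sup>2 / 2)) * ennreal (normal_density (a + c) 1 x) \<partial>lborel)"
    by (intro nn_integral_cong) (simp add: ennreal_mult'[symmetric] normal_density_mult_exp)
  also have "\<dots> = ennreal (exp (c * a + c\<^sup>2 / 2))"
    by (subst nn_integral_cmult) (auto simp: nn_integral_normal_density)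
  finally show ?thesis .
qed

lemma emeasure_gauss_shift:
  assumes A: "A \<in> sets borel"
  shows "(\<integral>\<^sup>+x. ennreal (indicator A x * exp (c * x - c\<^sup>2 / 2)) \<partial>gauss 0) = emeasure (gauss c) A"
proof -
  have "(\<integral>\<^sup>+x. ennreal (indicator A x * exp (c * x - c\<^sup>2 / 2)) \<partial>gauss 0)
     = (\<integral>\<^sup>+x. ennreal (normal_density 0 1 x) * ennreal (indicator A x * exp (c * x - c\<^sup>2 / 2)) \<partial>lborel)"
    using A by (intro nn_integral_gauss) auto
  also have "\<dots> = (\<integral>\<^sup>+x. ennreal (normal_density c 1 x) * indicator A x \<partial>lborel)"
  proof (intro nn_integral_cong)
    fix x
    have "normal_density 0 1 x * exp (c * x - c\<^sup>2 / 2) = normal_density c 1 x"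
      using normal_density_mult_exp[of 0 x c] by (simp add: exp_diff)
    then show "ennreal (normal_density 0 1 x) * ennreal (indicator A x * exp (c * x - c\<^sup>2 / 2)) =
        ennreal (normal_density c 1 x) * indicator A x"
      by (auto simp: ennreal_mult'[symmetric] indicator_def)
  qed
  also have "\<dots> = emeasure (gauss c) A"
    unfolding gauss_def using A by (simp add: emeasure_density nn_integral_set_ennreal)
  finally show ?thesis .
qed

lemma measurable_gauss_ennreal:
  "g \<in> borel_measurable borel \<Longrightarrow> (\<lambda>x. ennreal (g x)) \<in> borel_measurable (gauss a)"
  by (simp add: measurable_cong_sets[OF sets_gauss refl])

lemma indep_vars_gauss_field:
  "prob_space.indep_vars (gauss_field \<mu>) (\<lambda>k. gauss (\<mu> k)) (\<lambda>k \<omega>. \<omega> k) UNIV"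
proof -
  interpret P: prob_space "gauss_field \<mu>" by (rule prob_space_gauss_field)
  show ?thesis
  proof (subst P.indep_vars_iff_distr_eq_PiM')
    show "distr (gauss_field \<mu>) (Pi\<^sub>M UNIV (\<lambda>k. gauss (\<mu> k))) (\<lambda>x. \<lambda>i\<in>UNIV. x i) =
      Pi\<^sub>M UNIV (\<lambda>i. distr (gauss_field \<mu>) (gauss (\<mu> i)) (\<lambda>\<omega>. \<omega> i))"
      unfolding gauss_field_def restrict_UNIV by (simp add: distr_PiM_gauss_component[of \<mu>])
  qed (auto simp: gauss_field_def)
qed

lemma nn_integral_gauss_field_coord:
  assumes "g \<in> borel_measurable borel"
  shows "(\<integral>\<^sup>+\<omega>. ennreal (g (\<omega> k)) \<partial>gauss_field \<mu>) = (\<integral>\<^sup>+x. ennreal (g x) \<partial>gauss (\<mu> k))"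
proof -
  have "(\<integral>\<^sup>+\<omega>. ennreal (g (\<omega> k)) \<partial>gauss_field \<mu>)
      = (\<integral>\<^sup>+x. ennreal (g x) \<partial>distr (gauss_field \<mu>) (gauss (\<mu> k)) (\<lambda>\<omega>. \<omega> k))"
    by (subst nn_integral_distr) (auto simp: gauss_field_def assms measurable_gauss_ennreal)
  also have "\<dots> = (\<integral>\<^sup>+x. ennreal (g x) \<partial>gauss (\<mu> k))"
    unfolding gauss_field_def by (simp add: distr_PiM_gauss_component[of \<mu>])
  finally show ?thesis .
qed

lemma nn_integral_gauss_field_prod:
  assumes F: "finite F" and g: "\<And>k. g k \<in> borel_measurable borel" and nn: "\<And>k x. 0 \<le> g k x"
  shows "(\<integral>\<^sup>+\<omega>. ennreal (\<Prod>k\<in>F. g k (\<omega> k)) \<partial>gauss_field \<mu>)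
    = (\<Prod>k\<in>F. \<integral>\<^sup>+x. ennreal (g k x) \<partial>gauss (\<mu> k))"
proof -
  interpret P: prob_space "gauss_field \<mu>" by (rule prob_space_gauss_field)
  have ind: "P.indep_vars (\<lambda>_. borel) (\<lambda>k \<omega>. ennreal (g k (\<omega> k))) F"
    by (rule P.indep_vars_subset[OF P.indep_vars_compose2[OF indep_vars_gauss_field]])
      (auto intro!: measurable_gauss_ennreal simp: g)
  have "(\<integral>\<^sup>+\<omega>. ennreal (\<Prod>k\<in>F. g k (\<omega> k)) \<partial>gauss_field \<mu>)
      = (\<integral>\<^sup>+\<omega>. (\<Prod>k\<in>F. ennreal (g k (\<omega> k))) \<partial>gauss_field \<mu>)"
    by (simp add: prod_ennreal nn)
  also have "\<dots> = (\<Prod>k\<in>F. \<integral>\<^sup>+\<omega>. ennreal (g k (\<omega> k)) \<partial>gauss_field \<mu>)"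
    by (rule P.indep_vars_nn_integral[OF F ind]) simp
  also have "\<dots> = (\<Prod>k\<in>F. \<integral>\<^sup>+x. ennreal (g k x) \<partial>gauss (\<mu> k))"
    by (intro prod.cong refl nn_integral_gauss_field_coord g)
  finally show ?thesis .
qed

lemma nn_integral_exp_gauss_field:
  assumes F: "finite F"
  shows "(\<integral>\<^sup>+\<omega>. ennreal (exp (\<Sum>k\<in>F. c k * \<omega> k)) \<partial>gauss_field \<nu>)
    = ennreal (exp (\<Sum>k\<in>F. c k * \<nu> k + (c k)\<^sup>2 / 2))"
proof -
  have "(\<integral>\<^sup>+\<omega>. ennreal (exp (\<Sum>k\<in>F. c k * \<omega> k)) \<partial>gauss_field \<nu>)
      = (\<integral>\<^sup>+\<omega>. ennreal (\<Prod>k\<in>F. exp (c k * \<omega> k)) \<partial>gauss_field \<nu>)"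
    by (simp add: exp_sum F)
  also have "\<dots> = (\<Prod>k\<in>F. \<integral>\<^sup>+x. ennreal (exp (c k * x)) \<partial>gauss (\<nu> k))"
    by (rule nn_integral_gauss_field_prod[OF F]) auto
  also have "\<dots> = ennreal (exp (\<Sum>k\<in>F. c k * \<nu> k + (c k)\<^sup>2 / 2))"
    by (simp add: nn_integral_exp_gauss prod_ennreal exp_sum F)
  finally show ?thesis .
qed

text \<open>The likelihood ratio \<open>dN(\<mu>, I) / dN(0, I)\<close> of a mean vector \<open>\<mu>\<close> supported on the finite set \<open>F\<close>.\<close>

definition gauss_lr :: "coord set \<Rightarrow> (coord \<Rightarrow> real) \<Rightarrow> (coord \<Rightarrow> real) \<Rightarrow> real" where
  "gauss_lr F \<mu> \<omega> = exp (\<Sum>k\<in>F. \<mu> k * \<omega> k - (\<mu> k)\<^sup>2 / 2)"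

lemma gauss_lr_pos: "0 < gauss_lr F \<mu> \<omega>"
  by (simp add: gauss_lr_def)

lemma gauss_lr_measurable[measurable]: "gauss_lr F \<mu> \<in> borel_measurable (gauss_field \<nu>)"
  unfolding gauss_lr_def by (simp add: measurable_cong_sets[OF sets_gauss_field refl])

lemma gauss_lr_measurable_PiM:
  assumes "F \<subseteq> G"
  shows "gauss_lr F \<mu> \<in> borel_measurable (PiM G (\<lambda>_. borel))"
proof -
  have "(\<lambda>\<omega>. \<mu> k * \<omega> k - (\<mu> k)\<^sup>2 / 2) \<in> borel_measurable (PiM G (\<lambda>_. borel))" if "k \<in> F" for k
  proof -
    have "(\<lambda>\<omega>. \<omega> k) \<in> borel_measurable (PiM G (\<lambda>_. borel))"
      using that assms by (intro measurable_component_singleton) auto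
    then show ?thesis by measurable
  qed
  then have "(\<lambda>\<omega>. \<Sum>k\<in>F. \<mu> k * \<omega> k - (\<mu> k)\<^sup>2 / 2) \<in> borel_measurable (PiM G (\<lambda>_. borel))"
    by (rule borel_measurable_sum)
  then show ?thesis unfolding gauss_lr_def by (rule measurable_compose) (rule borel_measurable_exp)
qed

lemma gauss_lr_restrict: "F \<subseteq> G \<Longrightarrow> gauss_lr F \<mu> (restrict \<omega> G) = gauss_lr F \<mu> \<omega>"
  unfolding gauss_lr_def by (intro arg_cong[where f=exp] sum.cong refl) auto

lemma nn_integral_gauss_lr:
  assumes F: "finite F"
  shows "(\<integral>\<^sup>+\<omega>. ennreal (gauss_lr F \<mu> \<omega>) \<partial>std_field) = 1"
proof -
  have "gauss_lr F \<mu> \<omega> = exp (- (\<Sum>k\<in>F. (\<mu> k)\<^sup>2 / 2)) * exp (\<Sum>k\<in>F. \<mu> k * \<omega> k)" for \<omega>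
    unfolding gauss_lr_def by (simp add: sum_subtractf exp_add[symmetric])
  then have "(\<integral>\<^sup>+\<omega>. ennreal (gauss_lr F \<mu> \<omega>) \<partial>std_field) =
     (\<integral>\<^sup>+\<omega>. ennreal (exp (- (\<Sum>k\<in>F. (\<mu> k)\<^sup>2 / 2))) * ennreal (exp (\<Sum>k\<in>F. \<mu> k * \<omega> k)) \<partial>std_field)"
    by (simp add: ennreal_mult')
  also have "\<dots> = ennreal (exp (- (\<Sum>k\<in>F. (\<mu> k)\<^sup>2 / 2))) * ennreal (exp (\<Sum>k\<in>F. \<mu> k * 0 + (\<mu> k)\<^sup>2 / 2))"
    by (subst nn_integral_cmult) (auto simp: nn_integral_exp_gauss_field[OF F])
  also have "\<dots> = 1"
    by (simp add: ennreal_mult'[symmetric] exp_add[symmetric])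
  finally show ?thesis .
qed

lemma integrable_gauss_lr: "finite F \<Longrightarrow> integrable std_field (gauss_lr F \<mu>)"
  by (rule integrableI_nonneg) (auto simp: nn_integral_gauss_lr gauss_lr_pos less_imp_le)

lemma integral_gauss_lr: "finite F \<Longrightarrow> integral\<^sup>L std_field (gauss_lr F \<mu>) = 1"
  using nn_integral_eq_integral[OF integrable_gauss_lr, of F \<mu>] nn_integral_gauss_lr[of F \<mu>]
  by (simp add: gauss_lr_pos less_imp_le)

lemma gauss_lr_mult_indicator_cylinder:
  assumes F: "finite F" and supp: "\<And>k. k \<notin> F \<Longrightarrow> \<mu> k = 0" and J: "finite J"
  shows "gauss_lr F \<mu> \<omega> * indicator (prod_emb UNIV (\<lambda>k. gauss (\<mu> k)) J (Pi\<^sub>E J A)) \<omega>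
    = (\<Prod>k\<in>J \<union> F. (if k \<in> J then indicator (A k) (\<omega> k) else 1) * exp (\<mu> k * \<omega> k - (\<mu> k)\<^sup>2 / 2))"
proof -
  have "(\<Prod>k\<in>J \<union> F. if k \<in> J then indicator (A k) (\<omega> k) else 1) = (\<Prod>k\<in>J. indicator (A k) (\<omega> k) :: real)"
    using J F by (subst prod.If_cases) (auto simp: Int_absorb2)
  also have "\<dots> = indicator (prod_emb UNIV (\<lambda>k. gauss (\<mu> k)) J (Pi\<^sub>E J A)) \<omega>"
    using J by (auto simp: prod_emb_def indicator_def space_PiM PiE_iff prod_zero_iff)
  finally have "(\<Prod>k\<in>J \<union> F. if k \<in> J then indicator (A k) (\<omega> k) else 1)
      = (indicator (prod_emb UNIV (\<lambda>k. gauss (\<mu> k)) J (Pi\<^sub>E J A)) \<omega> :: real)" .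
  moreover have "(\<Prod>k\<in>J \<union> F. exp (\<mu> k * \<omega> k - (\<mu> k)\<^sup>2 / 2)) = gauss_lr F \<mu> \<omega>"
    using J F supp unfolding gauss_lr_def by (simp add: exp_sum prod.mono_neutral_right)
  ultimately show ?thesis
    by (simp add: prod.distrib mult.commute)
qed

lemma nn_integral_gauss_lr_cylinder:
  assumes F: "finite F" and supp: "\<And>k. k \<notin> F \<Longrightarrow> \<mu> k = 0"
    and J: "finite J" and A: "\<And>k. k \<in> J \<Longrightarrow> A k \<in> sets borel"
  shows "(\<integral>\<^sup>+\<omega>. ennreal (gauss_lr F \<mu> \<omega>) * indicator (prod_emb UNIV (\<lambda>k. gauss (\<mu> k)) J (Pi\<^sub>E J A)) \<omega> \<partial>std_field)
    = (\<Prod>k\<in>J. emeasure (gauss (\<mu> k)) (A k))"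
proof -
  define h where "h k x = (if k \<in> J then indicator (A k) x else 1) * exp (\<mu> k * x - (\<mu> k)\<^sup>2 / 2)" for k x
  have h_meas: "h k \<in> borel_measurable borel" for k
  proof (cases "k \<in> J")
    case True
    then have [measurable]: "A k \<in> sets borel" by (rule A)
    show ?thesis unfolding h_def by measurable
  next
    case False
    then show ?thesis unfolding h_def by simp
  qed
  have h_int: "(\<integral>\<^sup>+x. ennreal (h k x) \<partial>gauss 0) = (if k \<in> J then emeasure (gauss (\<mu> k)) (A k) else 1)" for k
    using emeasure_gauss_shift[OF A, of k "\<mu> k"] emeasure_gauss_shift[of UNIV "\<mu> k"]
      prob_space.emeasure_space_1[OF prob_space_gauss, of "\<mu> k"]
    by (cases "k \<in> J") (auto simp: h_def)
  have "ennreal (gauss_lr F \<mu> \<omega>) * indicator (prod_emb UNIV (\<lambda>k. gauss (\<mu> k)) J (Pi\<^sub>E J A)) \<omega>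
      = ennreal (\<Prod>k\<in>J \<union> F. h k (\<omega> k))" for \<omega>
  proof -
    have "ennreal (gauss_lr F \<mu> \<omega>) * indicator (prod_emb UNIV (\<lambda>k. gauss (\<mu> k)) J (Pi\<^sub>E J A)) \<omega>
        = ennreal (gauss_lr F \<mu> \<omega> * indicator (prod_emb UNIV (\<lambda>k. gauss (\<mu> k)) J (Pi\<^sub>E J A)) \<omega>)"
      by (simp add: indicator_def)
    also have "\<dots> = ennreal (\<Prod>k\<in>J \<union> F. h k (\<omega> k))"
      unfolding h_def by (rule arg_cong[where f=ennreal], rule gauss_lr_mult_indicator_cylinder[OF F supp J])
    finally show ?thesis .
  qed
  then have "(\<integral>\<^sup>+\<omega>. ennreal (gauss_lr F \<mu> \<omega>) * indicator (prod_emb UNIV (\<lambda>k. gauss (\<mu> k)) J (Pi\<^sub>E J A)) \<omega> \<partial>std_field)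
      = (\<integral>\<^sup>+\<omega>. ennreal (\<Prod>k\<in>J \<union> F. h k (\<omega> k)) \<partial>std_field)"
    by simp
  also have "\<dots> = (\<Prod>k\<in>J \<union> F. \<integral>\<^sup>+x. ennreal (h k x) \<partial>gauss 0)"
    using J F by (intro nn_integral_gauss_field_prod h_meas) (auto simp: h_def)
  also have "\<dots> = (\<Prod>k\<in>J \<union> F. if k \<in> J then emeasure (gauss (\<mu> k)) (A k) else 1)"
    by (simp only: h_int)
  also have "\<dots> = (\<Prod>k\<in>J. emeasure (gauss (\<mu> k)) (A k))"
    using J F by (subst prod.If_cases) (auto simp: Int_absorb2)
  finally show ?thesis .
qed

lemma gauss_field_eq_density:
  assumes F: "finite F" and supp: "\<And>k. k \<notin> F \<Longrightarrow> \<mu> k = 0"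
  shows "gauss_field \<mu> = density std_field (\<lambda>\<omega>. ennreal (gauss_lr F \<mu> \<omega>))"
proof (rule measure_eqI_PiM_infinite[where I=UNIV and M="\<lambda>k. gauss (\<mu> k)"])
  show "sets (gauss_field \<mu>) = sets (PiM UNIV (\<lambda>k. gauss (\<mu> k)))"
    by (simp add: gauss_field_def)
  show "sets (density std_field (\<lambda>\<omega>. ennreal (gauss_lr F \<mu> \<omega>))) = sets (PiM UNIV (\<lambda>k. gauss (\<mu> k)))"
    by (simp add: gauss_field_def cong: sets_PiM_cong)
  show "finite_measure (gauss_field \<mu>)"
    using prob_space_gauss_field prob_space_def by blast
next
  fix A J assume J: "finite J" and A: "\<And>i. i \<in> J \<Longrightarrow> A i \<in> sets (gauss (\<mu> i))"
  let ?C = "prod_emb UNIV (\<lambda>k. gauss (\<mu> k)) J (Pi\<^sub>E J A)"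
  have C: "?C \<in> sets std_field"
  proof -
    have "?C = prod_emb UNIV (\<lambda>_. gauss 0) J (Pi\<^sub>E J A)"
      by (simp add: prod_emb_def)
    then show ?thesis unfolding gauss_field_def using J A by (auto intro!: sets_PiM_I)
  qed
  have "emeasure (gauss_field \<mu>) ?C = (\<Prod>k\<in>J. emeasure (gauss (\<mu> k)) (A k))"
    unfolding gauss_field_def using J A by (intro emeasure_PiM_emb) (auto intro: prob_space_gauss)
  also have "\<dots> = emeasure (density std_field (\<lambda>\<omega>. ennreal (gauss_lr F \<mu> \<omega>))) ?C"
    using C A by (simp add: emeasure_density nn_integral_gauss_lr_cylinder[OF F supp J])
  finally show "emeasure (gauss_field \<mu>) ?C = emeasure (density std_field (\<lambda>\<omega>. ennreal (gauss_lr F \<mu> \<omega>))) ?C" .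
qed

section \<open>The data as one Gaussian field\<close>

definition lfht_mean :: "nat \<Rightarrow> nat \<Rightarrow> (nat \<Rightarrow> real) \<Rightarrow> (nat \<Rightarrow> real) \<Rightarrow> (nat \<Rightarrow> real) \<Rightarrow> coord \<Rightarrow> real" where
  "lfht_mean n m \<theta>1 \<theta>2 \<theta> = (\<lambda>(c, i, t). if c = 0 \<and> i < n then \<theta>1 t else if c = 1 \<and> i < n then \<theta>2 t
      else if c = 2 \<and> i < m then \<theta> t else 0)"

definition data_rows :: "nat \<Rightarrow> nat \<Rightarrow> (coord \<Rightarrow> real) \<Rightarrow> nat \<Rightarrow> nat \<Rightarrow> real" where
  "data_rows c N \<omega> = (\<lambda>i\<in>{..<N}. \<lambda>t\<in>UNIV. \<omega> (c, i, t))"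

definition lfht_data :: "nat \<Rightarrow> nat \<Rightarrow> (coord \<Rightarrow> real) \<Rightarrow> ((nat \<Rightarrow> nat \<Rightarrow> real) \<times> (nat \<Rightarrow> nat \<Rightarrow> real)) \<times> (nat \<Rightarrow> nat \<Rightarrow> real)" where
  "lfht_data n m \<omega> = ((data_rows 0 n \<omega>, data_rows 1 n \<omega>), data_rows 2 m \<omega>)"

abbreviation seq_space :: "(nat \<Rightarrow> real) measure" where "seq_space \<equiv> PiM UNIV (\<lambda>_. borel)"
abbreviation rows_space :: "nat \<Rightarrow> (nat \<Rightarrow> nat \<Rightarrow> real) measure" where "rows_space N \<equiv> PiM {..<N} (\<lambda>_. seq_space)"

lemma data_rows_measurable[measurable]: "data_rows c N \<in> gauss_field \<mu> \<rightarrow>\<^sub>M rows_space N"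
  unfolding data_rows_def by (simp add: measurable_cong_sets[OF sets_gauss_field refl])

lemma lfht_data_measurable[measurable]: "lfht_data n m \<in> gauss_field \<mu> \<rightarrow>\<^sub>M lfht_space n m"
  unfolding lfht_data_def lfht_space_def by measurable

lemma data_row_measurable[measurable]: "(\<lambda>\<omega> t. \<omega> (c, i, t)) \<in> gauss_field \<mu> \<rightarrow>\<^sub>M seq_space"
proof -
  have "(\<lambda>\<omega>. \<lambda>t\<in>UNIV. \<omega> (c, i, t)) \<in> gauss_field \<mu> \<rightarrow>\<^sub>M seq_space"
    by (simp add: measurable_cong_sets[OF sets_gauss_field refl])
  then show ?thesis by (simp add: restrict_UNIV)
qed

lemma indep_vars_data_rows:
  "prob_space.indep_vars (gauss_field \<mu>) (\<lambda>_. seq_space) (\<lambda>i \<omega> t. \<omega> (c, i, t)) I"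
proof -
  interpret P: prob_space "gauss_field \<mu>" by (rule prob_space_gauss_field)
  define K :: "nat \<Rightarrow> coord set" where "K i = {(c, i, t) | t. True}" for i
  have ind: "P.indep_vars (\<lambda>i. PiM (K i) (\<lambda>k. gauss (\<mu> k))) (\<lambda>i \<omega>. restrict (\<lambda>k. \<omega> k) (K i)) I"
    by (rule P.indep_vars_restrict[OF indep_vars_gauss_field]) (auto simp: K_def disjoint_family_on_def)
  have row: "(\<lambda>r t. r (c, i, t)) \<in> PiM (K i) (\<lambda>k. gauss (\<mu> k)) \<rightarrow>\<^sub>M seq_space" for i
  proof (rule measurable_PiM_single')
    fix t
    have "(\<lambda>r. r (c, i, t)) \<in> PiM (K i) (\<lambda>k. gauss (\<mu> k)) \<rightarrow>\<^sub>M gauss (\<mu> (c, i, t))"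
      by (rule measurable_component_singleton) (simp add: K_def)
    then show "(\<lambda>r. r (c, i, t)) \<in> PiM (K i) (\<lambda>k. gauss (\<mu> k)) \<rightarrow>\<^sub>M borel"
      by (simp add: measurable_cong_sets[OF refl sets_gauss])
  qed simp
  have "P.indep_vars (\<lambda>_. seq_space) (\<lambda>i \<omega>. (\<lambda>r t. r (c, i, t)) (restrict (\<lambda>k. \<omega> k) (K i))) I"
    by (rule P.indep_vars_compose2[OF ind row])
  then show ?thesis
    by (subst (asm) P.indep_vars_cong[OF refl _ refl, where Y="\<lambda>i \<omega> t. \<omega> (c, i, t)"])
      (auto simp: K_def fun_eq_iff)
qed

lemma distr_data_row:
  "distr (gauss_field \<mu>) seq_space (\<lambda>\<omega> t. \<omega> (c, i, t)) = PiM UNIV (\<lambda>t. gauss (\<mu> (c, i, t)))"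
proof -
  have "distr (gauss_field \<mu>) seq_space (\<lambda>\<omega> t. \<omega> (c, i, t)) =
        distr (PiM UNIV (\<lambda>k. gauss (\<mu> k))) (PiM UNIV (\<lambda>t. gauss (\<mu> (c, i, t)))) (\<lambda>\<omega>. \<lambda>t\<in>UNIV. \<omega> (c, i, t))"
    unfolding gauss_field_def restrict_UNIV by (rule distr_cong) (auto intro!: sets_PiM_cong)
  also have "\<dots> = PiM UNIV (\<lambda>t. gauss (\<mu> (c, i, t)))"
    by (rule distr_PiM_reindex[where f="\<lambda>t. (c, i, t)"]) (auto intro: prob_space_gauss inj_onI)
  finally show ?thesis .
qed

lemma distr_data_rows:
  assumes N: "0 < N" and eq: "\<And>i t. i < N \<Longrightarrow> \<mu> (c, i, t) = \<theta>c t"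
  shows "distr (gauss_field \<mu>) (rows_space N) (data_rows c N) = PiM {..<N} (\<lambda>_. gauss_seq \<theta>c)"
proof -
  interpret P: prob_space "gauss_field \<mu>" by (rule prob_space_gauss_field)
  have "distr (gauss_field \<mu>) (rows_space N) (\<lambda>x. \<lambda>i\<in>{..<N}. (\<lambda>\<omega> t. \<omega> (c, i, t)) x) =
        PiM {..<N} (\<lambda>i. distr (gauss_field \<mu>) seq_space (\<lambda>\<omega> t. \<omega> (c, i, t)))"
    using P.indep_vars_iff_distr_eq_PiM'[where I="{..<N}" and M'="\<lambda>_. seq_space"
        and X="\<lambda>i \<omega> t. \<omega> (c, i, t)"] indep_vars_data_rows N
    by auto
  also have "\<dots> = PiM {..<N} (\<lambda>_. gauss_seq \<theta>c)"
    unfolding distr_data_row gauss_seq_def using eq by (intro PiM_cong) (auto simp: gauss_def)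
  finally show ?thesis unfolding data_rows_def restrict_UNIV by simp
qed

lemma measurable_gauss_field_local:
  assumes f: "f \<in> PiM G (\<lambda>_. borel) \<rightarrow>\<^sub>M S" and local: "\<And>\<omega>. f (restrict \<omega> G) = F \<omega>"
  shows "F \<in> gauss_field \<mu> \<rightarrow>\<^sub>M S"
proof -
  have "(\<lambda>\<omega>. restrict \<omega> G) \<in> gauss_field \<mu> \<rightarrow>\<^sub>M PiM G (\<lambda>_. borel)"
    by (simp add: measurable_cong_sets[OF sets_gauss_field refl])
  then have "(\<lambda>\<omega>. f (restrict \<omega> G)) \<in> gauss_field \<mu> \<rightarrow>\<^sub>M S"
    using f by measurable
  then show ?thesis
    using local by simp
qed

lemma measure_gauss_field_local_pair:
  assumes AB: "A \<inter> B = {}"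
    and f: "f \<in> PiM A (\<lambda>_. borel) \<rightarrow>\<^sub>M S" and g: "g \<in> PiM B (\<lambda>_. borel) \<rightarrow>\<^sub>M T"
    and fF: "\<And>\<omega>. f (restrict \<omega> A) = F \<omega>" and gG: "\<And>\<omega>. g (restrict \<omega> B) = G \<omega>"
    and a: "a \<in> sets S" and b: "b \<in> sets T"
  shows "measure (gauss_field \<mu>) ((\<lambda>\<omega>. (F \<omega>, G \<omega>)) -` (a \<times> b))
    = measure (gauss_field \<mu>) (F -` a) * measure (gauss_field \<mu>) (G -` b)"
proof -
  interpret P: prob_space "gauss_field \<mu>" by (rule prob_space_gauss_field)
  let ?M = "\<lambda>k. gauss (\<mu> k)"
  have indep: "P.indep_var (PiM A ?M) (\<lambda>\<omega>. restrict (\<lambda>k. \<omega> k) A) (PiM B ?M) (\<lambda>\<omega>. restrict (\<lambda>k. \<omega> k) B)"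
    by (rule P.indep_var_restrict[OF indep_vars_gauss_field AB]) auto
  let ?Xa = "f -` a \<inter> space (PiM A ?M)" and ?Xb = "g -` b \<inter> space (PiM B ?M)"
  have Xa: "?Xa \<in> sets (PiM A ?M)" and Xb: "?Xb \<in> sets (PiM B ?M)"
    using measurable_sets[OF f a] measurable_sets[OF g b]
    by (simp_all add: sets_PiM_cong[OF refl sets_gauss] space_PiM)
  have sp: "restrict \<omega> A \<in> space (PiM A ?M)" "restrict \<omega> B \<in> space (PiM B ?M)" for \<omega>
    by (auto simp: space_PiM)
  have "(\<lambda>\<omega>. (restrict (\<lambda>k. \<omega> k) A, restrict (\<lambda>k. \<omega> k) B)) -` (?Xa \<times> ?Xb) \<inter> space (gauss_field \<mu>)
      = (\<lambda>\<omega>. (F \<omega>, G \<omega>)) -` (a \<times> b)"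
    "(\<lambda>\<omega>. restrict (\<lambda>k. \<omega> k) A) -` ?Xa \<inter> space (gauss_field \<mu>) = F -` a"
    "(\<lambda>\<omega>. restrict (\<lambda>k. \<omega> k) B) -` ?Xb \<inter> space (gauss_field \<mu>) = G -` b"
    using sp fF gG by auto
  then show ?thesis
    using P.indep_varD[OF indep Xa Xb] by simp
qed

lemma distr_gauss_field_pair:
  assumes AB: "A \<inter> B = {}"
    and f: "f \<in> PiM A (\<lambda>_. borel) \<rightarrow>\<^sub>M S" and g: "g \<in> PiM B (\<lambda>_. borel) \<rightarrow>\<^sub>M T"
    and fF: "\<And>\<omega>. f (restrict \<omega> A) = F \<omega>" and gG: "\<And>\<omega>. g (restrict \<omega> B) = G \<omega>"
  shows "distr (gauss_field \<mu>) (S \<Otimes>\<^sub>M T) (\<lambda>\<omega>. (F \<omega>, G \<omega>))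
    = distr (gauss_field \<mu>) S F \<Otimes>\<^sub>M distr (gauss_field \<mu>) T G"
proof (rule pair_measure_eqI[symmetric])
  interpret P: prob_space "gauss_field \<mu>" by (rule prob_space_gauss_field)
  have [measurable]: "F \<in> gauss_field \<mu> \<rightarrow>\<^sub>M S" "G \<in> gauss_field \<mu> \<rightarrow>\<^sub>M T"
    using measurable_gauss_field_local[OF f fF] measurable_gauss_field_local[OF g gG] by auto
  show "sigma_finite_measure (distr (gauss_field \<mu>) S F)" "sigma_finite_measure (distr (gauss_field \<mu>) T G)"
    by (rule prob_space_imp_sigma_finite, rule P.prob_space_distr, simp)+
  show "sets (distr (gauss_field \<mu>) S F \<Otimes>\<^sub>M distr (gauss_field \<mu>) T G)
      = sets (distr (gauss_field \<mu>) (S \<Otimes>\<^sub>M T) (\<lambda>\<omega>. (F \<omega>, G \<omega>)))"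
    by (simp cong: sets_pair_measure_cong)
  fix a b assume "a \<in> sets (distr (gauss_field \<mu>) S F)" and "b \<in> sets (distr (gauss_field \<mu>) T G)"
  then have a: "a \<in> sets S" and b: "b \<in> sets T"
    by auto
  then show "emeasure (distr (gauss_field \<mu>) S F) a * emeasure (distr (gauss_field \<mu>) T G) b =
      emeasure (distr (gauss_field \<mu>) (S \<Otimes>\<^sub>M T) (\<lambda>\<omega>. (F \<omega>, G \<omega>))) (a \<times> b)"
    using measure_gauss_field_local_pair[OF AB f g fF gG a b, of \<mu>]
    by (simp add: emeasure_distr P.emeasure_eq_measure ennreal_mult'[symmetric])
qed

lemma data_rows_measurable_restrict[measurable]:
  assumes "\<And>i t. (c, i, t) \<in> A"
  shows "data_rows c N \<in> PiM A (\<lambda>_. borel) \<rightarrow>\<^sub>M rows_space N"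
  unfolding data_rows_def using assms by measurable

lemma lfht_law_eq_distr:
  assumes n: "0 < n" and m: "0 < m"
  shows "lfht_law n m \<theta>1 \<theta>2 \<theta> = distr (gauss_field (lfht_mean n m \<theta>1 \<theta>2 \<theta>)) (lfht_space n m) (lfht_data n m)"
proof -
  let ?P = "gauss_field (lfht_mean n m \<theta>1 \<theta>2 \<theta>)"
  have "distr ?P (lfht_space n m) (lfht_data n m) = distr ?P ((rows_space n \<Otimes>\<^sub>M rows_space n) \<Otimes>\<^sub>M rows_space m)
      (\<lambda>\<omega>. ((data_rows 0 n \<omega>, data_rows 1 n \<omega>), data_rows 2 m \<omega>))"
    unfolding lfht_space_def lfht_data_def by simp
  also have "\<dots> = distr ?P (rows_space n \<Otimes>\<^sub>M rows_space n) (\<lambda>\<omega>. (data_rows 0 n \<omega>, data_rows 1 n \<omega>))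
      \<Otimes>\<^sub>M distr ?P (rows_space m) (data_rows 2 m)"
    by (rule distr_gauss_field_pair[where A="{k. fst k \<in> {0,1}}" and B="{k. fst k = 2}"
          and f="\<lambda>\<omega>. (data_rows 0 n \<omega>, data_rows 1 n \<omega>)" and g="data_rows 2 m"])
      (auto simp: data_rows_def fun_eq_iff)
  also have "distr ?P (rows_space n \<Otimes>\<^sub>M rows_space n) (\<lambda>\<omega>. (data_rows 0 n \<omega>, data_rows 1 n \<omega>))
      = distr ?P (rows_space n) (data_rows 0 n) \<Otimes>\<^sub>M distr ?P (rows_space n) (data_rows 1 n)"
    by (rule distr_gauss_field_pair[where A="{k. fst k = 0}" and B="{k. fst k = 1}"
          and f="data_rows 0 n" and g="data_rows 1 n"]) (auto simp: data_rows_def fun_eq_iff)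
  also have "distr ?P (rows_space n) (data_rows 0 n) = PiM {..<n} (\<lambda>_. gauss_seq \<theta>1)"
    by (rule distr_data_rows[OF n]) (simp add: lfht_mean_def)
  also have "distr ?P (rows_space n) (data_rows 1 n) = PiM {..<n} (\<lambda>_. gauss_seq \<theta>2)"
    by (rule distr_data_rows[OF n]) (simp add: lfht_mean_def)
  also have "distr ?P (rows_space m) (data_rows 2 m) = PiM {..<m} (\<lambda>_. gauss_seq \<theta>)"
    by (rule distr_data_rows[OF m]) (simp add: lfht_mean_def)
  finally show ?thesis
    unfolding lfht_law_def by simp
qed

definition active_coords :: "nat \<Rightarrow> nat \<Rightarrow> nat \<Rightarrow> coord set" where
  "active_coords n m T = {..<3} \<times> {..<max n m} \<times> {..<T}"

lemma finite_active_coords[simp]: "finite (active_coords n m T)"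
  by (simp add: active_coords_def)

lemma lfht_mean_outside:
  assumes "\<And>t. T \<le> t \<Longrightarrow> \<theta>1 t = 0" "\<And>t. T \<le> t \<Longrightarrow> \<theta>2 t = 0" "\<And>t. T \<le> t \<Longrightarrow> \<theta> t = 0"
  shows "k \<notin> active_coords n m T \<Longrightarrow> lfht_mean n m \<theta>1 \<theta>2 \<theta> k = 0"
  using assms by (cases k) (auto simp: active_coords_def lfht_mean_def not_less)

lemma measure_gauss_field_eq_integral:
  assumes F: "finite F" and supp: "\<And>k. k \<notin> F \<Longrightarrow> \<mu> k = 0" and S: "S \<in> sets std_field"
  shows "measure (gauss_field \<mu>) S = integral\<^sup>L std_field (\<lambda>\<omega>. gauss_lr F \<mu> \<omega> * indicator S \<omega>)"
proof -
  have "measure (gauss_field \<mu>) S = enn2real (\<integral>\<^sup>+\<omega>. ennreal (gauss_lr F \<mu> \<omega> * indicator S \<omega>) \<partial>std_field)"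
    unfolding measure_def using S
    by (subst gauss_field_eq_density[OF F supp]) (auto simp: emeasure_density indicator_def intro!: arg_cong[where f=enn2real] nn_integral_cong)
  also have "\<dots> = integral\<^sup>L std_field (\<lambda>\<omega>. gauss_lr F \<mu> \<omega> * indicator S \<omega>)"
    using integrable_real_mult_indicator[OF S integrable_gauss_lr[OF F]]
    by (subst nn_integral_eq_integral) (auto simp: indicator_def gauss_lr_pos less_imp_le integral_nonneg_AE)
  finally show ?thesis .
qed

definition reject_region :: "nat \<Rightarrow> nat
    \<Rightarrow> ((((nat \<Rightarrow> nat \<Rightarrow> real) \<times> (nat \<Rightarrow> nat \<Rightarrow> real)) \<times> (nat \<Rightarrow> nat \<Rightarrow> real)) \<Rightarrow> nat)
    \<Rightarrow> (coord \<Rightarrow> real) set" where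
  "reject_region n m \<psi> = {\<omega>. \<psi> (lfht_data n m \<omega>) \<noteq> 0}"

lemma test_values:
  assumes psi: "\<psi> \<in> lfht_space n m \<rightarrow>\<^sub>M count_space {0, 1}"
  shows "\<psi> (lfht_data n m \<omega>) \<in> {0, 1}"
  using measurable_space[OF psi, of "lfht_data n m \<omega>"]
    measurable_space[OF lfht_data_measurable[of n m "\<lambda>_. 0"], of \<omega>] by auto

lemma reject_region_sets:
  assumes psi: "\<psi> \<in> lfht_space n m \<rightarrow>\<^sub>M count_space {0, 1}"
  shows "reject_region n m \<psi> \<in> sets (gauss_field \<nu>)"
proof -
  have "(\<lambda>\<omega>. \<psi> (lfht_data n m \<omega>)) \<in> gauss_field \<nu> \<rightarrow>\<^sub>M count_space {0, 1}"
    using psi by measurable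
  then have "(\<lambda>\<omega>. \<psi> (lfht_data n m \<omega>)) -` {1} \<inter> space (gauss_field \<nu>) \<in> sets (gauss_field \<nu>)"
    by (rule measurable_sets) simp
  moreover have "(\<lambda>\<omega>. \<psi> (lfht_data n m \<omega>)) -` {1} \<inter> space (gauss_field \<nu>) = reject_region n m \<psi>"
    using test_values[OF psi] by (auto simp: reject_region_def) (metis gr_implies_not0 insert_iff singletonD)
  ultimately show ?thesis by simp
qed

lemma lfht_error_eq:
  assumes n: "0 < n" and m: "0 < m" and psi: "\<psi> \<in> lfht_space n m \<rightarrow>\<^sub>M count_space {0, 1}"
  shows "measure (lfht_law n m \<theta>1 \<theta>2 \<theta>) {x \<in> space (lfht_law n m \<theta>1 \<theta>2 \<theta>). \<psi> x \<noteq> 0}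
      = measure (gauss_field (lfht_mean n m \<theta>1 \<theta>2 \<theta>)) (reject_region n m \<psi>)"
    and "measure (lfht_law n m \<theta>1 \<theta>2 \<theta>) {x \<in> space (lfht_law n m \<theta>1 \<theta>2 \<theta>). \<psi> x \<noteq> 1}
      = 1 - measure (gauss_field (lfht_mean n m \<theta>1 \<theta>2 \<theta>)) (reject_region n m \<psi>)"
proof -
  let ?\<mu> = "lfht_mean n m \<theta>1 \<theta>2 \<theta>"
  interpret P: prob_space "gauss_field ?\<mu>" by (rule prob_space_gauss_field)
  have law: "lfht_law n m \<theta>1 \<theta>2 \<theta> = distr (gauss_field ?\<mu>) (lfht_space n m) (lfht_data n m)"
    by (rule lfht_law_eq_distr[OF n m])
  have A0: "{x \<in> space (lfht_space n m). \<psi> x \<noteq> 0} \<in> sets (lfht_space n m)"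
    and A1: "{x \<in> space (lfht_space n m). \<psi> x \<noteq> 1} \<in> sets (lfht_space n m)"
    using psi by measurable
  have data: "lfht_data n m \<omega> \<in> space (lfht_space n m)" for \<omega>
    using measurable_space[OF lfht_data_measurable[of n m ?\<mu>], of \<omega>] by simp
  show "measure (lfht_law n m \<theta>1 \<theta>2 \<theta>) {x \<in> space (lfht_law n m \<theta>1 \<theta>2 \<theta>). \<psi> x \<noteq> 0}
      = measure (gauss_field ?\<mu>) (reject_region n m \<psi>)"
    unfolding law using A0 data by (subst measure_distr) (auto simp: reject_region_def)
  have "measure (lfht_law n m \<theta>1 \<theta>2 \<theta>) {x \<in> space (lfht_law n m \<theta>1 \<theta>2 \<theta>). \<psi> x \<noteq> 1}
      = measure (gauss_field ?\<mu>) (space (gauss_field ?\<mu>) - reject_region n m \<psi>)"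
    unfolding law using A1 data test_values[OF psi]
    by (subst measure_distr) (auto simp: reject_region_def intro!: arg_cong[where f="measure _"], metis gr_implies_not0)
  also have "\<dots> = 1 - measure (gauss_field ?\<mu>) (reject_region n m \<psi>)"
    using P.prob_compl[OF reject_region_sets[OF psi]] by simp
  finally show "measure (lfht_law n m \<theta>1 \<theta>2 \<theta>) {x \<in> space (lfht_law n m \<theta>1 \<theta>2 \<theta>). \<psi> x \<noteq> 1}
      = 1 - measure (gauss_field ?\<mu>) (reject_region n m \<psi>)" .
qed

lemma sum_if_less: "n \<le> N \<Longrightarrow> (\<Sum>i<N. if i < n then x else 0) = real n * (x::real)"
proof -
  assume "n \<le> N"
  then have "{..<N} \<inter> {i. i < n} = {..<n}" by auto
  then show ?thesis by (simp add: sum.If_cases)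
qed

lemma sum_active_coords: "(\<Sum>k\<in>active_coords n m T. h k) = (\<Sum>c<3. \<Sum>i<max n m. \<Sum>t<T. h (c, i, t))"
  by (simp add: active_coords_def sum.cartesian_product)

lemma inner_lfht_mean: "(\<Sum>k\<in>active_coords n m T. lfht_mean n m a1 a2 a3 k * lfht_mean n m b1 b2 b3 k) =
   (\<Sum>t<T. real n * (a1 t * b1 t) + real n * (a2 t * b2 t) + real m * (a3 t * b3 t))"
proof -
  have c0: "(\<Sum>i<max n m. \<Sum>t<T. lfht_mean n m a1 a2 a3 (0, i, t) * lfht_mean n m b1 b2 b3 (0, i, t)) = (\<Sum>t<T. real n * (a1 t * b1 t))"
    by (subst sum.swap) (simp add: lfht_mean_def if_distrib[where f="\<lambda>x. x * _"] cong: if_cong, simp add: sum_if_less)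
  have c1: "(\<Sum>i<max n m. \<Sum>t<T. lfht_mean n m a1 a2 a3 (1, i, t) * lfht_mean n m b1 b2 b3 (1, i, t)) = (\<Sum>t<T. real n * (a2 t * b2 t))"
    by (subst sum.swap) (simp add: lfht_mean_def if_distrib[where f="\<lambda>x. x * _"] cong: if_cong, simp add: sum_if_less)
  have c2: "(\<Sum>i<max n m. \<Sum>t<T. lfht_mean n m a1 a2 a3 (2, i, t) * lfht_mean n m b1 b2 b3 (2, i, t)) = (\<Sum>t<T. real m * (a3 t * b3 t))"
    by (subst sum.swap) (simp add: lfht_mean_def if_distrib[where f="\<lambda>x. x * _"] cong: if_cong, simp add: sum_if_less)
  have l3: "{..<3::nat} = {0, 1, 2}" by auto
  show ?thesis unfolding sum_active_coords l3
    by (simp add: c0 c1 c1[unfolded One_nat_def] c2 sum.distrib)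
qed

lemma lfht_mean_diff: "lfht_mean n m a1 a2 a3 k - lfht_mean n m b1 b2 b3 k = lfht_mean n m (\<lambda>t. a1 t - b1 t) (\<lambda>t. a2 t - b2 t) (\<lambda>t. a3 t - b3 t) k"
  by (cases k) (simp add: lfht_mean_def)

lemma sum_sq_lfht_mean_diff: "(\<Sum>k\<in>active_coords n m T. (lfht_mean n m a1 a2 a3 k - lfht_mean n m b1 b2 b3 k)\<^sup>2) =
   (\<Sum>t<T. real n * (a1 t - b1 t)\<^sup>2 + real n * (a2 t - b2 t)\<^sup>2 + real m * (a3 t - b3 t)\<^sup>2)"
  unfolding lfht_mean_diff power2_eq_square inner_lfht_mean ..

section \<open>Analytic inequalities\<close>

lemma integral_indicator_diff_le:
  fixes f g :: "'a \<Rightarrow> real"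
  assumes f: "integrable M f" and g: "integrable M g" and eq: "integral\<^sup>L M f = integral\<^sup>L M g"
    and S: "S \<in> sets M"
  shows "integral\<^sup>L M (\<lambda>x. g x * indicator S x) - integral\<^sup>L M (\<lambda>x. f x * indicator S x)
      \<le> integral\<^sup>L M (\<lambda>x. \<bar>f x - g x\<bar>) / 2"
proof -
  have iS: "integrable M (\<lambda>x. h x * indicator S x)" if "integrable M h" for h :: "'a \<Rightarrow> real"
    by (rule integrable_real_mult_indicator[OF S that])
  have "integral\<^sup>L M (\<lambda>x. g x * indicator S x) - integral\<^sup>L M (\<lambda>x. f x * indicator S x)
      = integral\<^sup>L M (\<lambda>x. (g x - f x) * indicator S x)"
    using iS[OF f] iS[OF g] by (simp add: left_diff_distrib Bochner_Integration.integral_diff)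
  also have "\<dots> \<le> integral\<^sup>L M (\<lambda>x. ((g x - f x) + \<bar>f x - g x\<bar>) / 2)"
    using iS[OF f] iS[OF g] f g
    by (intro integral_mono) (auto simp: indicator_def left_diff_distrib)
  also have "\<dots> = (integral\<^sup>L M g - integral\<^sup>L M f + integral\<^sup>L M (\<lambda>x. \<bar>f x - g x\<bar>)) / 2"
    using f g by simp
  also have "\<dots> = integral\<^sup>L M (\<lambda>x. \<bar>f x - g x\<bar>) / 2"
    using eq by simp
  finally show ?thesis .
qed

lemma cauchy_schwarz_integral:
  fixes u v :: "'a \<Rightarrow> real"
  assumes um[measurable]: "u \<in> borel_measurable M" and vm[measurable]: "v \<in> borel_measurable M"
    and u0: "\<And>x. 0 \<le> u x" and v0: "\<And>x. 0 \<le> v x"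
    and iu: "integrable M (\<lambda>x. (u x)\<^sup>2)" and iv: "integrable M (\<lambda>x. (v x)\<^sup>2)"
  shows "(integral\<^sup>L M (\<lambda>x. u x * v x))\<^sup>2 \<le> integral\<^sup>L M (\<lambda>x. (u x)\<^sup>2) * integral\<^sup>L M (\<lambda>x. (v x)\<^sup>2)"
proof -
  have iuv: "integrable M (\<lambda>x. u x * v x)"
  proof (rule Bochner_Integration.integrable_bound[of M "\<lambda>x. ((u x)\<^sup>2 + (v x)\<^sup>2) / 2"])
    show "integrable M (\<lambda>x. ((u x)\<^sup>2 + (v x)\<^sup>2) / 2)"
      using iu iv by simp
    have "\<bar>u x * v x\<bar> \<le> ((u x)\<^sup>2 + (v x)\<^sup>2) / 2" for x
      using u0[of x] v0[of x] arith_geo_mean_sqrt[of "(u x)\<^sup>2" "(v x)\<^sup>2"]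
      by (simp add: real_sqrt_mult)
    then show "AE x in M. norm (u x * v x) \<le> norm (((u x)\<^sup>2 + (v x)\<^sup>2) / 2)"
      by simp
  qed simp
  have cs: "(\<integral>\<^sup>+x. ennreal (u x) * ennreal (v x) \<partial>M)\<^sup>2
      \<le> (\<integral>\<^sup>+x. ennreal (u x) ^ 2 \<partial>M) * (\<integral>\<^sup>+x. ennreal (v x) ^ 2 \<partial>M)"
    by (rule Cauchy_Schwarz_nn_integral) auto
  have 1: "(\<integral>\<^sup>+x. ennreal (u x) * ennreal (v x) \<partial>M) = ennreal (integral\<^sup>L M (\<lambda>x. u x * v x))"
    using iuv u0 v0 by (subst nn_integral_eq_integral[symmetric])
      (auto simp: ennreal_mult' intro!: nn_integral_cong mult_nonneg_nonneg)
  have 2: "(\<integral>\<^sup>+x. ennreal (u x) ^ 2 \<partial>M) = ennreal (integral\<^sup>L M (\<lambda>x. (u x)\<^sup>2))"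
    using iu u0 by (subst nn_integral_eq_integral[symmetric]) (auto simp: ennreal_power intro!: nn_integral_cong)
  have 3: "(\<integral>\<^sup>+x. ennreal (v x) ^ 2 \<partial>M) = ennreal (integral\<^sup>L M (\<lambda>x. (v x)\<^sup>2))"
    using iv v0 by (subst nn_integral_eq_integral[symmetric]) (auto simp: ennreal_power intro!: nn_integral_cong)
  have "0 \<le> integral\<^sup>L M (\<lambda>x. u x * v x)" "0 \<le> integral\<^sup>L M (\<lambda>x. (u x)\<^sup>2)" "0 \<le> integral\<^sup>L M (\<lambda>x. (v x)\<^sup>2)"
    using u0 v0 by (auto intro!: integral_nonneg_AE)
  with cs show ?thesis
    unfolding 1 2 3 by (simp add: ennreal_power ennreal_mult'[symmetric] ennreal_le_iff mult_nonneg_nonneg)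
qed

lemma (in prob_space) l1_le_sqrt_l2:
  fixes h :: "'a \<Rightarrow> real"
  assumes [measurable]: "h \<in> borel_measurable M" and i: "integrable M (\<lambda>x. (h x)\<^sup>2)"
  shows "expectation (\<lambda>x. \<bar>h x\<bar>) \<le> sqrt (expectation (\<lambda>x. (h x)\<^sup>2))"
proof -
  have "(expectation (\<lambda>x. \<bar>h x\<bar> * 1))\<^sup>2 \<le> expectation (\<lambda>x. (\<bar>h x\<bar>)\<^sup>2) * expectation (\<lambda>x. 1\<^sup>2)"
    by (rule cauchy_schwarz_integral) (use i in auto)
  then show ?thesis by (simp add: real_le_rsqrt prob_space)
qed

lemma l1_le_sqrt_chi_sq:
  fixes f g :: "'a \<Rightarrow> real"
  assumes [measurable]: "f \<in> borel_measurable M" "g \<in> borel_measurable M"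
    and gpos: "\<And>x. 0 < g x" and ig: "integrable M g" and Ig: "integral\<^sup>L M g = 1"
    and i: "integrable M (\<lambda>x. (f x - g x)\<^sup>2 / g x)"
  shows "integral\<^sup>L M (\<lambda>x. \<bar>f x - g x\<bar>) \<le> sqrt (integral\<^sup>L M (\<lambda>x. (f x - g x)\<^sup>2 / g x))"
proof -
  define u where "u x = \<bar>f x - g x\<bar> / sqrt (g x)" for x
  define v where "v x = sqrt (g x)" for x
  have uv: "\<bar>f x - g x\<bar> = u x * v x" for x
    using gpos[of x] by (simp add: u_def v_def)
  have u2: "(u x)\<^sup>2 = (f x - g x)\<^sup>2 / g x" for x
    using gpos[of x] by (simp add: u_def power_divide)
  have v2: "(v x)\<^sup>2 = g x" for x
    using gpos[of x] by (simp add: v_def less_imp_le)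
  have "(integral\<^sup>L M (\<lambda>x. u x * v x))\<^sup>2 \<le> integral\<^sup>L M (\<lambda>x. (u x)\<^sup>2) * integral\<^sup>L M (\<lambda>x. (v x)\<^sup>2)"
  proof (rule cauchy_schwarz_integral)
    show "integrable M (\<lambda>x. (u x)\<^sup>2)" unfolding u2 by (rule i)
    show "integrable M (\<lambda>x. (v x)\<^sup>2)" unfolding v2 by (rule ig)
  qed (use gpos in \<open>auto simp: u_def v_def less_imp_le\<close>)
  then have "(integral\<^sup>L M (\<lambda>x. \<bar>f x - g x\<bar>))\<^sup>2 \<le> integral\<^sup>L M (\<lambda>x. (f x - g x)\<^sup>2 / g x)"
    unfolding u2 v2 Ig uv[symmetric] by simp
  then show ?thesis by (simp add: real_le_rsqrt)
qed

lemma integral_sq_div_le: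
  fixes f g :: "'a \<Rightarrow> real"
  assumes [measurable]: "f \<in> borel_measurable M" "g \<in> borel_measurable M"
    and c: "0 < c" and low: "\<And>x. c \<le> g x"
    and f: "integrable M f" "integral\<^sup>L M f = 1" and g: "integrable M g" "integral\<^sup>L M g = 1"
    and d: "integrable M (\<lambda>x. (f x - g x)\<^sup>2)"
  shows "integrable M (\<lambda>x. (f x)\<^sup>2 / g x)"
    and "integral\<^sup>L M (\<lambda>x. (f x)\<^sup>2 / g x) \<le> 1 + integral\<^sup>L M (\<lambda>x. (f x - g x)\<^sup>2) / c"
proof -
  have gpos: "0 < g x" for x
    using c low[of x] by linarith
  have bound: "(f x - g x)\<^sup>2 / g x \<le> (f x - g x)\<^sup>2 / c" for x
    using c low[of x] by (intro divide_left_mono) auto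
  have iq: "integrable M (\<lambda>x. (f x - g x)\<^sup>2 / g x)"
  proof (rule Bochner_Integration.integrable_bound[of M "\<lambda>x. (f x - g x)\<^sup>2 / c"])
    show "integrable M (\<lambda>x. (f x - g x)\<^sup>2 / c)"
      using d by simp
    show "AE x in M. norm ((f x - g x)\<^sup>2 / g x) \<le> norm ((f x - g x)\<^sup>2 / c)"
      using bound gpos c by (auto intro!: AE_I2 simp: less_imp_le)
  qed simp
  have split: "(f x)\<^sup>2 / g x = g x + 2 * (f x - g x) + (f x - g x)\<^sup>2 / g x" for x
    using gpos[of x] by (simp add: field_simps power2_eq_square)
  show "integrable M (\<lambda>x. (f x)\<^sup>2 / g x)"
    unfolding split using f g iq by auto
  have "integral\<^sup>L M (\<lambda>x. (f x)\<^sup>2 / g x) = 1 + integral\<^sup>L M (\<lambda>x. (f x - g x)\<^sup>2 / g x)"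
    unfolding split using f g iq by (simp add: Bochner_Integration.integral_add Bochner_Integration.integral_diff)
  also have "\<dots> \<le> 1 + integral\<^sup>L M (\<lambda>x. (f x - g x)\<^sup>2 / c)"
    using iq d bound by (intro add_left_mono integral_mono) auto
  finally show "integral\<^sup>L M (\<lambda>x. (f x)\<^sup>2 / g x) \<le> 1 + integral\<^sup>L M (\<lambda>x. (f x - g x)\<^sup>2) / c"
    by simp
qed

lemma exp_le_inverse_one_minus:
  fixes x :: real
  assumes x: "0 \<le> x" "x < 1"
  shows "exp x \<le> 1 / (1 - x)"
proof -
  have "1 - x \<le> exp (- x)" using exp_ge_add_one_self[of "- x"] by simp
  then have "(1 - x) * exp x \<le> exp (- x) * exp x" by (intro mult_right_mono) auto
  then have "(1 - x) * exp x \<le> 1" by (simp add: exp_minus)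
  then show ?thesis using x by (simp add: field_simps)
qed

lemma one_plus_power_le_exp:
  fixes u :: real
  assumes u: "0 \<le> u"
  shows "(1 + u) ^ s \<le> exp (real s * u)"
proof -
  have "(1 + u) ^ s \<le> (exp u) ^ s" using u by (intro power_mono) (auto simp: exp_ge_add_one_self add.commute)
  also have "\<dots> = exp (real s * u)" by (simp add: exp_of_nat_mult)
  finally show ?thesis .
qed

lemma cosh_excess_le:
  fixes z :: real
  assumes z: "0 \<le> z" "z \<le> 1 / 2"
  shows "exp z + exp (- z) - 2 \<le> 7 / 6 * z\<^sup>2"
proof -
  obtain t where t: "\<bar>t\<bar> \<le> \<bar>z\<bar>" and et: "exp z = (\<Sum>m<3. z ^ m / fact m) + exp t / fact 3 * z ^ 3"
    using Maclaurin_exp_le[of z 3] by blast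
  obtain t' where et': "exp (- z) = (\<Sum>m<3. (- z) ^ m / fact m) + exp t' / fact 3 * (- z) ^ 3"
    using Maclaurin_exp_le[of "- z" 3] by blast
  have s3: "(\<Sum>m<3. x ^ m / fact m) = 1 + x + x\<^sup>2 / 2" for x :: real
    by (simp add: numeral_3_eq_3 power2_eq_square)
  have "exp t \<le> exp (1 / 2 :: real)" using t z by simp
  also have "\<dots> \<le> 1 / (1 - 1 / 2)" by (rule exp_le_inverse_one_minus) auto
  finally have et2: "exp t \<le> 2" by simp
  have z3: "z ^ 3 \<le> z\<^sup>2 / 2"
  proof -
    have "z ^ 3 = z\<^sup>2 * z" by (simp add: power2_eq_square power3_eq_cube)
    also have "\<dots> \<le> z\<^sup>2 * (1 / 2)" using z by (intro mult_left_mono) auto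
    finally show ?thesis by simp
  qed
  have "exp t * z ^ 3 \<le> 2 * z ^ 3" by (rule mult_right_mono[OF et2]) (use z in simp)
  then have "exp z \<le> 1 + z + z\<^sup>2 / 2 + 2 / 6 * z ^ 3"
    unfolding et s3 by (simp add: fact_numeral)
  moreover have "exp (- z) \<le> 1 - z + z\<^sup>2 / 2"
  proof -
    have "0 \<le> exp t' / fact 3 * z ^ 3" using z by simp
    then show ?thesis unfolding et' s3 by (simp add: power3_eq_cube)
  qed
  ultimately have "exp z + exp (- z) - 2 \<le> z\<^sup>2 + z ^ 3 / 3" by simp
  also have "\<dots> \<le> 7 / 6 * z\<^sup>2" using z3 by simp
  finally show ?thesis .
qed

lemma exp_sinh_identity:
  fixes X Y :: real
  shows "exp (X + Y) + exp (- (X + Y)) - exp (X - Y) - exp (- (X - Y)) = (exp X - exp (- X)) * (exp Y - exp (- Y))"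
  by (simp add: exp_add exp_diff exp_minus field_simps)

lemma sinh_le:
  fixes u :: real
  assumes u: "0 \<le> u"
  shows "exp u - exp (- u) \<le> 2 * u * exp u"
proof -
  have e1: "1 - u \<le> exp (- u)" using exp_ge_add_one_self[of "- u"] by simp
  have "(1 - u) * exp u \<le> exp (- u) * exp u" using e1 by (intro mult_right_mono) auto
  then have e2: "exp u - u * exp u \<le> 1" by (simp add: exp_minus algebra_simps)
  have e3: "1 \<le> exp u" using u by simp
  have "exp u - exp (- u) \<le> exp u - (1 - u)" using e1 by simp
  also have "\<dots> \<le> u * exp u + u" using e2 by simp
  also have "\<dots> \<le> u * exp u + u * exp u" using u e3 by (simp add: mult_left_mono[of 1 "exp u" u, simplified])
  finally show ?thesis by simp
qed

lemma exp_half_le_2: "exp (1 / 2 :: real) \<le> 2"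
  using exp_le_inverse_one_minus[of "1 / 2"] by simp

lemma exp_three_halves_le: "exp (3 / 2 :: real) \<le> 8"
proof -
  have "exp (3 / 2 :: real) = exp (1 / 2) ^ 3" by (simp add: exp_of_nat_mult[symmetric])
  also have "\<dots> \<le> 2 ^ 3" using exp_half_le_2 by (intro power_mono) auto
  finally show ?thesis by simp
qed

lemma sinh_product_le:
  fixes X Y :: real
  assumes X: "0 \<le> X" "X \<le> 1 / 2" and Y: "0 \<le> Y" "Y \<le> 1 / 2"
  shows "exp ((X + Y) / 2) * ((exp X - exp (- X)) * (exp Y - exp (- Y))) \<le> 32 * X * Y"
proof -
  have sx: "exp X - exp (- X) \<le> 2 * X * exp X" by (rule sinh_le[OF X(1)])
  have sy: "exp Y - exp (- Y) \<le> 2 * Y * exp Y" by (rule sinh_le[OF Y(1)])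
  have px: "0 \<le> exp X - exp (- X)" using X by simp
  have py: "0 \<le> exp Y - exp (- Y)" using Y by simp
  have "(exp X - exp (- X)) * (exp Y - exp (- Y)) \<le> (2 * X * exp X) * (2 * Y * exp Y)"
    using sx sy px py X Y by (intro mult_mono) auto
  then have "exp ((X + Y) / 2) * ((exp X - exp (- X)) * (exp Y - exp (- Y))) \<le> exp ((X + Y) / 2) * ((2 * X * exp X) * (2 * Y * exp Y))"
    by (intro mult_left_mono) auto
  also have "\<dots> = 4 * X * Y * exp (3 / 2 * (X + Y))"
    by (simp add: exp_add[symmetric] algebra_simps)
  also have "\<dots> \<le> 4 * X * Y * exp (3 / 2)"
    using X Y by (intro mult_left_mono) auto
  also have "\<dots> \<le> 4 * X * Y * 8"
    using X Y exp_three_halves_le by (intro mult_left_mono) auto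
  finally show ?thesis by simp
qed

section \<open>Le Cam's bound for mixtures\<close>

lemma l1_le_hellinger_affinity:
  fixes f g :: "'a \<Rightarrow> real"
  assumes [measurable]: "f \<in> borel_measurable M" "g \<in> borel_measurable M"
    and f0: "\<And>x. 0 \<le> f x" and g0: "\<And>x. 0 \<le> g x"
    and f: "integrable M f" "integral\<^sup>L M f = 1" and g: "integrable M g" "integral\<^sup>L M g = 1"
    and h: "integrable M (\<lambda>x. sqrt (f x * g x))" "integral\<^sup>L M (\<lambda>x. sqrt (f x * g x)) = c"
  shows "integral\<^sup>L M (\<lambda>x. \<bar>f x - g x\<bar>) \<le> 2 * sqrt (1 - c\<^sup>2)"
proof -
  define u where "u x = \<bar>sqrt (f x) - sqrt (g x)\<bar>" for x
  define v where "v x = sqrt (f x) + sqrt (g x)" for x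
  have u2: "(u x)\<^sup>2 = f x + g x - 2 * sqrt (f x * g x)" for x
    unfolding u_def using f0[of x] g0[of x] by (simp add: power2_eq_square algebra_simps real_sqrt_mult)
  have v2: "(v x)\<^sup>2 = f x + g x + 2 * sqrt (f x * g x)" for x
    unfolding v_def using f0[of x] g0[of x] by (simp add: power2_eq_square algebra_simps real_sqrt_mult)
  have uv: "\<bar>f x - g x\<bar> = u x * v x" for x
  proof -
    have "f x - g x = (sqrt (f x) - sqrt (g x)) * (sqrt (f x) + sqrt (g x))"
      using f0[of x] g0[of x] by (simp add: algebra_simps)
    then show ?thesis unfolding u_def v_def using f0[of x] g0[of x] by (simp add: abs_mult)
  qed
  have "(integral\<^sup>L M (\<lambda>x. u x * v x))\<^sup>2 \<le> integral\<^sup>L M (\<lambda>x. (u x)\<^sup>2) * integral\<^sup>L M (\<lambda>x. (v x)\<^sup>2)"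
  proof (rule cauchy_schwarz_integral)
    show "integrable M (\<lambda>x. (u x)\<^sup>2)" "integrable M (\<lambda>x. (v x)\<^sup>2)"
      unfolding u2 v2 using f g h by auto
  qed (use f0 g0 in \<open>auto simp: u_def v_def\<close>)
  also have "\<dots> = (2 - 2 * c) * (2 + 2 * c)"
    unfolding u2 v2 using f g h by simp
  also have "\<dots> = 4 * (1 - c\<^sup>2)"
    by (simp add: power2_eq_square algebra_simps)
  finally have "(integral\<^sup>L M (\<lambda>x. \<bar>f x - g x\<bar>))\<^sup>2 \<le> 4 * (1 - c\<^sup>2)"
    by (simp add: uv)
  then have "integral\<^sup>L M (\<lambda>x. \<bar>f x - g x\<bar>) \<le> sqrt (4 * (1 - c\<^sup>2))"
    by (simp add: real_le_rsqrt)
  also have "\<dots> = 2 * sqrt (1 - c\<^sup>2)"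
    by (simp only: real_sqrt_mult) simp
  finally show ?thesis .
qed

lemma sqrt_exp: "sqrt (exp x) = exp (x / 2)"
  by (rule real_sqrt_unique) (simp_all add: power2_eq_square exp_add[symmetric])

lemma gauss_lr_mult:
  "gauss_lr F \<mu> \<omega> * gauss_lr F \<nu> \<omega> = exp (\<Sum>k\<in>F. \<mu> k * \<nu> k) * gauss_lr F (\<lambda>k. \<mu> k + \<nu> k) \<omega>"
proof -
  have "(\<mu> k * \<omega> k - (\<mu> k)\<^sup>2 / 2) + (\<nu> k * \<omega> k - (\<nu> k)\<^sup>2 / 2)
      = \<mu> k * \<nu> k + ((\<mu> k + \<nu> k) * \<omega> k - (\<mu> k + \<nu> k)\<^sup>2 / 2)" for k
    by (simp add: power2_eq_square field_simps)
  then show ?thesis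
    unfolding gauss_lr_def exp_add[symmetric] sum.distrib[symmetric] by simp
qed

lemma sqrt_gauss_lr_mult: "sqrt (gauss_lr F \<mu> \<omega> * gauss_lr F \<nu> \<omega>) = exp (- (\<Sum>k\<in>F. (\<mu> k - \<nu> k)\<^sup>2) / 8) * gauss_lr F (\<lambda>k. (\<mu> k + \<nu> k) / 2) \<omega>"
proof -
  have p: "((\<mu> k * \<omega> k - (\<mu> k)\<^sup>2 / 2) + (\<nu> k * \<omega> k - (\<nu> k)\<^sup>2 / 2)) / 2
      = - (\<mu> k - \<nu> k)\<^sup>2 / 8 + ((\<mu> k + \<nu> k) / 2 * \<omega> k - ((\<mu> k + \<nu> k) / 2)\<^sup>2 / 2)" for k
    by (simp add: power2_eq_square field_simps)
  have "((\<Sum>k\<in>F. \<mu> k * \<omega> k - (\<mu> k)\<^sup>2 / 2) + (\<Sum>k\<in>F. \<nu> k * \<omega> k - (\<nu> k)\<^sup>2 / 2)) / 2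
      = (\<Sum>k\<in>F. ((\<mu> k * \<omega> k - (\<mu> k)\<^sup>2 / 2) + (\<nu> k * \<omega> k - (\<nu> k)\<^sup>2 / 2)) / 2)"
    by (simp add: sum.distrib[symmetric] sum_divide_distrib[symmetric])
  also have "\<dots> = (\<Sum>k\<in>F. - (\<mu> k - \<nu> k)\<^sup>2 / 8) + (\<Sum>k\<in>F. (\<mu> k + \<nu> k) / 2 * \<omega> k - ((\<mu> k + \<nu> k) / 2)\<^sup>2 / 2)"
    by (simp only: p sum.distrib)
  also have "(\<Sum>k\<in>F. - (\<mu> k - \<nu> k)\<^sup>2 / 8) = - (\<Sum>k\<in>F. (\<mu> k - \<nu> k)\<^sup>2) / 8"
    by (simp add: sum_divide_distrib sum_negf)
  finally have e: "((\<Sum>k\<in>F. \<mu> k * \<omega> k - (\<mu> k)\<^sup>2 / 2) + (\<Sum>k\<in>F. \<nu> k * \<omega> k - (\<nu> k)\<^sup>2 / 2)) / 2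
      = - (\<Sum>k\<in>F. (\<mu> k - \<nu> k)\<^sup>2) / 8 + (\<Sum>k\<in>F. (\<mu> k + \<nu> k) / 2 * \<omega> k - ((\<mu> k + \<nu> k) / 2)\<^sup>2 / 2)" .
  have "sqrt (gauss_lr F \<mu> \<omega> * gauss_lr F \<nu> \<omega>) = exp (((\<Sum>k\<in>F. \<mu> k * \<omega> k - (\<mu> k)\<^sup>2 / 2) + (\<Sum>k\<in>F. \<nu> k * \<omega> k - (\<nu> k)\<^sup>2 / 2)) / 2)"
    unfolding gauss_lr_def exp_add[symmetric] by (rule sqrt_exp)
  also have "\<dots> = exp (- (\<Sum>k\<in>F. (\<mu> k - \<nu> k)\<^sup>2) / 8) * gauss_lr F (\<lambda>k. (\<mu> k + \<nu> k) / 2) \<omega>"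
    unfolding e gauss_lr_def by (rule exp_add)
  finally show ?thesis .
qed

lemma integrable_gauss_lr_mult: "finite F \<Longrightarrow> integrable std_field (\<lambda>\<omega>. gauss_lr F \<mu> \<omega> * gauss_lr F \<nu> \<omega>)"
  unfolding gauss_lr_mult by (intro integrable_mult_right integrable_gauss_lr)

lemma integral_gauss_lr_mult:
  "finite F \<Longrightarrow> integral\<^sup>L std_field (\<lambda>\<omega>. gauss_lr F \<mu> \<omega> * gauss_lr F \<nu> \<omega>) = exp (\<Sum>k\<in>F. \<mu> k * \<nu> k)"
  unfolding gauss_lr_mult by (simp add: integral_gauss_lr)

lemma l1_gauss_lr_le:
  assumes F: "finite F"
  shows "integral\<^sup>L std_field (\<lambda>\<omega>. \<bar>gauss_lr F \<mu> \<omega> - gauss_lr F \<nu> \<omega>\<bar>)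
    \<le> 2 * sqrt (1 - (exp (- (\<Sum>k\<in>F. (\<mu> k - \<nu> k)\<^sup>2) / 8))\<^sup>2)"
proof (rule l1_le_hellinger_affinity)
  show "integrable std_field (\<lambda>\<omega>. sqrt (gauss_lr F \<mu> \<omega> * gauss_lr F \<nu> \<omega>))"
    unfolding sqrt_gauss_lr_mult by (intro integrable_mult_right integrable_gauss_lr[OF F])
  show "integral\<^sup>L std_field (\<lambda>\<omega>. sqrt (gauss_lr F \<mu> \<omega> * gauss_lr F \<nu> \<omega>))
      = exp (- (\<Sum>k\<in>F. (\<mu> k - \<nu> k)\<^sup>2) / 8)"
    unfolding sqrt_gauss_lr_mult by (simp add: integral_gauss_lr[OF F])
qed (simp_all add: F integrable_gauss_lr integral_gauss_lr gauss_lr_pos less_imp_le)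

definition mixture_lr :: "coord set \<Rightarrow> 'v set \<Rightarrow> ('v \<Rightarrow> coord \<Rightarrow> real) \<Rightarrow> (coord \<Rightarrow> real) \<Rightarrow> real" where
  "mixture_lr F V h \<omega> = (\<Sum>v\<in>V. gauss_lr F (h v) \<omega>) / real (card V)"

lemma mixture_lr_measurable[measurable]: "mixture_lr F V h \<in> borel_measurable (gauss_field \<nu>)"
  unfolding mixture_lr_def by measurable

lemma mixture_lr_pos: "finite V \<Longrightarrow> V \<noteq> {} \<Longrightarrow> 0 < mixture_lr F V h \<omega>"
  unfolding mixture_lr_def by (intro divide_pos_pos sum_pos) (auto simp: gauss_lr_pos card_gt_0_iff)

lemma mixture_lr_singleton: "mixture_lr F {x} h = gauss_lr F (h x)"
  by (simp add: mixture_lr_def fun_eq_iff)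

lemma integrable_mixture_lr: "finite F \<Longrightarrow> integrable std_field (mixture_lr F V h)"
  unfolding mixture_lr_def by (intro integrable_divide_zero Bochner_Integration.integrable_sum integrable_gauss_lr)

lemma integral_mixture_lr: "finite F \<Longrightarrow> finite V \<Longrightarrow> V \<noteq> {} \<Longrightarrow> integral\<^sup>L std_field (mixture_lr F V h) = 1"
  unfolding mixture_lr_def
  by (simp add: integrable_gauss_lr integral_gauss_lr Bochner_Integration.integral_sum card_gt_0_iff)

lemma integral_mixture_lr_indicator:
  assumes F: "finite F" and S: "S \<in> sets std_field"
  shows "integral\<^sup>L std_field (\<lambda>\<omega>. mixture_lr F V h \<omega> * indicator S \<omega>)
    = (\<Sum>v\<in>V. integral\<^sup>L std_field (\<lambda>\<omega>. gauss_lr F (h v) \<omega> * indicator S \<omega>)) / card V"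
proof -
  have "(\<lambda>\<omega>. mixture_lr F V h \<omega> * indicator S \<omega>) = (\<lambda>\<omega>. (\<Sum>v\<in>V. gauss_lr F (h v) \<omega> * indicator S \<omega>) / card V)"
    by (auto simp: mixture_lr_def sum_distrib_right)
  then show ?thesis
    using integrable_real_mult_indicator[OF S integrable_gauss_lr[OF F]]
    by (simp add: Bochner_Integration.integral_sum)
qed

text \<open>The support bound \<open>T\<close> makes the likelihood ratios depend on finitely many coordinates.\<close>

definition admissible :: "real \<Rightarrow> (nat \<Rightarrow> real) \<Rightarrow> real \<Rightarrow> nat \<Rightarrow> (nat \<Rightarrow> real) \<Rightarrow> (nat \<Rightarrow> real) \<Rightarrow> bool" where
  "admissible p a \<epsilon> T \<theta>1 \<theta>2 \<longleftrightarrow> \<theta>1 \<in> Gamma_set p a \<and> \<theta>2 \<in> Gamma_set p a \<and> \<epsilon> \<le> l2_dist \<theta>1 \<theta>2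
     \<and> (\<forall>t\<ge>T. \<theta>1 t = 0 \<and> \<theta>2 t = 0)"

lemma rejection_prob_eq_integral:
  assumes psi: "\<psi> \<in> lfht_space n m \<rightarrow>\<^sub>M count_space {0, 1}"
    and adm: "admissible p a \<epsilon> T \<theta>1 \<theta>2" and \<theta>: "\<theta> \<in> {\<theta>1, \<theta>2}"
  shows "measure (gauss_field (lfht_mean n m \<theta>1 \<theta>2 \<theta>)) (reject_region n m \<psi>)
    = integral\<^sup>L std_field (\<lambda>\<omega>. gauss_lr (active_coords n m T) (lfht_mean n m \<theta>1 \<theta>2 \<theta>) \<omega>
        * indicator (reject_region n m \<psi>) \<omega>)"
  using adm \<theta> by (intro measure_gauss_field_eq_integral lfht_mean_outside reject_region_sets[OF psi])
    (auto simp: admissible_def)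

lemma null_mixture_rejection_le:
  assumes good: "good_lfht_test p a \<epsilon> m n \<psi>" and n: "0 < n" and m: "0 < m"
    and V: "finite V" "V \<noteq> {}" and adm: "\<And>v. v \<in> V \<Longrightarrow> admissible p a \<epsilon> T (A v) (B v)"
  shows "integral\<^sup>L std_field (\<lambda>\<omega>. mixture_lr (active_coords n m T) V (\<lambda>v. lfht_mean n m (A v) (B v) (A v)) \<omega>
      * indicator (reject_region n m \<psi>) \<omega>) \<le> 1 / 4"
proof -
  have psi: "\<psi> \<in> lfht_space n m \<rightarrow>\<^sub>M count_space {0, 1}"
    using good by (simp add: good_lfht_test_def)
  have "integral\<^sup>L std_field (\<lambda>\<omega>. gauss_lr (active_coords n m T) (lfht_mean n m (A v) (B v) (A v)) \<omega>
      * indicator (reject_region n m \<psi>) \<omega>) \<le> 1 / 4" if "v \<in> V" for v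
  proof -
    have "measure (lfht_law n m (A v) (B v) (A v)) {x \<in> space (lfht_law n m (A v) (B v) (A v)). \<psi> x \<noteq> 0} \<le> 1 / 4"
      using adm[OF that] good by (auto simp: good_lfht_test_def admissible_def)
    then show ?thesis
      unfolding lfht_error_eq(1)[OF n m psi] rejection_prob_eq_integral[OF psi adm[OF that] insertI1] .
  qed
  from sum_bounded_above[OF this] show ?thesis
    using V
    unfolding integral_mixture_lr_indicator[OF finite_active_coords reject_region_sets[OF psi]]
    by (simp add: field_simps card_gt_0_iff)
qed

lemma alternative_mixture_rejection_ge:
  assumes good: "good_lfht_test p a \<epsilon> m n \<psi>" and n: "0 < n" and m: "0 < m"
    and V: "finite V" "V \<noteq> {}" and adm: "\<And>v. v \<in> V \<Longrightarrow> admissible p a \<epsilon> T (A v) (B v)"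
  shows "3 / 4 \<le> integral\<^sup>L std_field (\<lambda>\<omega>. mixture_lr (active_coords n m T) V (\<lambda>v. lfht_mean n m (A v) (B v) (B v)) \<omega>
      * indicator (reject_region n m \<psi>) \<omega>)"
proof -
  have psi: "\<psi> \<in> lfht_space n m \<rightarrow>\<^sub>M count_space {0, 1}"
    using good by (simp add: good_lfht_test_def)
  have "3 / 4 \<le> integral\<^sup>L std_field (\<lambda>\<omega>. gauss_lr (active_coords n m T) (lfht_mean n m (A v) (B v) (B v)) \<omega>
      * indicator (reject_region n m \<psi>) \<omega>)" if "v \<in> V" for v
  proof -
    have "measure (lfht_law n m (A v) (B v) (B v)) {x \<in> space (lfht_law n m (A v) (B v) (B v)). \<psi> x \<noteq> 1} \<le> 1 / 4"
      using adm[OF that] good by (auto simp: good_lfht_test_def admissible_def)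
    then show ?thesis
      unfolding lfht_error_eq(2)[OF n m psi] rejection_prob_eq_integral[OF psi adm[OF that] insertI2[OF singletonI]]
      by simp
  qed
  from sum_bounded_below[OF this] show ?thesis
    using V
    unfolding integral_mixture_lr_indicator[OF finite_active_coords reject_region_sets[OF psi]]
    by (simp add: field_simps card_gt_0_iff)
qed

text \<open>Both errors at most \<open>1/4\<close> force total variation at least \<open>1/2\<close> between the mixtures.\<close>

lemma good_test_mixture_l1_ge_1:
  assumes good: "good_lfht_test p a \<epsilon> m n \<psi>" and n: "0 < n" and m: "0 < m"
    and V0: "finite V0" "V0 \<noteq> {}" and V1: "finite V1" "V1 \<noteq> {}"
    and A: "\<And>v. v \<in> V0 \<Longrightarrow> admissible p a \<epsilon> T (A1 v) (A2 v)"
    and B: "\<And>v. v \<in> V1 \<Longrightarrow> admissible p a \<epsilon> T (B1 v) (B2 v)"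
  shows "1 \<le> integral\<^sup>L std_field (\<lambda>\<omega>. \<bar>mixture_lr (active_coords n m T) V0 (\<lambda>v. lfht_mean n m (A1 v) (A2 v) (A1 v)) \<omega>
                                 - mixture_lr (active_coords n m T) V1 (\<lambda>v. lfht_mean n m (B1 v) (B2 v) (B2 v)) \<omega>\<bar>)"
proof -
  let ?F = "active_coords n m T" and ?S = "reject_region n m \<psi>"
  let ?f = "mixture_lr ?F V0 (\<lambda>v. lfht_mean n m (A1 v) (A2 v) (A1 v))"
  let ?g = "mixture_lr ?F V1 (\<lambda>v. lfht_mean n m (B1 v) (B2 v) (B2 v))"
  have S: "?S \<in> sets std_field"
    using good by (intro reject_region_sets) (simp add: good_lfht_test_def)
  have "integral\<^sup>L std_field (\<lambda>\<omega>. ?g \<omega> * indicator ?S \<omega>) - integral\<^sup>L std_field (\<lambda>\<omega>. ?f \<omega> * indicator ?S \<omega>)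
      \<le> integral\<^sup>L std_field (\<lambda>\<omega>. \<bar>?f \<omega> - ?g \<omega>\<bar>) / 2"
    by (rule integral_indicator_diff_le[OF integrable_mixture_lr integrable_mixture_lr _ S])
      (simp_all add: integral_mixture_lr V0 V1)
  then show ?thesis
    using null_mixture_rejection_le[where A=A1 and B=A2, OF good n m V0 A]
      alternative_mixture_rejection_ge[where A=B1 and B=B2, OF good n m V1 B]
    by simp
qed

section \<open>The parameter set and two-point bounds\<close>

lemma Gamma_set_term_le_1:
  assumes "\<theta> \<in> Gamma_set p a"
  shows "\<bar>\<theta> t\<bar> powr p / a t powr p \<le> 1"
proof -
  have sm: "summable (\<lambda>t. \<bar>\<theta> t\<bar> powr p / a t powr p)" and le: "(\<Sum>t. \<bar>\<theta> t\<bar> powr p / a t powr p) \<le> 1"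
    using assms by (auto simp: Gamma_set_def)
  have "(\<Sum>t\<in>{t}. \<bar>\<theta> t\<bar> powr p / a t powr p) \<le> (\<Sum>t. \<bar>\<theta> t\<bar> powr p / a t powr p)"
    by (rule sum_le_suminf[OF sm]) auto
  with le show ?thesis by simp
qed

lemma Gamma_set_sq_le:
  assumes p: "1 \<le> p" "p \<le> 2" and dec: "decseq a" and apos: "\<forall>t. 0 < a t" and th: "\<theta> \<in> Gamma_set p a"
  shows "(\<theta> t)\<^sup>2 \<le> (a 0)\<^sup>2 * (\<bar>\<theta> t\<bar> powr p / a t powr p)"
proof -
  define x where "x = \<bar>\<theta> t\<bar> / a t"
  have at: "0 < a t" using apos by auto
  have x0: "0 \<le> x" unfolding x_def using at by simp
  have xp: "x powr p = \<bar>\<theta> t\<bar> powr p / a t powr p" unfolding x_def by (rule powr_divide)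
  have x1: "x \<le> 1"
  proof (rule ccontr)
    assume "\<not> x \<le> 1"
    then have "1 < x" by simp
    then have "1 < x powr p" using p by (intro gr_one_powr) auto
    with Gamma_set_term_le_1[OF th, of t] xp show False by simp
  qed
  have "x\<^sup>2 = x powr 2" using x0 by simp
  also have "\<dots> \<le> x powr p" using p x0 x1 by (intro powr_mono') auto
  finally have x2: "x\<^sup>2 \<le> x powr p" .
  have "(\<theta> t)\<^sup>2 = (a t)\<^sup>2 * x\<^sup>2" unfolding x_def using at by (simp add: power2_eq_square field_simps)
  also have "\<dots> \<le> (a t)\<^sup>2 * x powr p" using x2 by (intro mult_left_mono) auto
  also have "\<dots> \<le> (a 0)\<^sup>2 * x powr p"
    using dec at by (intro mult_right_mono power_mono) (auto simp: decseq_def)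
  finally show ?thesis unfolding xp .
qed

lemma Gamma_set_l2:
  assumes p: "1 \<le> p" "p \<le> 2" and dec: "decseq a" and apos: "\<forall>t. 0 < a t" and th: "\<theta> \<in> Gamma_set p a"
  shows "summable (\<lambda>t. (\<theta> t)\<^sup>2)" and "(\<Sum>t. (\<theta> t)\<^sup>2) \<le> (a 0)\<^sup>2"
proof -
  have sm: "summable (\<lambda>t. \<bar>\<theta> t\<bar> powr p / a t powr p)" and le: "(\<Sum>t. \<bar>\<theta> t\<bar> powr p / a t powr p) \<le> 1"
    using th by (auto simp: Gamma_set_def)
  have sm2: "summable (\<lambda>t. (a 0)\<^sup>2 * (\<bar>\<theta> t\<bar> powr p / a t powr p))" by (rule summable_mult[OF sm])
  show s: "summable (\<lambda>t. (\<theta> t)\<^sup>2)"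
    by (rule summable_comparison_test'[OF sm2]) (use Gamma_set_sq_le[OF p dec apos th] in auto)
  have "(\<Sum>t. (\<theta> t)\<^sup>2) \<le> (\<Sum>t. (a 0)\<^sup>2 * (\<bar>\<theta> t\<bar> powr p / a t powr p))"
    by (rule suminf_le[OF _ s sm2]) (rule Gamma_set_sq_le[OF p dec apos th])
  also have "\<dots> = (a 0)\<^sup>2 * (\<Sum>t. \<bar>\<theta> t\<bar> powr p / a t powr p)" by (rule suminf_mult[OF sm])
  also have "\<dots> \<le> (a 0)\<^sup>2 * 1" using le by (intro mult_left_mono) auto
  finally show "(\<Sum>t. (\<theta> t)\<^sup>2) \<le> (a 0)\<^sup>2" by simp
qed

lemma l2_dist_Gamma_set_le:
  assumes p: "1 \<le> p" "p \<le> 2" and dec: "decseq a" and apos: "\<forall>t. 0 < a t"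
    and t1: "\<theta>1 \<in> Gamma_set p a" and t2: "\<theta>2 \<in> Gamma_set p a"
  shows "l2_dist \<theta>1 \<theta>2 \<le> 2 * a 0"
proof -
  have s1: "summable (\<lambda>t. (\<theta>1 t)\<^sup>2)" and l1: "(\<Sum>t. (\<theta>1 t)\<^sup>2) \<le> (a 0)\<^sup>2"
    using Gamma_set_l2[OF p dec apos t1] by auto
  have s2: "summable (\<lambda>t. (\<theta>2 t)\<^sup>2)" and l2: "(\<Sum>t. (\<theta>2 t)\<^sup>2) \<le> (a 0)\<^sup>2"
    using Gamma_set_l2[OF p dec apos t2] by auto
  have b: "(\<theta>1 t - \<theta>2 t)\<^sup>2 \<le> 2 * (\<theta>1 t)\<^sup>2 + 2 * (\<theta>2 t)\<^sup>2" for t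
  proof -
    have "0 \<le> (\<theta>1 t + \<theta>2 t)\<^sup>2" by simp
    then show ?thesis by (simp add: power2_eq_square algebra_simps)
  qed
  have s3: "summable (\<lambda>t. 2 * (\<theta>1 t)\<^sup>2 + 2 * (\<theta>2 t)\<^sup>2)"
    using s1 s2 by (intro summable_add summable_mult)
  have s4: "summable (\<lambda>t. (\<theta>1 t - \<theta>2 t)\<^sup>2)"
    by (rule summable_comparison_test'[OF s3]) (use b in auto)
  have "(\<Sum>t. (\<theta>1 t - \<theta>2 t)\<^sup>2) \<le> (\<Sum>t. 2 * (\<theta>1 t)\<^sup>2 + 2 * (\<theta>2 t)\<^sup>2)"
    by (rule suminf_le[OF b s4 s3])
  also have "\<dots> = 2 * (\<Sum>t. (\<theta>1 t)\<^sup>2) + 2 * (\<Sum>t. (\<theta>2 t)\<^sup>2)"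
    using s1 s2 by (simp add: suminf_add[symmetric] suminf_mult summable_mult)
  also have "\<dots> \<le> (2 * a 0)\<^sup>2" using l1 l2 by (simp add: power2_eq_square)
  finally have "(\<Sum>t. (\<theta>1 t - \<theta>2 t)\<^sup>2) \<le> (2 * a 0)\<^sup>2" .
  then have "l2_dist \<theta>1 \<theta>2 \<le> sqrt ((2 * a 0)\<^sup>2)" unfolding l2_dist_def by (rule real_sqrt_le_mono)
  also have "\<dots> = 2 * a 0" by (rule real_sqrt_unique) (use apos in \<open>auto simp: less_imp_le\<close>)
  finally show ?thesis .
qed

lemma Gamma_setI_finite:
  assumes z: "\<And>t. T \<le> t \<Longrightarrow> \<theta> t = 0" and le: "(\<Sum>t<T. \<bar>\<theta> t\<bar> powr p / a t powr p) \<le> 1"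
  shows "\<theta> \<in> Gamma_set p a"
proof -
  have z': "\<And>t. t \<notin> {..<T} \<Longrightarrow> \<bar>\<theta> t\<bar> powr p / a t powr p = 0" using z by auto
  show ?thesis unfolding Gamma_set_def
    using summable_finite[of "{..<T}" "\<lambda>t. \<bar>\<theta> t\<bar> powr p / a t powr p", OF _ z']
      suminf_finite[of "{..<T}" "\<lambda>t. \<bar>\<theta> t\<bar> powr p / a t powr p", OF _ z'] le by auto
qed

lemma l2_dist_finite:
  assumes z: "\<And>t. T \<le> t \<Longrightarrow> x t = 0 \<and> y t = 0"
  shows "l2_dist x y = sqrt (\<Sum>t<T. (x t - y t)\<^sup>2)"
proof -
  have z': "\<And>t. t \<notin> {..<T} \<Longrightarrow> (x t - y t)\<^sup>2 = 0" using z by auto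
  show ?thesis unfolding l2_dist_def using suminf_finite[of "{..<T}" "\<lambda>t. (x t - y t)\<^sup>2", OF _ z'] by simp
qed

lemma Gamma_set_uminus: "\<theta> \<in> Gamma_set p a \<Longrightarrow> (\<lambda>t. - \<theta> t) \<in> Gamma_set p a"
  by (simp add: Gamma_set_def)

lemma zero_Gamma_set: "(\<lambda>_. 0) \<in> Gamma_set p a"
  by (rule Gamma_setI_finite[where T=0]) auto

lemma two_point_bound:
  assumes good: "good_lfht_test p a \<epsilon> m n \<psi>" and n: "0 < n" and m: "0 < m"
    and A: "admissible p a \<epsilon> T A1 A2" and B: "admissible p a \<epsilon> T B1 B2"
  shows "1 \<le> (\<Sum>t<T. real n * (A1 t - B1 t)\<^sup>2 + real n * (A2 t - B2 t)\<^sup>2 + real m * (A1 t - B2 t)\<^sup>2)"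
proof (rule ccontr)
  let ?D = "\<Sum>t<T. real n * (A1 t - B1 t)\<^sup>2 + real n * (A2 t - B2 t)\<^sup>2 + real m * (A1 t - B2 t)\<^sup>2"
  assume "\<not> 1 \<le> ?D"
  then have D1: "?D < 1" by simp
  have b: "1 \<le> integral\<^sup>L std_field (\<lambda>\<omega>. \<bar>mixture_lr (active_coords n m T) {()} (\<lambda>v. lfht_mean n m A1 A2 A1) \<omega>
                                 - mixture_lr (active_coords n m T) {()} (\<lambda>v. lfht_mean n m B1 B2 B2) \<omega>\<bar>)"
    by (rule good_test_mixture_l1_ge_1[OF good n m]) (use A B in auto)
  also have "\<dots> \<le> 2 * sqrt (1 - (exp (- (\<Sum>k\<in>active_coords n m T. (lfht_mean n m A1 A2 A1 k - lfht_mean n m B1 B2 B2 k)\<^sup>2) / 8))\<^sup>2)"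
    unfolding mixture_lr_singleton by (rule l1_gauss_lr_le) simp
  also have "(\<Sum>k\<in>active_coords n m T. (lfht_mean n m A1 A2 A1 k - lfht_mean n m B1 B2 B2 k)\<^sup>2) = ?D"
    by (rule sum_sq_lfht_mean_diff)
  also have "(exp (- ?D / 8))\<^sup>2 = exp (- ?D / 4)"
    by (simp add: power2_eq_square exp_add[symmetric])
  finally have c: "1 \<le> 2 * sqrt (1 - exp (- ?D / 4))" .
  have "3 / 4 \<le> exp (- 1 / 4 :: real)"
    using exp_ge_add_one_self[of "- 1 / 4 :: real"] by simp
  also have "exp (- 1 / 4 :: real) < exp (- ?D / 4)" using D1 by simp
  finally have "1 - exp (- ?D / 4) < 1 / 4" by simp
  then have "sqrt (1 - exp (- ?D / 4)) < sqrt (1 / 4)" by (rule real_sqrt_less_mono)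
  also have "sqrt (1 / 4 :: real) = 1 / 2" by (rule real_sqrt_unique) (auto simp: power2_eq_square)
  finally show False using c by simp
qed

lemma eps_le_2_a0:
  assumes p: "1 \<le> p" "p \<le> 2" and dec: "decseq a" and apos: "\<forall>t. 0 < a t"
    and ex: "\<exists>\<theta>1\<in>Gamma_set p a. \<exists>\<theta>2\<in>Gamma_set p a. l2_dist \<theta>1 \<theta>2 \<ge> \<epsilon>"
  shows "\<epsilon> \<le> 2 * a 0"
  using ex l2_dist_Gamma_set_le[OF p dec apos] by force

definition head_spike :: "real \<Rightarrow> nat \<Rightarrow> real" where
  "head_spike x t = (if t = 0 then x else 0)"

lemma head_spike_Gamma_set:
  assumes p: "1 \<le> p" and apos: "\<forall>t. 0 < a t" and x: "\<bar>x\<bar> \<le> a 0"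
  shows "head_spike x \<in> Gamma_set p a"
proof (rule Gamma_setI_finite[where T=1])
  show "\<And>t. 1 \<le> t \<Longrightarrow> head_spike x t = 0" by (simp add: head_spike_def)
  have a0: "0 < a 0" using apos by simp
  have "\<bar>x\<bar> powr p \<le> a 0 powr p" using x p by (intro powr_mono2) auto
  moreover have "0 < a 0 powr p" using a0 by simp
  ultimately show "(\<Sum>t<1. \<bar>head_spike x t\<bar> powr p / a t powr p) \<le> 1"
    by (simp add: head_spike_def)
qed

lemma two_point_sample_bounds:
  assumes p: "1 \<le> p" "p \<le> 2" and dec: "decseq a" and apos: "\<forall>t. 0 < a t"
    and eps: "0 < \<epsilon>" and n: "0 < n" and m: "0 < m"
    and ex: "\<exists>\<theta>1\<in>Gamma_set p a. \<exists>\<theta>2\<in>Gamma_set p a. l2_dist \<theta>1 \<theta>2 \<ge> \<epsilon>"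
    and good: "good_lfht_test p a \<epsilon> m n \<psi>"
  shows "1 \<le> real m * \<epsilon>\<^sup>2" and "1 \<le> 2 * (real n * \<epsilon>\<^sup>2)"
proof -
  have e2: "\<epsilon> / 2 \<le> a 0" using eps_le_2_a0[OF p dec apos ex] by simp
  let ?u = "head_spike (- \<epsilon> / 2)" and ?w = "head_spike (\<epsilon> / 2)"
  have gu: "?u \<in> Gamma_set p a" by (rule head_spike_Gamma_set[OF p(1) apos]) (use e2 eps in auto)
  have gw: "?w \<in> Gamma_set p a" by (rule head_spike_Gamma_set[OF p(1) apos]) (use e2 eps in auto)
  have d: "l2_dist ?u ?w = \<epsilon>" "l2_dist ?w ?u = \<epsilon>"
    using eps by (subst l2_dist_finite[where T=1], simp add: head_spike_def, simp add: head_spike_def)+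
  have a1: "admissible p a \<epsilon> 1 ?u ?w" using gu gw d by (simp add: admissible_def head_spike_def)
  have a2: "admissible p a \<epsilon> 1 ?w ?u" using gu gw d by (simp add: admissible_def head_spike_def)
  show "1 \<le> real m * \<epsilon>\<^sup>2"
    using two_point_bound[OF good n m a1 a1] by (simp add: head_spike_def power2_eq_square algebra_simps)
  show "1 \<le> 2 * (real n * \<epsilon>\<^sup>2)"
    using two_point_bound[OF good n m a1 a2] by (simp add: head_spike_def power2_eq_square algebra_simps)
qed

section \<open>The spike prior\<close>

lemma sum_lessThan_blocks:
  fixes s k :: nat and h :: "nat \<Rightarrow> 'a::comm_monoid_add"
  shows "(\<Sum>t<s * k. h t) = (\<Sum>b<s. \<Sum>j<k. h (b * k + j))"
proof -
  have "(\<Sum>t<s * k. h t) = (\<Sum>b<s. sum h {b * k ..< b * k + k})"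
    by (rule sum.nat_group[symmetric])
  also have "\<dots> = (\<Sum>b<s. \<Sum>j<k. h (b * k + j))"
    by (simp add: sum.shift_bounds_nat_ivl[of h 0 _ k, simplified] atLeast0LessThan add.commute)
  finally show ?thesis .
qed

text \<open>The prior of the lower bounds: the first \<open>s k\<close> coordinates are cut into \<open>s\<close> blocks of
  length \<open>k\<close>, and a configuration \<open>v\<close> chooses in every block \<open>b\<close> one position \<open>fst (v b) < k\<close> and
  one sign \<open>snd (v b) = \<plusminus>1\<close>; \<open>spike_seq\<close> puts the value \<open>\<plusminus>\<rho>\<close> there.\<close>

definition spike_choices :: "nat \<Rightarrow> (nat \<times> real) set" where
  "spike_choices k = {..<k} \<times> {-1, 1}"

lemma finite_spike_choices[simp]: "finite (spike_choices k)" by (simp add: spike_choices_def)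
lemma card_spike_choices: "card (spike_choices k) = 2 * k" by (simp add: spike_choices_def card_cartesian_product)

definition block_spike :: "nat \<Rightarrow> real \<Rightarrow> nat \<Rightarrow> nat \<times> real \<Rightarrow> nat \<Rightarrow> real" where
  "block_spike k \<rho> b a t = (if t = b * k + fst a then snd a * \<rho> else 0)"

definition spike_seq :: "nat \<Rightarrow> real \<Rightarrow> nat \<Rightarrow> (nat \<Rightarrow> nat \<times> real) \<Rightarrow> nat \<Rightarrow> real" where
  "spike_seq k \<rho> s v t = (\<Sum>b<s. block_spike k \<rho> b (v b) t)"

definition spike_configs :: "nat \<Rightarrow> nat \<Rightarrow> (nat \<Rightarrow> nat \<times> real) set" where
  "spike_configs s k = PiE {..<s} (\<lambda>_. spike_choices k)"

lemma finite_spike_configs[simp]: "finite (spike_configs s k)" by (simp add: spike_configs_def finite_PiE)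

lemma spike_configs_nonempty: "0 < k \<Longrightarrow> spike_configs s k \<noteq> {}"
  unfolding spike_configs_def by (auto simp: PiE_eq_empty_iff spike_choices_def)

lemma block_index_eq_iff: fixes j k b b' :: nat shows "j < k \<Longrightarrow> j' < k \<Longrightarrow> (b * k + j = b' * k + j') \<longleftrightarrow> (b = b' \<and> j = j')"
proof
  assume jk: "j < k" "j' < k" and e: "b * k + j = b' * k + j'"
  have "(b * k + j) div k = b" "(b' * k + j') div k = b'" using jk by auto
  with e have "b = b'" by simp
  with e show "b = b' \<and> j = j'" by simp
qed simp

lemma spike_configsD:
  assumes "v \<in> spike_configs s k" "b < s"
  shows "fst (v b) < k" "snd (v b) \<in> {-1, 1}"
proof -
  have "v b \<in> spike_choices k" using assms by (auto simp: spike_configs_def PiE_iff)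
  then show "fst (v b) < k" "snd (v b) \<in> {-1, 1}" by (auto simp: spike_choices_def mem_Times_iff)
qed

lemma block_spike_beyond: "v \<in> spike_configs s k \<Longrightarrow> b < s \<Longrightarrow> s * k \<le> t \<Longrightarrow> block_spike k \<rho> b (v b) t = 0"
proof -
  assume v: "v \<in> spike_configs s k" and b: "b < s" and t: "s * k \<le> t"
  have "fst (v b) < k" using spike_configsD[OF v b] by simp
  moreover have "b * k + k \<le> s * k" using b by (metis Suc_leI add.commute mult_Suc mult_le_mono1)
  ultimately show ?thesis using t by (auto simp: block_spike_def)
qed

lemma spike_seq_beyond: "v \<in> spike_configs s k \<Longrightarrow> s * k \<le> t \<Longrightarrow> spike_seq k \<rho> s v t = 0"
  unfolding spike_seq_def using block_spike_beyond by (auto intro!: sum.neutral)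

lemma spike_seq_block:
  assumes v: "v \<in> spike_configs s k" and b: "b < s" and j: "j < k"
  shows "spike_seq k \<rho> s v (b * k + j) = (if j = fst (v b) then snd (v b) * \<rho> else 0)"
proof -
  have vk: "\<And>b'. b' < s \<Longrightarrow> fst (v b') < k" using spike_configsD[OF v] by simp
  have "spike_seq k \<rho> s v (b * k + j) = (\<Sum>b'<s. if b' = b then (if j = fst (v b) then snd (v b) * \<rho> else 0) else 0)"
    unfolding spike_seq_def
  proof (intro sum.cong refl)
    fix b' assume b': "b' \<in> {..<s}"
    show "block_spike k \<rho> b' (v b') (b * k + j) = (if b' = b then (if j = fst (v b) then snd (v b) * \<rho> else 0) else 0)"
      using block_index_eq_iff[OF j vk[of b'], of b b'] b' by (auto simp: block_spike_def)
  qed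
  also have "\<dots> = (if j = fst (v b) then snd (v b) * \<rho> else 0)" using b by simp
  finally show ?thesis .
qed

lemma inner_spike_seq:
  assumes v: "v \<in> spike_configs s k" and w: "w \<in> spike_configs s k"
  shows "(\<Sum>t<s * k. spike_seq k \<rho> s v t * spike_seq k \<rho> s w t) =
    (\<Sum>b<s. if fst (v b) = fst (w b) then snd (v b) * snd (w b) * \<rho>\<^sup>2 else 0)"
proof -
  have "(\<Sum>t<s * k. spike_seq k \<rho> s v t * spike_seq k \<rho> s w t) = (\<Sum>b<s. \<Sum>j<k. spike_seq k \<rho> s v (b * k + j) * spike_seq k \<rho> s w (b * k + j))"
    by (rule sum_lessThan_blocks)
  also have "\<dots> = (\<Sum>b<s. \<Sum>j<k. if j = fst (v b) then (if fst (v b) = fst (w b) then snd (v b) * snd (w b) * \<rho>\<^sup>2 else 0) else 0)"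
    by (intro sum.cong refl) (auto simp: spike_seq_block[OF v] spike_seq_block[OF w] power2_eq_square)
  also have "\<dots> = (\<Sum>b<s. if fst (v b) = fst (w b) then snd (v b) * snd (w b) * \<rho>\<^sup>2 else 0)"
  proof (intro sum.cong refl)
    fix b assume b: "b \<in> {..<s}"
    have "fst (v b) < k" using spike_configsD[OF v] b by simp
    then show "(\<Sum>j<k. if j = fst (v b) then (if fst (v b) = fst (w b) then snd (v b) * snd (w b) * \<rho>\<^sup>2 else 0) else 0)
        = (if fst (v b) = fst (w b) then snd (v b) * snd (w b) * \<rho>\<^sup>2 else 0)"
      by (subst sum.delta) auto
  qed
  finally show ?thesis .
qed

lemma spike_configs_sign_sq: "v \<in> spike_configs s k \<Longrightarrow> b < s \<Longrightarrow> snd (v b) * snd (v b) = 1"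
  using spike_configsD(2)[of v s k b] by auto

lemma spike_configs_sign_abs: "v \<in> spike_configs s k \<Longrightarrow> b < s \<Longrightarrow> \<bar>snd (v b)\<bar> = 1"
  using spike_configsD(2)[of v s k b] by auto

lemma sum_sq_spike_seq:
  assumes v: "v \<in> spike_configs s k"
  shows "(\<Sum>t<s * k. (spike_seq k \<rho> s v t)\<^sup>2) = real s * \<rho>\<^sup>2"
proof -
  have "(\<Sum>t<s * k. (spike_seq k \<rho> s v t)\<^sup>2) = (\<Sum>t<s * k. spike_seq k \<rho> s v t * spike_seq k \<rho> s v t)"
    by (simp add: power2_eq_square)
  also have "\<dots> = (\<Sum>b<s. snd (v b) * snd (v b) * \<rho>\<^sup>2)" by (simp add: inner_spike_seq[OF v v])
  also have "\<dots> = (\<Sum>b<s. \<rho>\<^sup>2)"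
    using spike_configs_sign_sq[OF v] by (intro sum.cong refl) auto
  finally show ?thesis by simp
qed

lemma sum_powr_spike_seq_le:
  assumes v: "v \<in> spike_configs s k" and p: "0 < p" and rho: "0 \<le> \<rho>"
    and dec: "decseq a" and apos: "\<forall>t. 0 < a t" and skd: "s * k \<le> d"
  shows "(\<Sum>t<s * k. \<bar>spike_seq k \<rho> s v t\<bar> powr p / a t powr p) \<le> real s * \<rho> powr p / a (d - 1) powr p"
proof -
  have "(\<Sum>t<s * k. \<bar>spike_seq k \<rho> s v t\<bar> powr p / a t powr p) =
      (\<Sum>b<s. \<Sum>j<k. \<bar>spike_seq k \<rho> s v (b * k + j)\<bar> powr p / a (b * k + j) powr p)"
    by (rule sum_lessThan_blocks)
  also have "\<dots> = (\<Sum>b<s. \<rho> powr p / a (b * k + fst (v b)) powr p)"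
  proof (intro sum.cong refl)
    fix b assume b: "b \<in> {..<s}"
    have vb: "fst (v b) < k" "snd (v b) \<in> {-1, 1}" using spike_configsD[OF v] b by auto
    have "(\<Sum>j<k. \<bar>spike_seq k \<rho> s v (b * k + j)\<bar> powr p / a (b * k + j) powr p)
       = (\<Sum>j<k. if j = fst (v b) then \<rho> powr p / a (b * k + fst (v b)) powr p else 0)"
    proof (intro sum.cong refl)
      fix j assume j: "j \<in> {..<k}"
      have b': "b < s" using b by simp
      show "\<bar>spike_seq k \<rho> s v (b * k + j)\<bar> powr p / a (b * k + j) powr p
          = (if j = fst (v b) then \<rho> powr p / a (b * k + fst (v b)) powr p else 0)"
        using spike_seq_block[OF v b', of j] j spike_configs_sign_abs[OF v b'] rho by (simp add: abs_mult)
    qed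
    also have "\<dots> = \<rho> powr p / a (b * k + fst (v b)) powr p" using vb by (subst sum.delta) auto
    finally show "(\<Sum>j<k. \<bar>spike_seq k \<rho> s v (b * k + j)\<bar> powr p / a (b * k + j) powr p) = \<rho> powr p / a (b * k + fst (v b)) powr p" .
  qed
  also have "\<dots> \<le> (\<Sum>b<s. \<rho> powr p / a (d - 1) powr p)"
  proof (intro sum_mono)
    fix b assume b: "b \<in> {..<s}"
    have vb: "fst (v b) < k" using spike_configsD[OF v] b by auto
    have "b * k + k \<le> s * k" using b by (metis Suc_leI lessThan_iff add.commute mult_Suc mult_le_mono1)
    then have le: "b * k + fst (v b) \<le> d - 1" using vb skd by linarith
    have "a (d - 1) \<le> a (b * k + fst (v b))" using dec le by (simp add: decseq_def)
    then have "a (d - 1) powr p \<le> a (b * k + fst (v b)) powr p"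
      using apos p by (intro powr_mono2) (auto simp: less_imp_le)
    moreover have "0 < a (d - 1) powr p" using apos[rule_format, of "d - 1"] by simp
    ultimately show "\<rho> powr p / a (b * k + fst (v b)) powr p \<le> \<rho> powr p / a (d - 1) powr p"
      by (intro divide_left_mono) (auto intro!: mult_pos_pos)
  qed
  also have "\<dots> = real s * \<rho> powr p / a (d - 1) powr p" by simp
  finally show ?thesis .
qed

definition spike_inner :: "real \<Rightarrow> nat \<times> real \<Rightarrow> nat \<times> real \<Rightarrow> real" where
  "spike_inner \<rho> a a' = (if fst a = fst a' then snd a * snd a' * \<rho>\<^sup>2 else 0)"

lemma inner_spike_seq_spike_inner: "v \<in> spike_configs s k \<Longrightarrow> w \<in> spike_configs s k \<Longrightarrow>
   (\<Sum>t<s * k. spike_seq k \<rho> s v t * spike_seq k \<rho> s w t) = (\<Sum>b<s. spike_inner \<rho> (v b) (w b))"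
  unfolding spike_inner_def by (rule inner_spike_seq)

lemma sum_exp_inner_spike_configs:
  "(\<Sum>v\<in>spike_configs s k. \<Sum>w\<in>spike_configs s k. exp (c * (\<Sum>b<s. spike_inner \<rho> (v b) (w b)))) =
     (\<Sum>a\<in>spike_choices k. \<Sum>a'\<in>spike_choices k. exp (c * spike_inner \<rho> a a')) ^ s"
proof -
  have "(\<Sum>v\<in>spike_configs s k. \<Sum>w\<in>spike_configs s k. exp (c * (\<Sum>b<s. spike_inner \<rho> (v b) (w b)))) =
      (\<Sum>v\<in>spike_configs s k. \<Sum>w\<in>spike_configs s k. \<Prod>b<s. exp (c * spike_inner \<rho> (v b) (w b)))"
    by (simp add: sum_distrib_left exp_sum)
  also have "\<dots> = (\<Sum>v\<in>spike_configs s k. \<Prod>b<s. \<Sum>a'\<in>spike_choices k. exp (c * spike_inner \<rho> (v b) a'))"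
    unfolding spike_configs_def by (intro sum.cong refl prod_sum_PiE[symmetric]) auto
  also have "\<dots> = (\<Prod>b<s. \<Sum>a\<in>spike_choices k. \<Sum>a'\<in>spike_choices k. exp (c * spike_inner \<rho> a a'))"
    unfolding spike_configs_def by (rule prod_sum_PiE[symmetric]) auto
  also have "\<dots> = (\<Sum>a\<in>spike_choices k. \<Sum>a'\<in>spike_choices k. exp (c * spike_inner \<rho> a a')) ^ s" by simp
  finally show ?thesis .
qed

lemma sum_if_eq_const: "j < k \<Longrightarrow> (\<Sum>j'<k. if j = j' then X else Y) = X + (real k - 1) * (Y::real)"
proof -
  assume j: "j < k"
  have "(\<Sum>j'<k. if j = j' then X else Y) = (\<Sum>j'<k. Y + (if j = j' then X - Y else 0))"
    by (intro sum.cong refl) auto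
  also have "\<dots> = real k * Y + (X - Y)" using j by (simp add: sum.distrib)
  finally show ?thesis by (simp add: algebra_simps)
qed

lemma sum_exp_spike_inner:
  "(\<Sum>a\<in>spike_choices k. \<Sum>a'\<in>spike_choices k. exp (c * spike_inner \<rho> a a')) =
     real k * (4 * real k - 4 + 2 * exp (c * \<rho>\<^sup>2) + 2 * exp (- (c * \<rho>\<^sup>2)))"
proof -
  have pm: "{-1, 1::real} = insert (-1) {1}" by simp
  have inner: "(\<Sum>a'\<in>spike_choices k. exp (c * spike_inner \<rho> (j, \<sigma>) a')) =
      (exp (- (c * \<sigma> * \<rho>\<^sup>2)) + exp (c * \<sigma> * \<rho>\<^sup>2)) + (real k - 1) * 2"
    if j: "j < k" for j \<sigma>
  proof -
    have "(\<Sum>a'\<in>spike_choices k. exp (c * spike_inner \<rho> (j, \<sigma>) a')) =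
        (\<Sum>j'<k. \<Sum>\<sigma>'\<in>{-1, 1}. exp (c * spike_inner \<rho> (j, \<sigma>) (j', \<sigma>')))"
      unfolding spike_choices_def by (rule sum.cartesian_product')
    also have "\<dots> = (\<Sum>j'<k. if j = j' then exp (- (c * \<sigma> * \<rho>\<^sup>2)) + exp (c * \<sigma> * \<rho>\<^sup>2) else 2)"
      by (intro sum.cong refl) (auto simp: spike_inner_def mult.assoc)
    also have "\<dots> = (exp (- (c * \<sigma> * \<rho>\<^sup>2)) + exp (c * \<sigma> * \<rho>\<^sup>2)) + (real k - 1) * 2"
      using j by (rule sum_if_eq_const)
    finally show ?thesis .
  qed
  have "(\<Sum>a\<in>spike_choices k. \<Sum>a'\<in>spike_choices k. exp (c * spike_inner \<rho> a a')) =
      (\<Sum>j<k. \<Sum>\<sigma>\<in>{-1, 1}. \<Sum>a'\<in>spike_choices k. exp (c * spike_inner \<rho> (j, \<sigma>) a'))"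
    unfolding spike_choices_def[of k] by (rule sum.cartesian_product')
  also have "\<dots> = (\<Sum>j<k. 4 * real k - 4 + 2 * exp (c * \<rho>\<^sup>2) + 2 * exp (- (c * \<rho>\<^sup>2)))"
    by (intro sum.cong refl) (simp add: inner algebra_simps)
  also have "\<dots> = real k * (4 * real k - 4 + 2 * exp (c * \<rho>\<^sup>2) + 2 * exp (- (c * \<rho>\<^sup>2)))" by simp
  finally show ?thesis .
qed

lemma card_spike_configs: "card (spike_configs s k) = (2 * k) ^ s"
  unfolding spike_configs_def by (simp add: card_PiE card_spike_choices)

lemma block_spike_block: "a \<in> spike_choices k \<Longrightarrow> block_spike k \<rho> b a t \<noteq> 0 \<Longrightarrow> t div k = b"
  by (auto simp: block_spike_def spike_choices_def split: if_splits)

lemma spike_seq_in_block: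
  assumes v: "v \<in> spike_configs s k" and b: "b < s" and t: "t div k = b"
  shows "spike_seq k \<rho> s v t = block_spike k \<rho> b (v b) t"
proof -
  have vb: "\<And>b'. b' < s \<Longrightarrow> v b' \<in> spike_choices k" using v by (auto simp: spike_configs_def PiE_iff)
  have "spike_seq k \<rho> s v t = (\<Sum>b'<s. if b' = b then block_spike k \<rho> b (v b) t else 0)"
    unfolding spike_seq_def
  proof (intro sum.cong refl)
    fix b' assume b': "b' \<in> {..<s}"
    have vb': "v b' \<in> spike_choices k" using vb b' by simp
    show "block_spike k \<rho> b' (v b') t = (if b' = b then block_spike k \<rho> b (v b) t else 0)"
    proof (cases "b' = b")
      case False
      have "block_spike k \<rho> b' (v b') t = 0"
      proof (rule ccontr)
        assume ne: "block_spike k \<rho> b' (v b') t \<noteq> 0"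
        have "t div k = b'" by (rule block_spike_block[OF vb' ne])
        with t False show False by simp
      qed
      with False show ?thesis by simp
    qed simp
  qed
  also have "\<dots> = block_spike k \<rho> b (v b) t" using b by simp
  finally show ?thesis .
qed

lemma mult_powr_le_of_sq_le:
  fixes s \<epsilon> \<rho> p :: real
  assumes s: "0 < s" and eps: "0 < \<epsilon>" and p: "0 \<le> p" and \<rho>: "0 \<le> \<rho>" "\<rho>\<^sup>2 \<le> \<epsilon>\<^sup>2 / s"
  shows "s * \<rho> powr p \<le> s powr (1 - p / 2) * \<epsilon> powr p"
proof -
  have "\<rho> = sqrt (\<rho>\<^sup>2)"
    using \<rho> by simp
  also have "\<dots> \<le> sqrt (\<epsilon>\<^sup>2 / s)"
    using \<rho> by (intro real_sqrt_le_mono) auto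
  also have "\<dots> = \<epsilon> / sqrt s"
    using eps by (simp add: real_sqrt_divide)
  finally have "\<rho> powr p \<le> (\<epsilon> / sqrt s) powr p"
    using \<rho> p by (intro powr_mono2) auto
  also have "\<dots> = \<epsilon> powr p / s powr (p / 2)"
    using s by (simp add: powr_divide powr_half_sqrt[symmetric] powr_powr)
  finally have "s * \<rho> powr p \<le> s * (\<epsilon> powr p / s powr (p / 2))"
    using s by (intro mult_left_mono) auto
  also have "s * (\<epsilon> powr p / s powr (p / 2)) = s powr (1 - p / 2) * \<epsilon> powr p"
    using s by (simp add: powr_diff)
  finally show ?thesis .
qed

text \<open>This is where the threshold \<open>192 \<epsilon>\<^sup>2 \<le> a\<^sub>d\<^sup>p n\<^bsup>(p-2)/2\<^esup>\<close> of \<open>d\<^sub>l\<close> enters: \<open>s\<close> spikes of height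
  \<open>\<epsilon> / \<surd>s\<close> with \<open>s \<le> 4 n \<epsilon>\<^sup>2\<close> fit into \<open>\<Gamma>\<close> below the \<open>d\<close>-th coordinate.\<close>

lemma spike_budget:
  fixes p \<epsilon> N s A \<rho> :: real
  assumes p: "1 \<le> p" "p \<le> 2" and eps: "0 < \<epsilon>" and N: "0 < N" and s: "0 < s" "s \<le> 4 * N * \<epsilon>\<^sup>2"
    and A: "192 * \<epsilon>\<^sup>2 \<le> A powr p * N powr ((p - 2) / 2)"
    and \<rho>: "0 \<le> \<rho>" "\<rho>\<^sup>2 \<le> \<epsilon>\<^sup>2 / s"
  shows "s * \<rho> powr p \<le> A powr p"
proof -
  define e where "e = 1 - p / 2"
  have e: "0 \<le> e" "e \<le> 1"
    using p by (auto simp: e_def)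
  have "s * \<rho> powr p \<le> s powr e * \<epsilon> powr p"
    unfolding e_def using s(1) eps p \<rho> by (intro mult_powr_le_of_sq_le) auto
  also have "\<dots> \<le> (4 * N * \<epsilon>\<^sup>2) powr e * \<epsilon> powr p"
    using s e by (intro mult_right_mono powr_mono2) auto
  also have "\<dots> = 4 powr e * N powr e * (\<epsilon> powr (2 * e) * \<epsilon> powr p)"
    using N eps by (simp add: powr_mult powr_powr[symmetric] powr_numeral[symmetric] del: powr_numeral)
  also have "\<epsilon> powr (2 * e) * \<epsilon> powr p = \<epsilon>\<^sup>2"
    using eps by (simp add: powr_add[symmetric] e_def)
  also have "4 powr e * N powr e * \<epsilon>\<^sup>2 \<le> 192 * \<epsilon>\<^sup>2 * N powr e"
    using powr_mono[OF e(2), of 4] N by (simp add: mult_right_mono)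
  also have "\<dots> \<le> A powr p * (N powr ((p - 2) / 2) * N powr e)"
    using A N by (simp add: mult_right_mono)
  also have "N powr ((p - 2) / 2) * N powr e = 1"
    using N by (simp add: powr_add[symmetric] e_def field_simps)
  finally show ?thesis
    by simp
qed

lemma spike_seq_Gamma_set:
  assumes p: "1 \<le> p" "p \<le> 2" and dec: "decseq a" and apos: "\<forall>t. 0 < a t" and eps: "0 < \<epsilon>" and n: "0 < n"
    and v: "v \<in> spike_configs s k" and spos: "0 < s" and skd: "s * k \<le> d" and s4: "real s \<le> 4 * real n * \<epsilon>\<^sup>2"
    and A: "192 * \<epsilon>\<^sup>2 \<le> a (d - 1) powr p * real n powr ((p - 2) / 2)"
    and rho: "0 \<le> \<rho>" "\<rho>\<^sup>2 \<le> \<epsilon>\<^sup>2 / real s"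
  shows "spike_seq k \<rho> s v \<in> Gamma_set p a"
proof (rule Gamma_setI_finite[where T="s * k"])
  show "\<And>t. s * k \<le> t \<Longrightarrow> spike_seq k \<rho> s v t = 0" using spike_seq_beyond[OF v] by auto
  have a0: "0 < a (d - 1)" using apos by auto
  have "(\<Sum>t<s * k. \<bar>spike_seq k \<rho> s v t\<bar> powr p / a t powr p) \<le> real s * \<rho> powr p / a (d - 1) powr p"
    by (rule sum_powr_spike_seq_le[OF v _ rho(1) dec apos skd]) (use p in auto)
  also have "\<dots> \<le> 1"
  proof -
    have "real s * \<rho> powr p \<le> a (d - 1) powr p"
      by (rule spike_budget[OF p eps _ _ s4 A rho]) (use n spos in auto)
    then show ?thesis using a0 by simp
  qed
  finally show "(\<Sum>t<s * k. \<bar>spike_seq k \<rho> s v t\<bar> powr p / a t powr p) \<le> 1" .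
qed

lemma l2_dist_zero_spike_seq:
  assumes v: "v \<in> spike_configs s k" and rho: "0 \<le> \<rho>"
  shows "l2_dist (\<lambda>_. 0) (spike_seq k \<rho> s v) = sqrt (real s) * \<rho>" "l2_dist (spike_seq k \<rho> s v) (\<lambda>_. 0) = sqrt (real s) * \<rho>"
proof -
  have z: "\<And>t. s * k \<le> t \<Longrightarrow> (0::real) = 0 \<and> spike_seq k \<rho> s v t = 0" "\<And>t. s * k \<le> t \<Longrightarrow> spike_seq k \<rho> s v t = 0 \<and> (0::real) = 0"
    using spike_seq_beyond[OF v] by auto
  show "l2_dist (\<lambda>_. 0) (spike_seq k \<rho> s v) = sqrt (real s) * \<rho>"
    using l2_dist_finite[of "s * k" "\<lambda>_. 0" "spike_seq k \<rho> s v", OF z(1)] sum_sq_spike_seq[OF v] rho by (simp add: real_sqrt_mult)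
  show "l2_dist (spike_seq k \<rho> s v) (\<lambda>_. 0) = sqrt (real s) * \<rho>"
    using l2_dist_finite[of "s * k" "spike_seq k \<rho> s v" "\<lambda>_. 0", OF z(2)] sum_sq_spike_seq[OF v] rho by (simp add: real_sqrt_mult)
qed

lemma l2_dist_spike_seq_uminus:
  assumes v: "v \<in> spike_configs s k" and rho: "0 \<le> \<rho>"
  shows "l2_dist (spike_seq k \<rho> s v) (\<lambda>t. - spike_seq k \<rho> s v t) = 2 * sqrt (real s) * \<rho>"
proof -
  have z: "\<And>t. s * k \<le> t \<Longrightarrow> spike_seq k \<rho> s v t = 0 \<and> - spike_seq k \<rho> s v t = 0"
    using spike_seq_beyond[OF v] by auto
  have "l2_dist (spike_seq k \<rho> s v) (\<lambda>t. - spike_seq k \<rho> s v t) = sqrt (\<Sum>t<s * k. (spike_seq k \<rho> s v t - - spike_seq k \<rho> s v t)\<^sup>2)"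
    by (rule l2_dist_finite[OF z])
  also have "(\<Sum>t<s * k. (spike_seq k \<rho> s v t - - spike_seq k \<rho> s v t)\<^sup>2) = 4 * (\<Sum>t<s * k. (spike_seq k \<rho> s v t)\<^sup>2)"
    by (simp add: sum_distrib_left power2_eq_square algebra_simps)
  also have "\<dots> = 4 * (real s * \<rho>\<^sup>2)" by (simp add: sum_sq_spike_seq[OF v])
  also have "sqrt (4 * (real s * \<rho>\<^sup>2)) = 2 * sqrt (real s) * \<rho>"
    using rho by (simp add: real_sqrt_mult)
  finally show ?thesis .
qed

lemma d_l_threshold:
  assumes p: "1 \<le> p" and apos: "\<forall>t. 0 < a t" and lim: "a \<longlonglongrightarrow> 0" and eps: "0 < \<epsilon>" and n: "0 < n"
    and d: "1 \<le> d_l p a n \<epsilon>"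
  shows "192 * \<epsilon>\<^sup>2 \<le> a (d_l p a n \<epsilon> - 1) powr p * real n powr ((p - 2) / 2)"
proof -
  define D where "D = {d::nat. 1 \<le> d \<and> a (d - 1) powr p * real n powr ((p - 2) / 2) \<ge> 192 * \<epsilon>\<^sup>2}"
  have spike_inner: "d_l p a n \<epsilon> = (if D = {} then 0 else Max D)" unfolding d_l_def D_def Let_def by simp
  have c: "0 < real n powr ((p - 2) / 2)" using n by simp
  have "((\<lambda>t. a t powr p) \<longlongrightarrow> 0) sequentially"
  proof (rule tendsto_zero_powrI[OF lim tendsto_const])
    show "eventually (\<lambda>t. 0 \<le> a t) sequentially" using apos by (auto intro!: always_eventually less_imp_le)
  qed (use p in auto)
  then have "((\<lambda>t. a t powr p * real n powr ((p - 2) / 2)) \<longlongrightarrow> 0 * real n powr ((p - 2) / 2)) sequentially"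
    by (intro tendsto_mult tendsto_const)
  then have "eventually (\<lambda>t. a t powr p * real n powr ((p - 2) / 2) < 192 * \<epsilon>\<^sup>2) sequentially"
    using eps by (intro order_tendstoD(2)) auto
  then obtain N where N: "\<And>t. N \<le> t \<Longrightarrow> a t powr p * real n powr ((p - 2) / 2) < 192 * \<epsilon>\<^sup>2"
    by (auto simp: eventually_sequentially)
  have "D \<subseteq> {..N}"
  proof
    fix x assume "x \<in> D"
    then have "\<not> N \<le> x - 1" using N[of "x - 1"] by (auto simp: D_def)
    then show "x \<in> {..N}" by auto
  qed
  then have fin: "finite D" by (rule finite_subset) simp
  have ne: "D \<noteq> {}" using d spike_inner by (auto split: if_splits)
  have "Max D \<in> D" by (rule Max_in[OF fin ne])
  then have "192 * \<epsilon>\<^sup>2 \<le> a (Max D - 1) powr p * real n powr ((p - 2) / 2)"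
    unfolding D_def by blast
  moreover have "d_l p a n \<epsilon> = Max D" using spike_inner ne by simp
  ultimately show ?thesis by simp
qed

lemma block_partition:
  fixes z :: real and d :: nat
  assumes z: "1 / 2 \<le> z" "z \<le> real d"
  obtains s k :: nat where "0 < s" "0 < k" "z \<le> real s" "real s \<le> z + 1"
    "s * k \<le> d" "real d \<le> 2 * real s * real k"
proof
  define s where "s = nat \<lceil>z\<rceil>"
  define k where "k = d div s"
  have s_eq: "real s = of_int \<lceil>z\<rceil>"
    unfolding s_def using z by simp
  show s_ge: "z \<le> real s" and "real s \<le> z + 1"
    unfolding s_eq by (simp_all add: le_of_int_ceiling of_int_ceiling_le_add_one)
  show s: "0 < s"
    using s_ge z by simp
  have "s \<le> d"
    using z by (simp add: s_def ceiling_le_iff nat_le_iff)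
  then show k: "0 < k"
    unfolding k_def using s by (simp add: div_greater_zero_iff)
  have d: "d = s * k + d mod s"
    unfolding k_def by simp
  then show "s * k \<le> d"
    by linarith
  have "d mod s < s" "s \<le> s * k"
    using s k by simp_all
  then have "d \<le> 2 * s * k"
    using d by linarith
  then show "real d \<le> 2 * real s * real k"
    by (metis of_nat_le_iff of_nat_mult of_nat_numeral)
qed

lemma admissible_zero_spike_seq:
  assumes v: "v \<in> spike_configs s k" and \<rho>: "0 \<le> \<rho>" "sqrt (real s) * \<rho> = \<epsilon>"
    and \<Gamma>: "spike_seq k \<rho> s v \<in> Gamma_set p a"
  shows "admissible p a \<epsilon> (s * k) (\<lambda>_. 0) (spike_seq k \<rho> s v)"
    and "admissible p a \<epsilon> (s * k) (spike_seq k \<rho> s v) (\<lambda>_. 0)"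
  using \<Gamma> zero_Gamma_set l2_dist_zero_spike_seq[OF v \<rho>(1)] \<rho>(2) spike_seq_beyond[OF v]
  by (auto simp: admissible_def)

lemma admissible_spike_seq_uminus:
  assumes v: "v \<in> spike_configs s k" and \<rho>: "0 \<le> \<rho>" "2 * sqrt (real s) * \<rho> = \<epsilon>"
    and \<Gamma>: "spike_seq k \<rho> s v \<in> Gamma_set p a"
  shows "admissible p a \<epsilon> (s * k) (spike_seq k \<rho> s v) (\<lambda>t. - spike_seq k \<rho> s v t)"
  using \<Gamma> Gamma_set_uminus[OF \<Gamma>] l2_dist_spike_seq_uminus[OF v \<rho>(1)] \<rho>(2) spike_seq_beyond[OF v]
  by (auto simp: admissible_def)

section \<open>Swapping the spikes between the samples\<close>

lemma mixture_lr_mult: "mixture_lr F V h \<omega> * mixture_lr F W h' \<omega> =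
   (\<Sum>v\<in>V. \<Sum>w\<in>W. gauss_lr F (h v) \<omega> * gauss_lr F (h' w) \<omega>) / (real (card V) * real (card W))"
  unfolding mixture_lr_def by (simp add: sum_product)

lemma integral_mixture_lr_mult:
  assumes F: "finite F"
  shows "integrable std_field (\<lambda>\<omega>. mixture_lr F V h \<omega> * mixture_lr F W h' \<omega>)"
    and "integral\<^sup>L std_field (\<lambda>\<omega>. mixture_lr F V h \<omega> * mixture_lr F W h' \<omega>) =
      (\<Sum>v\<in>V. \<Sum>w\<in>W. exp (\<Sum>k\<in>F. h v k * h' w k)) / (real (card V) * real (card W))"
proof -
  have i: "integrable std_field (\<lambda>\<omega>. gauss_lr F (h v) \<omega> * gauss_lr F (h' w) \<omega>)" for v w by (rule integrable_gauss_lr_mult[OF F])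
  show "integrable std_field (\<lambda>\<omega>. mixture_lr F V h \<omega> * mixture_lr F W h' \<omega>)"
    unfolding mixture_lr_mult using i by (intro integrable_divide_zero Bochner_Integration.integrable_sum) auto
  show "integral\<^sup>L std_field (\<lambda>\<omega>. mixture_lr F V h \<omega> * mixture_lr F W h' \<omega>) =
      (\<Sum>v\<in>V. \<Sum>w\<in>W. exp (\<Sum>k\<in>F. h v k * h' w k)) / (real (card V) * real (card W))"
    unfolding mixture_lr_mult using i
    by (simp add: Bochner_Integration.integral_sum Bochner_Integration.integrable_sum integral_gauss_lr_mult[OF F])
qed

lemma inner_mean_zero_spike:
  assumes v: "v \<in> spike_configs s k" and w: "w \<in> spike_configs s k"
  shows "(\<Sum>i\<in>active_coords n m (s * k). lfht_mean n m (\<lambda>_. 0) (spike_seq k \<rho> s v) (\<lambda>_. 0) i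
      * lfht_mean n m (\<lambda>_. 0) (spike_seq k \<rho> s w) (\<lambda>_. 0) i) = real n * (\<Sum>b<s. spike_inner \<rho> (v b) (w b))"
  unfolding inner_lfht_mean by (simp add: sum_distrib_left[symmetric] inner_spike_seq_spike_inner[OF v w])

lemma inner_mean_spike_zero:
  assumes v: "v \<in> spike_configs s k" and w: "w \<in> spike_configs s k"
  shows "(\<Sum>i\<in>active_coords n m (s * k). lfht_mean n m (spike_seq k \<rho> s v) (\<lambda>_. 0) (\<lambda>_. 0) i
      * lfht_mean n m (spike_seq k \<rho> s w) (\<lambda>_. 0) (\<lambda>_. 0) i) = real n * (\<Sum>b<s. spike_inner \<rho> (v b) (w b))"
  unfolding inner_lfht_mean by (simp add: sum_distrib_left[symmetric] inner_spike_seq_spike_inner[OF v w])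

text \<open>The null mixture puts the spikes into the \<open>Y\<close>-sample and the alternative into the
  \<open>X\<close>-sample, with \<open>Z\<close> pure noise in both. Their mean vectors are orthogonal, so the cross moment
  is \<open>1\<close>, while both second moments equal \<open>R\<^sup>s\<close> with \<open>R - 1\<close> of order \<open>(n \<rho>\<^sup>2)\<^sup>2 / k\<close>.\<close>

lemma integral_swap_mixtures_diff_sq:
  fixes n m s k :: nat and \<rho> :: real
  assumes k: "0 < k"
  defines "f \<equiv> mixture_lr (active_coords n m (s * k)) (spike_configs s k)
      (\<lambda>v. lfht_mean n m (\<lambda>_. 0) (spike_seq k \<rho> s v) (\<lambda>_. 0))"
    and "g \<equiv> mixture_lr (active_coords n m (s * k)) (spike_configs s k)
      (\<lambda>v. lfht_mean n m (spike_seq k \<rho> s v) (\<lambda>_. 0) (\<lambda>_. 0))"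
    and "z \<equiv> real n * \<rho>\<^sup>2"
  shows "integrable std_field (\<lambda>\<omega>. (f \<omega> - g \<omega>)\<^sup>2)"
    and "integral\<^sup>L std_field (\<lambda>\<omega>. (f \<omega> - g \<omega>)\<^sup>2) = 2 * (1 + (exp z + exp (- z) - 2) / (2 * real k)) ^ s - 2"
proof -
  let ?F = "active_coords n m (s * k)" and ?V = "spike_configs s k"
  define R where "R = (\<Sum>a\<in>spike_choices k. \<Sum>a'\<in>spike_choices k. exp (real n * spike_inner \<rho> a a')) / (2 * real k) ^ 2"
  have sq: "(f \<omega> - g \<omega>)\<^sup>2 = f \<omega> * f \<omega> - 2 * (f \<omega> * g \<omega>) + g \<omega> * g \<omega>" for \<omega>
    by (simp add: power2_eq_square algebra_simps)
  have iff: "integrable std_field (\<lambda>\<omega>. f \<omega> * f \<omega>)" and ifg: "integrable std_field (\<lambda>\<omega>. f \<omega> * g \<omega>)"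
    and igg: "integrable std_field (\<lambda>\<omega>. g \<omega> * g \<omega>)"
    unfolding f_def g_def by (rule integral_mixture_lr_mult(1)[OF finite_active_coords])+
  show "integrable std_field (\<lambda>\<omega>. (f \<omega> - g \<omega>)\<^sup>2)"
    unfolding sq using iff ifg igg by auto
  have card: "real (card ?V) = (2 * real k) ^ s"
    by (simp add: card_spike_configs)
  have second_moment: "(\<Sum>v\<in>?V. \<Sum>w\<in>?V. exp (real n * (\<Sum>b<s. spike_inner \<rho> (v b) (w b))))
      / (real (card ?V) * real (card ?V)) = R ^ s"
  proof -
    have "S ^ s / (c ^ s * c ^ s) = (S / c\<^sup>2) ^ s" for S c :: real
      by (simp add: power_divide power_mult_distrib[symmetric] power2_eq_square)
    then show ?thesis
      unfolding sum_exp_inner_spike_configs R_def card .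
  qed
  have Iff: "integral\<^sup>L std_field (\<lambda>\<omega>. f \<omega> * f \<omega>) = R ^ s"
    unfolding f_def integral_mixture_lr_mult(2)[OF finite_active_coords] second_moment[symmetric]
    by (intro arg_cong2[where f="(/)"] sum.cong refl) (simp_all add: inner_mean_zero_spike)
  have Igg: "integral\<^sup>L std_field (\<lambda>\<omega>. g \<omega> * g \<omega>) = R ^ s"
    unfolding g_def integral_mixture_lr_mult(2)[OF finite_active_coords] second_moment[symmetric]
    by (intro arg_cong2[where f="(/)"] sum.cong refl) (simp_all add: inner_mean_spike_zero)
  have Ifg: "integral\<^sup>L std_field (\<lambda>\<omega>. f \<omega> * g \<omega>) = 1"
    unfolding f_def g_def integral_mixture_lr_mult(2)[OF finite_active_coords] inner_lfht_mean
    using spike_configs_nonempty[OF k] by simp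
  have "R = 1 + (exp z + exp (- z) - 2) / (2 * real k)"
    unfolding R_def sum_exp_spike_inner z_def using k by (simp add: field_simps power2_eq_square)
  then show "integral\<^sup>L std_field (\<lambda>\<omega>. (f \<omega> - g \<omega>)\<^sup>2) = 2 * (1 + (exp z + exp (- z) - 2) / (2 * real k)) ^ s - 2"
    unfolding sq using iff ifg igg Iff Igg Ifg by simp
qed

lemma l1_swap_mixtures_less_1:
  assumes k: "0 < k"
    and z: "0 \<le> real n * \<rho>\<^sup>2" "real n * \<rho>\<^sup>2 \<le> 1 / 2"
    and small: "real s * (real n * \<rho>\<^sup>2)\<^sup>2 / real k < 1 / 2"
  shows "integral\<^sup>L std_field (\<lambda>\<omega>. \<bar>mixture_lr (active_coords n m (s * k)) (spike_configs s k)
      (\<lambda>v. lfht_mean n m (\<lambda>_. 0) (spike_seq k \<rho> s v) (\<lambda>_. 0)) \<omega>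
    - mixture_lr (active_coords n m (s * k)) (spike_configs s k)
      (\<lambda>v. lfht_mean n m (spike_seq k \<rho> s v) (\<lambda>_. 0) (\<lambda>_. 0)) \<omega>\<bar>) < 1"
    (is "integral\<^sup>L std_field (\<lambda>\<omega>. \<bar>?f \<omega> - ?g \<omega>\<bar>) < 1")
proof -
  define z where "z = real n * \<rho>\<^sup>2"
  define c where "c = (exp z + exp (- z) - 2) / (2 * real k)"
  have "2 \<le> exp z + exp (- z)"
    using exp_ge_add_one_self[of z] exp_ge_add_one_self[of "- z"] by linarith
  then have c0: "0 \<le> c"
    using k by (simp add: c_def)
  have "real s * c \<le> real s * (7 / 6 * z\<^sup>2 / (2 * real k))"
    unfolding c_def using k cosh_excess_le[of z] z by (intro mult_left_mono divide_right_mono) (auto simp: z_def)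
  also have "\<dots> = 7 / 12 * (real s * z\<^sup>2 / real k)"
    by simp
  also have "\<dots> \<le> 7 / 24"
    using small by (simp add: z_def)
  finally have "(1 + c) ^ s \<le> exp (7 / 24)"
    using one_plus_power_le_exp[OF c0, of s] by (meson exp_le_cancel_iff order.trans)
  also have "\<dots> \<le> 1 / (1 - 7 / 24)"
    by (rule exp_le_inverse_one_minus) auto
  finally have Rs: "(1 + c) ^ s \<le> 24 / 17"
    by simp
  have "integral\<^sup>L std_field (\<lambda>\<omega>. \<bar>?f \<omega> - ?g \<omega>\<bar>) \<le> sqrt (integral\<^sup>L std_field (\<lambda>\<omega>. (?f \<omega> - ?g \<omega>)\<^sup>2))"
    using prob_space.l1_le_sqrt_l2[OF prob_space_gauss_field, of "\<lambda>\<omega>. ?f \<omega> - ?g \<omega>"]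
      integral_swap_mixtures_diff_sq(1)[OF k] by simp
  also have "\<dots> < 1"
    unfolding integral_swap_mixtures_diff_sq(2)[OF k] using Rs by (simp add: c_def z_def)
  finally show ?thesis .
qed

lemma swap_prior_bound:
  assumes p: "1 \<le> p" "p \<le> 2" and dec: "decseq a" and apos: "\<forall>t. 0 < a t"
    and eps: "0 < \<epsilon>" and n: "0 < n" and m: "0 < m" and good: "good_lfht_test p a \<epsilon> m n \<psi>"
    and s: "0 < s" and k: "0 < k" and skd: "s * k \<le> d"
    and threshold: "192 * \<epsilon>\<^sup>2 \<le> a (d - 1) powr p * real n powr ((p - 2) / 2)"
    and s_ge: "2 * (real n * \<epsilon>\<^sup>2) \<le> real s" and s_le: "real s \<le> 4 * real n * \<epsilon>\<^sup>2"
  shows "real s * real k \<le> 2 * (real n * \<epsilon>\<^sup>2)\<^sup>2"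
proof (rule ccontr)
  assume "\<not> ?thesis"
  then have small_prior: "2 * (real n * \<epsilon>\<^sup>2)\<^sup>2 < real s * real k"
    by simp
  define \<rho> where "\<rho> = \<epsilon> / sqrt (real s)"
  have \<rho>: "0 \<le> \<rho>" "sqrt (real s) * \<rho> = \<epsilon>" "\<rho>\<^sup>2 = \<epsilon>\<^sup>2 / real s"
    using eps s by (simp_all add: \<rho>_def power_divide)
  have \<Gamma>: "spike_seq k \<rho> s v \<in> Gamma_set p a" if "v \<in> spike_configs s k" for v
    using spike_seq_Gamma_set[OF p dec apos eps n that s skd s_le threshold \<rho>(1)] \<rho>(3) by simp
  have "1 \<le> integral\<^sup>L std_field (\<lambda>\<omega>. \<bar>mixture_lr (active_coords n m (s * k)) (spike_configs s k)
      (\<lambda>v. lfht_mean n m (\<lambda>_. 0) (spike_seq k \<rho> s v) (\<lambda>_. 0)) \<omega>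
    - mixture_lr (active_coords n m (s * k)) (spike_configs s k)
      (\<lambda>v. lfht_mean n m (spike_seq k \<rho> s v) (\<lambda>_. 0) (\<lambda>_. 0)) \<omega>\<bar>)"
    using admissible_zero_spike_seq[OF _ \<rho>(1,2) \<Gamma>] spike_configs_nonempty[OF k]
    by (intro good_test_mixture_l1_ge_1[OF good n m]) auto
  moreover have "real n * \<rho>\<^sup>2 \<le> 1 / 2"
    unfolding \<rho>(3) using s_ge s by (simp add: field_simps)
  moreover have "real s * (real n * \<rho>\<^sup>2)\<^sup>2 / real k < 1 / 2"
    unfolding \<rho>(3) using small_prior s k by (simp add: power2_eq_square field_simps)
  ultimately show False
    using l1_swap_mixtures_less_1[OF k, of n \<rho> s m] by simp
qed

lemma sqrt_d_l_bound:
  assumes p: "1 \<le> p" "p \<le> 2" and dec: "decseq a" and apos: "\<forall>t. 0 < a t" and lim: "a \<longlonglongrightarrow> 0"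
    and eps: "0 < \<epsilon>" and n: "0 < n" and m: "0 < m"
    and good: "good_lfht_test p a \<epsilon> m n \<psi>" and n_two_point: "1 \<le> 2 * (real n * \<epsilon>\<^sup>2)"
  shows "sqrt (real (d_l p a n \<epsilon>)) \<le> 2 * (real n * \<epsilon>\<^sup>2)"
proof -
  define d where "d = d_l p a n \<epsilon>"
  define x where "x = 2 * (real n * \<epsilon>\<^sup>2)"
  have "sqrt (real d) \<le> x"
  proof (cases "x \<le> real d")
    case False
    have "real d \<le> (real d)\<^sup>2"
      by (cases d) (auto simp: power2_eq_square)
    then have "sqrt (real d) \<le> real d"
      by (intro real_le_lsqrt) auto
    with False show ?thesis
      by simp
  next
    case True
    then obtain s k where s: "0 < s" and k: "0 < k" and s_ge: "x \<le> real s" and s_le: "real s \<le> x + 1"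
      and skd: "s * k \<le> d" and dsk: "real d \<le> 2 * real s * real k"
      using block_partition[of x d] n_two_point by (auto simp: x_def)
    have threshold: "192 * \<epsilon>\<^sup>2 \<le> a (d - 1) powr p * real n powr ((p - 2) / 2)"
      unfolding d_def using True n_two_point by (intro d_l_threshold[OF p(1) apos lim eps n]) (simp add: d_def x_def)
    have "real s * real k \<le> 2 * (real n * \<epsilon>\<^sup>2)\<^sup>2"
      using s_ge s_le n_two_point
      by (intro swap_prior_bound[OF p dec apos eps n m good s k skd threshold]) (simp_all add: x_def)
    then have "real d \<le> x\<^sup>2"
      using dsk by (simp add: x_def power2_eq_square)
    then show ?thesis
      using n_two_point by (intro real_le_lsqrt) (simp_all add: x_def)
  qed
  then show ?thesis
    by (simp add: d_def x_def)
qed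

section \<open>Block factorisation of the sign mixtures\<close>

definition block_coords :: "nat \<Rightarrow> nat \<Rightarrow> coord set" where
  "block_coords k b = {x. snd (snd x) div k = b}"

definition block_mean :: "nat \<Rightarrow> nat \<Rightarrow> nat \<Rightarrow> real \<Rightarrow> real \<Rightarrow> nat \<Rightarrow> nat \<times> real \<Rightarrow> coord \<Rightarrow> real" where
  "block_mean n m k \<rho> \<alpha> b a = lfht_mean n m (block_spike k \<rho> b a) (\<lambda>t. - block_spike k \<rho> b a t) (\<lambda>t. \<alpha> * block_spike k \<rho> b a t)"

definition config_mean :: "nat \<Rightarrow> nat \<Rightarrow> nat \<Rightarrow> real \<Rightarrow> nat \<Rightarrow> real \<Rightarrow> (nat \<Rightarrow> nat \<times> real) \<Rightarrow> coord \<Rightarrow> real" where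
  "config_mean n m k \<rho> s \<alpha> v = lfht_mean n m (spike_seq k \<rho> s v) (\<lambda>t. - spike_seq k \<rho> s v t) (\<lambda>t. \<alpha> * spike_seq k \<rho> s v t)"

lemma config_mean_sign:
  "config_mean n m k \<rho> s 1 = (\<lambda>v. lfht_mean n m (spike_seq k \<rho> s v) (\<lambda>t. - spike_seq k \<rho> s v t) (spike_seq k \<rho> s v))"
  "config_mean n m k \<rho> s (-1)
    = (\<lambda>v. lfht_mean n m (spike_seq k \<rho> s v) (\<lambda>t. - spike_seq k \<rho> s v t) (\<lambda>t. - spike_seq k \<rho> s v t))"
  by (simp_all add: config_mean_def fun_eq_iff)

lemma block_mean_outside:
  assumes a: "a \<in> spike_choices k" and x: "x \<notin> block_coords k b"
  shows "block_mean n m k \<rho> \<alpha> b a x = 0"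
proof -
  obtain c i t where xe: "x = (c, i, t)" by (cases x) auto
  have "t div k \<noteq> b" using x xe by (simp add: block_coords_def)
  then have "block_spike k \<rho> b a t = 0" using block_spike_block[OF a, of \<rho> b t] by blast
  then show ?thesis unfolding xe by (simp add: block_mean_def lfht_mean_def)
qed

lemma config_mean_block:
  assumes v: "v \<in> spike_configs s k" and b: "b < s" and x: "x \<in> block_coords k b"
  shows "config_mean n m k \<rho> s \<alpha> v x = block_mean n m k \<rho> \<alpha> b (v b) x"
  using spike_seq_in_block[OF v b] x by (cases x) (simp add: config_mean_def block_mean_def lfht_mean_def block_coords_def)

lemma gauss_lr_config_mean:
  assumes v: "v \<in> spike_configs s k" and k: "0 < k"
  shows "gauss_lr (active_coords n m (s * k)) (config_mean n m k \<rho> s \<alpha> v) \<omega> =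
     (\<Prod>b<s. gauss_lr (active_coords n m (s * k) \<inter> block_coords k b) (block_mean n m k \<rho> \<alpha> b (v b)) \<omega>)"
proof -
  let ?F = "active_coords n m (s * k)"
  let ?h = "\<lambda>x. config_mean n m k \<rho> s \<alpha> v x * \<omega> x - (config_mean n m k \<rho> s \<alpha> v x)\<^sup>2 / 2"
  have cover: "?F = (\<Union>b<s. ?F \<inter> block_coords k b)"
  proof
    show "?F \<subseteq> (\<Union>b<s. ?F \<inter> block_coords k b)"
    proof
      fix x assume x: "x \<in> ?F"
      then have "snd (snd x) < s * k" by (auto simp: active_coords_def)
      then have "snd (snd x) div k < s" using k by (simp add: div_less_iff_less_mult)
      then show "x \<in> (\<Union>b<s. ?F \<inter> block_coords k b)" using x by (auto simp: block_coords_def)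
    qed
  qed auto
  have disj: "\<forall>b\<in>{..<s}. \<forall>b'\<in>{..<s}. b \<noteq> b' \<longrightarrow> (?F \<inter> block_coords k b) \<inter> (?F \<inter> block_coords k b') = {}"
    by (auto simp: block_coords_def)
  have "(\<Sum>x\<in>?F. ?h x) = (\<Sum>b<s. \<Sum>x\<in>?F \<inter> block_coords k b. ?h x)"
    by (subst cover, rule sum.UNION_disjoint) (use disj in auto)
  also have "\<dots> = (\<Sum>b<s. \<Sum>x\<in>?F \<inter> block_coords k b. block_mean n m k \<rho> \<alpha> b (v b) x * \<omega> x - (block_mean n m k \<rho> \<alpha> b (v b) x)\<^sup>2 / 2)"
    by (intro sum.cong refl) (auto simp: config_mean_block[OF v])
  finally show ?thesis unfolding gauss_lr_def by (simp add: exp_sum)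
qed

definition active_block_coords :: "nat \<Rightarrow> nat \<Rightarrow> nat \<Rightarrow> nat \<Rightarrow> nat \<Rightarrow> coord set" where
  "active_block_coords n m s k b = active_coords n m (s * k) \<inter> block_coords k b"

lemma finite_active_block_coords[simp]: "finite (active_block_coords n m s k b)" by (simp add: active_block_coords_def)

definition block_lr :: "nat \<Rightarrow> nat \<Rightarrow> nat \<Rightarrow> nat \<Rightarrow> real \<Rightarrow> real \<Rightarrow> nat \<Rightarrow> nat \<times> real \<Rightarrow> (coord \<Rightarrow> real) \<Rightarrow> real" where
  "block_lr n m s k \<rho> \<alpha> b a = gauss_lr (active_block_coords n m s k b) (block_mean n m k \<rho> \<alpha> b a)"

definition block_mixture :: "nat \<Rightarrow> nat \<Rightarrow> nat \<Rightarrow> nat \<Rightarrow> real \<Rightarrow> real \<Rightarrow> nat \<Rightarrow> (coord \<Rightarrow> real) \<Rightarrow> real" where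
  "block_mixture n m s k \<rho> \<alpha> b \<omega> = (\<Sum>a\<in>spike_choices k. block_lr n m s k \<rho> \<alpha> b a \<omega>) / (2 * real k)"

lemma mixture_lr_config_mean:
  assumes k: "0 < k"
  shows "mixture_lr (active_coords n m (s * k)) (spike_configs s k) (config_mean n m k \<rho> s \<alpha>) \<omega> = (\<Prod>b<s. block_mixture n m s k \<rho> \<alpha> b \<omega>)"
proof -
  have "mixture_lr (active_coords n m (s * k)) (spike_configs s k) (config_mean n m k \<rho> s \<alpha>) \<omega>
      = (\<Sum>v\<in>spike_configs s k. \<Prod>b<s. block_lr n m s k \<rho> \<alpha> b (v b) \<omega>) / real (card (spike_configs s k))"
    unfolding mixture_lr_def block_lr_def active_block_coords_def
    by (intro arg_cong2[where f="(/)"] sum.cong refl) (simp add: gauss_lr_config_mean[OF _ k])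
  also have "\<dots> = (\<Prod>b<s. \<Sum>a\<in>spike_choices k. block_lr n m s k \<rho> \<alpha> b a \<omega>) / (2 * real k) ^ s"
    unfolding spike_configs_def card_spike_configs[unfolded spike_configs_def]
    by (subst prod_sum_PiE) auto
  also have "\<dots> = (\<Prod>b<s. block_mixture n m s k \<rho> \<alpha> b \<omega>)"
    unfolding block_mixture_def by (simp add: prod_dividef)
  finally show ?thesis .
qed

lemma inner_block_spike:
  assumes b: "b < s" and a: "a \<in> spike_choices k" and a': "a' \<in> spike_choices k"
  shows "(\<Sum>t<s * k. block_spike k \<rho> b a t * block_spike k \<rho> b a' t) = spike_inner \<rho> a a'"
proof -
  have ja: "fst a < k" using a by (auto simp: spike_choices_def)
  have lt: "b * k + fst a < s * k"
  proof -
    have "b * k + k \<le> s * k" using b by (metis Suc_leI add.commute mult_Suc mult_le_mono1)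
    then show ?thesis using ja by linarith
  qed
  have "(\<Sum>t<s * k. block_spike k \<rho> b a t * block_spike k \<rho> b a' t) =
      (\<Sum>t<s * k. if t = b * k + fst a then spike_inner \<rho> a a' else 0)"
  proof (intro sum.cong refl)
    fix t
    show "block_spike k \<rho> b a t * block_spike k \<rho> b a' t = (if t = b * k + fst a then spike_inner \<rho> a a' else 0)"
      by (simp add: block_spike_def spike_inner_def power2_eq_square)
  qed
  also have "\<dots> = spike_inner \<rho> a a'" using lt by simp
  finally show ?thesis .
qed

lemma inner_block_mean:
  assumes b: "b < s" and a: "a \<in> spike_choices k" and a': "a' \<in> spike_choices k"
  shows "(\<Sum>x\<in>active_block_coords n m s k b. block_mean n m k \<rho> \<alpha> b a x * block_mean n m k \<rho> \<beta> b a' x) =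
     (2 * real n + real m * \<alpha> * \<beta>) * spike_inner \<rho> a a'"
proof -
  have "(\<Sum>x\<in>active_block_coords n m s k b. block_mean n m k \<rho> \<alpha> b a x * block_mean n m k \<rho> \<beta> b a' x) =
      (\<Sum>x\<in>active_coords n m (s * k). block_mean n m k \<rho> \<alpha> b a x * block_mean n m k \<rho> \<beta> b a' x)"
    unfolding active_block_coords_def using block_mean_outside[OF a] by (intro sum.mono_neutral_left) auto
  also have "\<dots> = (\<Sum>t<s * k. (2 * real n + real m * \<alpha> * \<beta>) * (block_spike k \<rho> b a t * block_spike k \<rho> b a' t))"
    unfolding block_mean_def inner_lfht_mean by (intro sum.cong refl) (simp add: algebra_simps)
  also have "\<dots> = (2 * real n + real m * \<alpha> * \<beta>) * spike_inner \<rho> a a'"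
    by (simp add: sum_distrib_left[symmetric] inner_block_spike[OF b a a'])
  finally show ?thesis .
qed

lemma block_mixture_pos: "0 < k \<Longrightarrow> 0 < block_mixture n m s k \<rho> \<alpha> b \<omega>"
  unfolding block_mixture_def block_lr_def
  by (intro divide_pos_pos sum_pos) (auto simp: gauss_lr_pos spike_choices_def)

lemma integral_block_mixture:
  assumes k: "0 < k"
  shows "integrable std_field (block_mixture n m s k \<rho> \<alpha> b)" "integral\<^sup>L std_field (block_mixture n m s k \<rho> \<alpha> b) = 1"
proof -
  show "integrable std_field (block_mixture n m s k \<rho> \<alpha> b)"
    unfolding block_mixture_def block_lr_def by (intro integrable_divide_zero Bochner_Integration.integrable_sum integrable_gauss_lr) simp
  have "integral\<^sup>L std_field (block_mixture n m s k \<rho> \<alpha> b) = (\<Sum>a\<in>spike_choices k. integral\<^sup>L std_field (block_lr n m s k \<rho> \<alpha> b a)) / (2 * real k)"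
    unfolding block_mixture_def block_lr_def
    by (simp add: Bochner_Integration.integral_sum integrable_gauss_lr)
  also have "\<dots> = 1" using k by (simp add: block_lr_def integral_gauss_lr card_spike_choices)
  finally show "integral\<^sup>L std_field (block_mixture n m s k \<rho> \<alpha> b) = 1" .
qed

lemma integral_block_lr_mult:
  assumes b: "b < s" and a: "a \<in> spike_choices k" and a': "a' \<in> spike_choices k"
  shows "integrable std_field (\<lambda>\<omega>. block_lr n m s k \<rho> \<alpha> b a \<omega> * block_lr n m s k \<rho> \<beta> b a' \<omega>)"
    "integral\<^sup>L std_field (\<lambda>\<omega>. block_lr n m s k \<rho> \<alpha> b a \<omega> * block_lr n m s k \<rho> \<beta> b a' \<omega>) =
       exp ((2 * real n + real m * \<alpha> * \<beta>) * spike_inner \<rho> a a')"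
  unfolding block_lr_def by (rule integrable_gauss_lr_mult, simp) (simp add: integral_gauss_lr_mult inner_block_mean[OF b a a'])

lemma integral_block_mixture_mult:
  assumes k: "0 < k" and b: "b < s"
  shows "integrable std_field (\<lambda>\<omega>. block_mixture n m s k \<rho> \<alpha> b \<omega> * block_mixture n m s k \<rho> \<beta> b \<omega>)"
    and "integral\<^sup>L std_field (\<lambda>\<omega>. block_mixture n m s k \<rho> \<alpha> b \<omega> * block_mixture n m s k \<rho> \<beta> b \<omega>)
      = (4 * real k - 4 + 2 * exp ((2 * real n + real m * \<alpha> * \<beta>) * \<rho>\<^sup>2)
          + 2 * exp (- ((2 * real n + real m * \<alpha> * \<beta>) * \<rho>\<^sup>2))) / (4 * real k)"
proof -
  have prod: "(\<lambda>\<omega>. block_mixture n m s k \<rho> \<alpha> b \<omega> * block_mixture n m s k \<rho> \<beta> b \<omega>)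
      = (\<lambda>\<omega>. (\<Sum>a\<in>spike_choices k. \<Sum>a'\<in>spike_choices k.
          block_lr n m s k \<rho> \<alpha> b a \<omega> * block_lr n m s k \<rho> \<beta> b a' \<omega>) / (2 * real k)\<^sup>2)"
    by (simp add: block_mixture_def sum_product power2_eq_square fun_eq_iff)
  show "integrable std_field (\<lambda>\<omega>. block_mixture n m s k \<rho> \<alpha> b \<omega> * block_mixture n m s k \<rho> \<beta> b \<omega>)"
    unfolding prod using integral_block_lr_mult(1)[OF b] by auto
  have "integral\<^sup>L std_field (\<lambda>\<omega>. block_mixture n m s k \<rho> \<alpha> b \<omega> * block_mixture n m s k \<rho> \<beta> b \<omega>)
      = (\<Sum>a\<in>spike_choices k. \<Sum>a'\<in>spike_choices k. exp ((2 * real n + real m * \<alpha> * \<beta>) * spike_inner \<rho> a a'))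
        / (2 * real k)\<^sup>2"
    unfolding prod using integral_block_lr_mult[OF b]
    by (simp add: Bochner_Integration.integral_sum Bochner_Integration.integrable_sum)
  also have "\<dots> = (4 * real k - 4 + 2 * exp ((2 * real n + real m * \<alpha> * \<beta>) * \<rho>\<^sup>2)
          + 2 * exp (- ((2 * real n + real m * \<alpha> * \<beta>) * \<rho>\<^sup>2))) / (4 * real k)"
    unfolding sum_exp_spike_inner using k by (simp add: power2_eq_square)
  finally show "integral\<^sup>L std_field (\<lambda>\<omega>. block_mixture n m s k \<rho> \<alpha> b \<omega> * block_mixture n m s k \<rho> \<beta> b \<omega>)
      = (4 * real k - 4 + 2 * exp ((2 * real n + real m * \<alpha> * \<beta>) * \<rho>\<^sup>2)
          + 2 * exp (- ((2 * real n + real m * \<alpha> * \<beta>) * \<rho>\<^sup>2))) / (4 * real k)" .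
qed

lemma integral_block_mixture_diff_sq:
  assumes k: "0 < k" and b: "b < s"
  shows "integrable std_field (\<lambda>\<omega>. (block_mixture n m s k \<rho> 1 b \<omega> - block_mixture n m s k \<rho> (-1) b \<omega>)\<^sup>2)"
    "integral\<^sup>L std_field (\<lambda>\<omega>. (block_mixture n m s k \<rho> 1 b \<omega> - block_mixture n m s k \<rho> (-1) b \<omega>)\<^sup>2)
      = (exp (2 * real n * \<rho>\<^sup>2) - exp (- (2 * real n * \<rho>\<^sup>2))) * (exp (real m * \<rho>\<^sup>2) - exp (- (real m * \<rho>\<^sup>2)))
        / real k"
proof -
  let ?f = "block_mixture n m s k \<rho> 1 b" and ?g = "block_mixture n m s k \<rho> (-1) b"
  have sq: "(\<lambda>\<omega>. (?f \<omega> - ?g \<omega>)\<^sup>2) = (\<lambda>\<omega>. ?f \<omega> * ?f \<omega> - 2 * (?f \<omega> * ?g \<omega>) + ?g \<omega> * ?g \<omega>)"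
    by (simp add: power2_eq_square algebra_simps)
  note moments = integral_block_mixture_mult[OF k b, of n m \<rho>]
  show "integrable std_field (\<lambda>\<omega>. (?f \<omega> - ?g \<omega>)\<^sup>2)"
    unfolding sq using moments(1) by auto
  have "integral\<^sup>L std_field (\<lambda>\<omega>. (?f \<omega> - ?g \<omega>)\<^sup>2)
      = (exp ((2 * real n * \<rho>\<^sup>2) + real m * \<rho>\<^sup>2) + exp (- ((2 * real n * \<rho>\<^sup>2) + real m * \<rho>\<^sup>2))
        - exp ((2 * real n * \<rho>\<^sup>2) - real m * \<rho>\<^sup>2) - exp (- ((2 * real n * \<rho>\<^sup>2) - real m * \<rho>\<^sup>2))) / real k"
  proof -
    define A where "A c = (4 * real k - 4 + 2 * exp c + 2 * exp (- c)) / (4 * real k)" for c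
    define c1 where "c1 = 2 * real n * \<rho>\<^sup>2 + real m * \<rho>\<^sup>2"
    define c2 where "c2 = 2 * real n * \<rho>\<^sup>2 - real m * \<rho>\<^sup>2"
    have "integral\<^sup>L std_field (\<lambda>\<omega>. (?f \<omega> - ?g \<omega>)\<^sup>2) = integral\<^sup>L std_field (\<lambda>\<omega>. ?f \<omega> * ?f \<omega>)
        - 2 * integral\<^sup>L std_field (\<lambda>\<omega>. ?f \<omega> * ?g \<omega>) + integral\<^sup>L std_field (\<lambda>\<omega>. ?g \<omega> * ?g \<omega>)"
      unfolding sq using moments(1) by simp
    also have "\<dots> = 2 * A c1 - 2 * A c2"
    proof -
      have "integral\<^sup>L std_field (\<lambda>\<omega>. ?f \<omega> * ?f \<omega>) = A c1" "integral\<^sup>L std_field (\<lambda>\<omega>. ?g \<omega> * ?g \<omega>) = A c1"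
        "integral\<^sup>L std_field (\<lambda>\<omega>. ?f \<omega> * ?g \<omega>) = A c2"
        using moments(2)[of 1 1] moments(2)[of "-1" "-1"] moments(2)[of 1 "-1"]
        by (simp_all add: A_def c1_def c2_def algebra_simps)
      then show ?thesis
        by simp
    qed
    also have "\<dots> = (exp c1 + exp (- c1) - exp c2 - exp (- c2)) / real k"
      using k by (simp add: A_def field_simps)
    finally show ?thesis
      by (simp add: c1_def c2_def)
  qed
  then show "integral\<^sup>L std_field (\<lambda>\<omega>. (?f \<omega> - ?g \<omega>)\<^sup>2)
      = (exp (2 * real n * \<rho>\<^sup>2) - exp (- (2 * real n * \<rho>\<^sup>2))) * (exp (real m * \<rho>\<^sup>2) - exp (- (real m * \<rho>\<^sup>2)))
        / real k"
    by (simp only: exp_sinh_identity)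
qed

lemma block_mean_neg: "block_mean n m k \<rho> \<alpha> b (j, -1) x = - block_mean n m k \<rho> \<alpha> b (j, 1) x"
  by (cases x) (simp add: block_mean_def lfht_mean_def block_spike_def)

lemma block_mixture_lower:
  assumes k: "0 < k" and b: "b < s"
  shows "exp (- ((2 * real n + real m) * \<rho>\<^sup>2) / 2) \<le> block_mixture n m s k \<rho> (-1) b \<omega>"
proof -
  let ?l = "\<lambda>a. block_lr n m s k \<rho> (-1) b a \<omega>"
  define c where "c = exp (- ((2 * real n + real m) * \<rho>\<^sup>2) / 2)"
  have pair: "2 * c \<le> ?l (j, -1) + ?l (j, 1)" if j: "j < k" for j
  proof -
    have a1: "(j, 1) \<in> spike_choices k" and a2: "(j, -1) \<in> spike_choices k" using j by (auto simp: spike_choices_def)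
    have "?l (j, 1) * ?l (j, -1) = exp (\<Sum>x\<in>active_block_coords n m s k b. block_mean n m k \<rho> (-1) b (j, 1) x * block_mean n m k \<rho> (-1) b (j, -1) x)
        * gauss_lr (active_block_coords n m s k b) (\<lambda>x. block_mean n m k \<rho> (-1) b (j, 1) x + block_mean n m k \<rho> (-1) b (j, -1) x) \<omega>"
      unfolding block_lr_def by (rule gauss_lr_mult)
    also have "(\<lambda>x. block_mean n m k \<rho> (-1) b (j, 1) x + block_mean n m k \<rho> (-1) b (j, -1) x) = (\<lambda>x. 0)"
      by (simp add: block_mean_neg)
    also have "gauss_lr (active_block_coords n m s k b) (\<lambda>x. 0) \<omega> = 1" by (simp add: gauss_lr_def)
    also have "(\<Sum>x\<in>active_block_coords n m s k b. block_mean n m k \<rho> (-1) b (j, 1) x * block_mean n m k \<rho> (-1) b (j, -1) x)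
        = - ((2 * real n + real m) * \<rho>\<^sup>2)"
      unfolding inner_block_mean[OF b a1 a2] by (simp add: spike_inner_def)
    finally have pr: "?l (j, 1) * ?l (j, -1) = exp (- ((2 * real n + real m) * \<rho>\<^sup>2))" by simp
    have "2 * c = 2 * sqrt (?l (j, -1) * ?l (j, 1))"
      unfolding c_def using pr by (simp add: mult.commute sqrt_exp)
    also have "\<dots> \<le> ?l (j, -1) + ?l (j, 1)"
      using arith_geo_mean_sqrt[of "?l (j, -1)" "?l (j, 1)"] by (simp add: block_lr_def gauss_lr_pos less_imp_le)
    finally show ?thesis .
  qed
  have "(\<Sum>a\<in>spike_choices k. ?l a) = (\<Sum>j<k. \<Sum>\<sigma>\<in>{-1, 1}. ?l (j, \<sigma>))"
    unfolding spike_choices_def by (rule sum.cartesian_product')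
  also have "\<dots> = (\<Sum>j<k. ?l (j, -1) + ?l (j, 1))" by simp
  also have "\<dots> \<ge> (\<Sum>j<k. 2 * c)" by (intro sum_mono pair) simp
  finally have "2 * real k * c \<le> (\<Sum>a\<in>spike_choices k. ?l a)" by simp
  then show ?thesis unfolding block_mixture_def c_def using k by (simp add: field_simps)
qed

lemma active_block_coords_subset: "active_block_coords n m s k b \<subseteq> block_coords k b" by (simp add: active_block_coords_def)

lemma block_mixture_restrict: "block_mixture n m s k \<rho> \<alpha> b (restrict \<omega> (block_coords k b)) = block_mixture n m s k \<rho> \<alpha> b \<omega>"
  unfolding block_mixture_def block_lr_def by (simp add: gauss_lr_restrict[OF active_block_coords_subset])

lemma block_mixture_measurable_PiM: "block_mixture n m s k \<rho> \<alpha> b \<in> borel_measurable (PiM (block_coords k b) (\<lambda>_. borel))"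
proof -
  have "block_lr n m s k \<rho> \<alpha> b a \<in> borel_measurable (PiM (block_coords k b) (\<lambda>_. borel))" for a
    unfolding block_lr_def by (rule gauss_lr_measurable_PiM[OF active_block_coords_subset])
  then show ?thesis unfolding block_mixture_def by (intro borel_measurable_divide borel_measurable_sum) auto
qed

lemma block_mixture_measurable[measurable]: "block_mixture n m s k \<rho> \<alpha> b \<in> borel_measurable (gauss_field \<nu>)"
  unfolding block_mixture_def block_lr_def by measurable

lemma indep_vars_blocks:
  fixes r :: "nat \<Rightarrow> (coord \<Rightarrow> real) \<Rightarrow> real"
  assumes rm: "\<And>b. b < s \<Longrightarrow> r b \<in> borel_measurable (PiM (block_coords k b) (\<lambda>_. borel))"
    and rr: "\<And>b \<omega>. b < s \<Longrightarrow> r b (restrict \<omega> (block_coords k b)) = r b \<omega>"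
  shows "prob_space.indep_vars std_field (\<lambda>_. borel) (\<lambda>b \<omega>. ennreal (r b \<omega>)) {..<s}"
proof -
  interpret P: prob_space std_field by (rule prob_space_gauss_field)
  have "disjoint_family_on (block_coords k) {..<s}"
    by (auto simp: disjoint_family_on_def block_coords_def)
  then have ind: "P.indep_vars (\<lambda>b. PiM (block_coords k b) (\<lambda>_. gauss 0)) (\<lambda>b \<omega>. restrict \<omega> (block_coords k b)) {..<s}"
    using P.indep_vars_restrict[OF indep_vars_gauss_field] by auto
  have rm': "(\<lambda>y. ennreal (r b y)) \<in> PiM (block_coords k b) (\<lambda>_. gauss 0) \<rightarrow>\<^sub>M borel" if "b \<in> {..<s}" for b
    using rm[of b] that by (simp add: measurable_cong_sets[OF sets_PiM_cong[OF refl sets_gauss] refl])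
  have "P.indep_vars (\<lambda>_. borel) (\<lambda>b \<omega>. ennreal (r b (restrict \<omega> (block_coords k b)))) {..<s}"
    by (rule P.indep_vars_compose2[OF ind rm'])
  then show ?thesis
    by (subst (asm) P.indep_vars_cong[OF refl _ refl, where Y="\<lambda>b \<omega>. ennreal (r b \<omega>)"]) (auto simp: rr)
qed

lemma integral_prod_blocks_le:
  fixes r :: "nat \<Rightarrow> (coord \<Rightarrow> real) \<Rightarrow> real"
  assumes rm: "\<And>b. b < s \<Longrightarrow> r b \<in> borel_measurable (PiM (block_coords k b) (\<lambda>_. borel))"
    and rr: "\<And>b \<omega>. b < s \<Longrightarrow> r b (restrict \<omega> (block_coords k b)) = r b \<omega>"
    and r0: "\<And>b \<omega>. b < s \<Longrightarrow> 0 \<le> r b \<omega>"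
    and ir: "\<And>b. b < s \<Longrightarrow> integrable std_field (r b)"
    and le: "\<And>b. b < s \<Longrightarrow> integral\<^sup>L std_field (r b) \<le> C"
  shows "integrable std_field (\<lambda>\<omega>. \<Prod>b<s. r b \<omega>)"
    and "integral\<^sup>L std_field (\<lambda>\<omega>. \<Prod>b<s. r b \<omega>) \<le> C ^ s"
proof -
  interpret P: prob_space std_field by (rule prob_space_gauss_field)
  have Ir0: "0 \<le> integral\<^sup>L std_field (r b)" if "b < s" for b
    using r0[OF that] by (intro integral_nonneg_AE) auto
  have "(\<integral>\<^sup>+\<omega>. ennreal (\<Prod>b<s. r b \<omega>) \<partial>std_field) = (\<integral>\<^sup>+\<omega>. (\<Prod>b<s. ennreal (r b \<omega>)) \<partial>std_field)"
    using r0 by (intro nn_integral_cong prod_ennreal[symmetric]) auto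
  also have "\<dots> = (\<Prod>b<s. \<integral>\<^sup>+\<omega>. ennreal (r b \<omega>) \<partial>std_field)"
    by (rule P.indep_vars_nn_integral[OF _ indep_vars_blocks[OF rm rr]]) auto
  also have "\<dots> = (\<Prod>b<s. ennreal (integral\<^sup>L std_field (r b)))"
    using ir r0 by (intro prod.cong refl nn_integral_eq_integral) auto
  also have "\<dots> = ennreal (\<Prod>b<s. integral\<^sup>L std_field (r b))"
    by (rule prod_ennreal) (auto simp: Ir0)
  also have "\<dots> \<le> ennreal (\<Prod>b<s. C)"
    using Ir0 le by (intro ennreal_leI prod_mono) auto
  finally have nn: "(\<integral>\<^sup>+\<omega>. ennreal (\<Prod>b<s. r b \<omega>) \<partial>std_field) \<le> ennreal (C ^ s)"
    by simp
  have meas: "(\<lambda>\<omega>. \<Prod>b<s. r b \<omega>) \<in> borel_measurable std_field"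
    using measurable_gauss_field_local[OF rm rr] by (intro borel_measurable_prod) auto
  have prod0: "0 \<le> (\<Prod>b<s. r b \<omega>)" for \<omega>
    using r0 by (intro prod_nonneg) auto
  show int: "integrable std_field (\<lambda>\<omega>. \<Prod>b<s. r b \<omega>)"
    using nn by (intro integrableI_nonneg meas) (auto simp: prod0 top_unique intro: le_less_trans)
  have "0 \<le> C ^ s"
    using Ir0[of 0] le[of 0] by (cases s) auto
  then show "integral\<^sup>L std_field (\<lambda>\<omega>. \<Prod>b<s. r b \<omega>) \<le> C ^ s"
    using nn nn_integral_eq_integral[OF int] prod0 by simp
qed

lemma integral_block_chi_sq_le:
  assumes k: "0 < k" and b: "b < s"
    and X: "2 * real n * \<rho>\<^sup>2 \<le> 1 / 2" and Y: "real m * \<rho>\<^sup>2 \<le> 1 / 2"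
  shows "integrable std_field (\<lambda>\<omega>. (block_mixture n m s k \<rho> 1 b \<omega>)\<^sup>2 / block_mixture n m s k \<rho> (-1) b \<omega>)"
    and "integral\<^sup>L std_field (\<lambda>\<omega>. (block_mixture n m s k \<rho> 1 b \<omega>)\<^sup>2 / block_mixture n m s k \<rho> (-1) b \<omega>)
      \<le> 1 + 32 * (2 * real n * \<rho>\<^sup>2) * (real m * \<rho>\<^sup>2) / real k"
proof -
  let ?f = "block_mixture n m s k \<rho> 1 b" and ?g = "block_mixture n m s k \<rho> (-1) b"
  let ?X = "2 * real n * \<rho>\<^sup>2" and ?Y = "real m * \<rho>\<^sup>2"
  define c where "c = exp (- ((2 * real n + real m) * \<rho>\<^sup>2) / 2)"
  have low: "c \<le> ?g \<omega>" for \<omega>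
    unfolding c_def by (rule block_mixture_lower[OF k b])
  have c0: "0 < c"
    by (simp add: c_def)
  note chi_sq = integral_sq_div_le[OF block_mixture_measurable block_mixture_measurable c0 low
      integral_block_mixture[OF k] integral_block_mixture[OF k] integral_block_mixture_diff_sq(1)[OF k b]]
  then show "integrable std_field (\<lambda>\<omega>. (?f \<omega>)\<^sup>2 / ?g \<omega>)"
    by simp
  have "c = exp (- ((?X + ?Y) / 2))"
    unfolding c_def by (rule arg_cong[where f=exp]) (simp add: field_simps)
  then have inv_c: "1 / c = exp ((?X + ?Y) / 2)"
    by (simp add: exp_minus inverse_eq_divide)
  have "integral\<^sup>L std_field (\<lambda>\<omega>. (?f \<omega>)\<^sup>2 / ?g \<omega>) \<le> 1 + integral\<^sup>L std_field (\<lambda>\<omega>. (?f \<omega> - ?g \<omega>)\<^sup>2) / c"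
    by (rule chi_sq(2))
  also have "integral\<^sup>L std_field (\<lambda>\<omega>. (?f \<omega> - ?g \<omega>)\<^sup>2) / c
      = exp ((?X + ?Y) / 2) * ((exp ?X - exp (- ?X)) * (exp ?Y - exp (- ?Y))) / real k"
    unfolding integral_block_mixture_diff_sq(2)[OF k b] inv_c[symmetric] by simp
  also have "\<dots> \<le> 32 * ?X * ?Y / real k"
    by (intro divide_right_mono sinh_product_le) (use X Y in auto)
  finally show "integral\<^sup>L std_field (\<lambda>\<omega>. (?f \<omega>)\<^sup>2 / ?g \<omega>) \<le> 1 + 32 * ?X * ?Y / real k"
    by simp
qed

text \<open>The null mixture draws \<open>(\<eta>, -\<eta>, \<eta>)\<close> and the alternative \<open>(\<eta>, -\<eta>, -\<eta>)\<close> for a random spike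
  sequence \<open>\<eta>\<close>. Both factorise over the blocks, and the blocks are independent under the reference
  measure, so the \<open>\<chi>\<^sup>2\<close> divergence of the two mixtures is a product of per-block terms.\<close>

lemma integral_sign_mixtures_sq_div_le:
  fixes n m s k :: nat and \<rho> :: real
  assumes k: "0 < k" and X: "2 * real n * \<rho>\<^sup>2 \<le> 1 / 2" and Y: "real m * \<rho>\<^sup>2 \<le> 1 / 2"
  defines "f \<equiv> mixture_lr (active_coords n m (s * k)) (spike_configs s k) (config_mean n m k \<rho> s 1)"
    and "g \<equiv> mixture_lr (active_coords n m (s * k)) (spike_configs s k) (config_mean n m k \<rho> s (-1))"
    and "c \<equiv> 32 * (2 * real n * \<rho>\<^sup>2) * (real m * \<rho>\<^sup>2) / real k"
  shows "integrable std_field (\<lambda>\<omega>. (f \<omega>)\<^sup>2 / g \<omega>)"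
    and "integral\<^sup>L std_field (\<lambda>\<omega>. (f \<omega>)\<^sup>2 / g \<omega>) \<le> (1 + c) ^ s"
proof -
  define r where "r b \<omega> = (block_mixture n m s k \<rho> 1 b \<omega>)\<^sup>2 / block_mixture n m s k \<rho> (-1) b \<omega>" for b \<omega>
  have f_sq_div_g: "(\<lambda>\<omega>. (f \<omega>)\<^sup>2 / g \<omega>) = (\<lambda>\<omega>. \<Prod>b<s. r b \<omega>)"
    unfolding f_def g_def r_def mixture_lr_config_mean[OF k] by (simp add: prod_dividef prod_power_distrib)
  have rm: "r b \<in> borel_measurable (PiM (block_coords k b) (\<lambda>_. borel))" for b
    unfolding r_def[abs_def] using block_mixture_measurable_PiM[of n m s k \<rho> _ b] by measurable
  have rr: "r b (restrict \<omega> (block_coords k b)) = r b \<omega>" for b \<omega>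
    by (simp add: r_def block_mixture_restrict)
  have r0: "0 \<le> r b \<omega>" if "b < s" for b \<omega>
    unfolding r_def by (intro divide_nonneg_pos zero_le_power2 block_mixture_pos[OF k])
  have ir: "integrable std_field (r b)" and Ir: "integral\<^sup>L std_field (r b) \<le> 1 + c" if "b < s" for b
    unfolding r_def[abs_def] c_def using integral_block_chi_sq_le[OF k that X Y] by simp_all
  show "integrable std_field (\<lambda>\<omega>. (f \<omega>)\<^sup>2 / g \<omega>)"
    "integral\<^sup>L std_field (\<lambda>\<omega>. (f \<omega>)\<^sup>2 / g \<omega>) \<le> (1 + c) ^ s"
    unfolding f_sq_div_g using integral_prod_blocks_le[of s r k "1 + c", OF rm rr r0 ir Ir] by auto
qed

lemma l1_sign_mixtures_less_1:
  fixes n m s k :: nat and \<rho> :: real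
  assumes k: "0 < k"
    and X: "2 * real n * \<rho>\<^sup>2 \<le> 1 / 2" and Y: "real m * \<rho>\<^sup>2 \<le> 1 / 2"
    and small: "real s * (2 * real n * \<rho>\<^sup>2) * (real m * \<rho>\<^sup>2) / real k \<le> 1 / 384"
  shows "integral\<^sup>L std_field (\<lambda>\<omega>. \<bar>mixture_lr (active_coords n m (s * k)) (spike_configs s k) (config_mean n m k \<rho> s 1) \<omega>
    - mixture_lr (active_coords n m (s * k)) (spike_configs s k) (config_mean n m k \<rho> s (-1)) \<omega>\<bar>) < 1"
    (is "integral\<^sup>L std_field (\<lambda>\<omega>. \<bar>?f \<omega> - ?g \<omega>\<bar>) < 1")
proof -
  define c where "c = 32 * (2 * real n * \<rho>\<^sup>2) * (real m * \<rho>\<^sup>2) / real k"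
  note chi_sq = integral_sign_mixtures_sq_div_le[OF k X Y, of s, folded c_def]
  have V: "finite (spike_configs s k)" "spike_configs s k \<noteq> {}"
    using spike_configs_nonempty[OF k] by auto
  have gpos: "0 < ?g \<omega>" for \<omega>
    by (rule mixture_lr_pos[OF V])
  have f: "integrable std_field ?f" "integral\<^sup>L std_field ?f = 1"
    and g: "integrable std_field ?g" "integral\<^sup>L std_field ?g = 1"
    using V by (simp_all add: integrable_mixture_lr integral_mixture_lr)
  have "(1 + c) ^ s \<le> exp (real s * c)"
    by (rule one_plus_power_le_exp) (simp add: c_def)
  also have "\<dots> \<le> exp (1 / 12)"
    using small by (simp add: c_def)
  also have "\<dots> \<le> 1 / (1 - 1 / 12)"
    by (rule exp_le_inverse_one_minus) auto
  finally have "integral\<^sup>L std_field (\<lambda>\<omega>. (?f \<omega>)\<^sup>2 / ?g \<omega>) \<le> 12 / 11"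
    using chi_sq(2) by simp
  moreover have sq: "(?f \<omega> - ?g \<omega>)\<^sup>2 / ?g \<omega> = (?f \<omega>)\<^sup>2 / ?g \<omega> - 2 * ?f \<omega> + ?g \<omega>" for \<omega>
    using gpos[of \<omega>] by (simp add: field_simps power2_eq_square)
  ultimately have chi: "integrable std_field (\<lambda>\<omega>. (?f \<omega> - ?g \<omega>)\<^sup>2 / ?g \<omega>)"
    "integral\<^sup>L std_field (\<lambda>\<omega>. (?f \<omega> - ?g \<omega>)\<^sup>2 / ?g \<omega>) \<le> 1 / 11"
    using chi_sq(1) f g by auto
  have "integral\<^sup>L std_field (\<lambda>\<omega>. \<bar>?f \<omega> - ?g \<omega>\<bar>) \<le> sqrt (integral\<^sup>L std_field (\<lambda>\<omega>. (?f \<omega> - ?g \<omega>)\<^sup>2 / ?g \<omega>))"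
    by (rule l1_le_sqrt_chi_sq[OF _ _ gpos g chi(1)]) simp_all
  also have "\<dots> \<le> sqrt (1 / 11)"
    using chi(2) by simp
  also have "\<dots> < 1"
    by simp
  finally show ?thesis .
qed

lemma sign_prior_bound:
  assumes p: "1 \<le> p" "p \<le> 2" and dec: "decseq a" and apos: "\<forall>t. 0 < a t"
    and eps: "0 < \<epsilon>" and n: "0 < n" and m: "0 < m" and good: "good_lfht_test p a \<epsilon> m n \<psi>"
    and s: "0 < s" and k: "0 < k" and skd: "s * k \<le> d"
    and threshold: "192 * \<epsilon>\<^sup>2 \<le> a (d - 1) powr p * real n powr ((p - 2) / 2)"
    and s_ge: "real n * \<epsilon>\<^sup>2 \<le> real s" "real m * \<epsilon>\<^sup>2 \<le> 2 * real s"
    and s_le: "real s \<le> 4 * real n * \<epsilon>\<^sup>2"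
  shows "real s * real k < 48 * (real n * \<epsilon>\<^sup>2) * (real m * \<epsilon>\<^sup>2)"
proof (rule ccontr)
  assume "\<not> ?thesis"
  then have small_prior: "48 * (real n * \<epsilon>\<^sup>2) * (real m * \<epsilon>\<^sup>2) \<le> real s * real k"
    by simp
  define \<rho> where "\<rho> = \<epsilon> / (2 * sqrt (real s))"
  have \<rho>: "0 \<le> \<rho>" "2 * sqrt (real s) * \<rho> = \<epsilon>" "\<rho>\<^sup>2 = \<epsilon>\<^sup>2 / (4 * real s)"
    using eps s by (simp_all add: \<rho>_def power_divide power_mult_distrib)
  have "\<rho>\<^sup>2 \<le> \<epsilon>\<^sup>2 / real s"
    unfolding \<rho>(3) using s by (simp add: divide_left_mono)
  then have \<Gamma>: "spike_seq k \<rho> s v \<in> Gamma_set p a" if "v \<in> spike_configs s k" for v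
    by (rule spike_seq_Gamma_set[OF p dec apos eps n that s skd s_le threshold \<rho>(1)])
  have "1 \<le> integral\<^sup>L std_field (\<lambda>\<omega>. \<bar>mixture_lr (active_coords n m (s * k)) (spike_configs s k)
      (\<lambda>v. lfht_mean n m (spike_seq k \<rho> s v) (\<lambda>t. - spike_seq k \<rho> s v t) (spike_seq k \<rho> s v)) \<omega>
    - mixture_lr (active_coords n m (s * k)) (spike_configs s k)
      (\<lambda>v. lfht_mean n m (spike_seq k \<rho> s v) (\<lambda>t. - spike_seq k \<rho> s v t) (\<lambda>t. - spike_seq k \<rho> s v t)) \<omega>\<bar>)"
    using admissible_spike_seq_uminus[OF _ \<rho>(1,2) \<Gamma>] spike_configs_nonempty[OF k]
    by (intro good_test_mixture_l1_ge_1[OF good n m]) auto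
  moreover have "2 * real n * \<rho>\<^sup>2 \<le> 1 / 2" "real m * \<rho>\<^sup>2 \<le> 1 / 2"
    unfolding \<rho>(3) using s_ge s by (simp_all add: field_simps)
  moreover have "real s * (2 * real n * \<rho>\<^sup>2) * (real m * \<rho>\<^sup>2) / real k \<le> 1 / 384"
    unfolding \<rho>(3) using small_prior s k by (simp add: field_simps power2_eq_square)
  ultimately show False
    using l1_sign_mixtures_less_1[OF k] unfolding config_mean_sign by fastforce
qed

lemma d_l_product_bound:
  assumes p: "1 \<le> p" "p \<le> 2" and dec: "decseq a" and apos: "\<forall>t. 0 < a t" and lim: "a \<longlonglongrightarrow> 0"
    and eps: "0 < \<epsilon>" and n: "0 < n" and m: "0 < m"
    and good: "good_lfht_test p a \<epsilon> m n \<psi>" and m_two_point: "1 \<le> real m * \<epsilon>\<^sup>2"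
    and sqrt_bound: "sqrt (real (d_l p a n \<epsilon>)) \<le> 2 * (real n * \<epsilon>\<^sup>2)"
  shows "real (d_l p a n \<epsilon>) \<le> 96 * (real m * \<epsilon>\<^sup>2) * (real n * \<epsilon>\<^sup>2)"
proof -
  define d where "d = d_l p a n \<epsilon>"
  define x where "x = real n * \<epsilon>\<^sup>2"
  define y where "y = real m * \<epsilon>\<^sup>2"
  have y1: "1 \<le> y" and x0: "0 \<le> x"
    using m_two_point by (simp_all add: x_def y_def)
  have d_sq: "real d \<le> 4 * x\<^sup>2"
    using sqrt_le_D[OF sqrt_bound] by (simp add: d_def x_def power2_eq_square)
  have xy: "x \<le> x * y"
    using mult_left_mono[OF y1 x0] by simp
  consider (small_d) "real d < x" | (large_y) "2 * x < y" | (main) "x \<le> real d" "y \<le> 2 * x"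
    by linarith
  then have "real d \<le> 96 * (x * y)"
  proof cases
    case small_d
    then show ?thesis
      using xy x0 by linarith
  next
    case large_y
    have "x * (2 * x) \<le> x * y"
      using large_y x0 by (intro mult_left_mono) auto
    then show ?thesis
      using d_sq xy x0 by (simp add: power2_eq_square)
  next
    case main
    then have x_half: "1 / 2 \<le> x"
      using y1 by linarith
    then have d1: "1 \<le> d"
      using main by (cases d) auto
    obtain s k where s: "0 < s" and k: "0 < k" and s_ge: "x \<le> real s" and s_le: "real s \<le> x + 1"
      and skd: "s * k \<le> d" and dsk: "real d \<le> 2 * real s * real k"
      using block_partition[of x d] main x_half by auto
    have threshold: "192 * \<epsilon>\<^sup>2 \<le> a (d - 1) powr p * real n powr ((p - 2) / 2)"
      unfolding d_def using d1 by (intro d_l_threshold[OF p(1) apos lim eps n]) (simp add: d_def)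
    have "real s * real k < 48 * x * y"
      using s_ge s_le main x_half unfolding x_def y_def
      by (intro sign_prior_bound[OF p dec apos eps n m good s k skd threshold]) auto
    with dsk show ?thesis
      by simp
  qed
  then show ?thesis
    by (simp add: d_def x_def y_def algebra_simps)
qed

theorem mainTheorem11:
  fixes p \<epsilon> :: real and a :: "nat \<Rightarrow> real" and m n :: nat
    and \<psi> :: "(((nat \<Rightarrow> nat \<Rightarrow> real) \<times> (nat \<Rightarrow> nat \<Rightarrow> real)) \<times> (nat \<Rightarrow> nat \<Rightarrow> real)) \<Rightarrow> nat"
  assumes "1 \<le> p" and "p \<le> 2"
    and "decseq a" and "\<forall>t. 0 < a t" and "a \<longlonglongrightarrow> 0"
    and "0 < \<epsilon>" and "0 < n" and "0 < m"
    and "\<exists>\<theta>1\<in>Gamma_set p a. \<exists>\<theta>2\<in>Gamma_set p a. l2_dist \<theta>1 \<theta>2 \<ge> \<epsilon>"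
    and "good_lfht_test p a \<epsilon> m n \<psi>"
  shows "real m \<ge> 1 / \<epsilon>\<^sup>2
    \<and> real n \<ge> sqrt (real (d_l p a n \<epsilon>)) / (2 * \<epsilon>\<^sup>2)
    \<and> real m * real n \<ge> real (d_l p a n \<epsilon>) / (96 * \<epsilon> ^ 4)"
proof -
  have m_bound: "1 \<le> real m * \<epsilon>\<^sup>2" and n_bound: "1 \<le> 2 * (real n * \<epsilon>\<^sup>2)"
    using two_point_sample_bounds[OF assms(1-4,6-10)] by auto
  have sqrt_bound: "sqrt (real (d_l p a n \<epsilon>)) \<le> 2 * (real n * \<epsilon>\<^sup>2)"
    by (rule sqrt_d_l_bound[OF assms(1-8,10) n_bound])
  have product_bound: "real (d_l p a n \<epsilon>) \<le> 96 * (real m * \<epsilon>\<^sup>2) * (real n * \<epsilon>\<^sup>2)"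
    by (rule d_l_product_bound[OF assms(1-8,10) m_bound sqrt_bound])
  have "0 < \<epsilon>\<^sup>2" and "96 * (real m * \<epsilon>\<^sup>2) * (real n * \<epsilon>\<^sup>2) = real m * real n * (96 * \<epsilon> ^ 4)"
    using assms(6) by (simp_all add: power2_eq_square power4_eq_xxxx)
  then show ?thesis
    using m_bound sqrt_bound product_bound by (simp add: field_simps)
qed

end
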